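(* There is a deterministic polynomial-time algorithm that, given a symmetric positive semidefinite matrix $A\in\mathbb{R}^{n\times n}$ and an integer $1\le k\le n$, outputs a vector $x\in\mathbb{R}^n$ with $\|x\|_2=1$ and $\|x\|_0\le k$ such that $x^{\intercal}Ax\ge n^{-1/3}\cdot \mathrm{OPT}$, where $\mathrm{OPT}=\max_{\|y\|_2=1,\ \|y\|_0\le k} y^{\intercal}Ay$.
   Context: $\|x\|_0$ denotes the number of nonzero entries of $x$. Sparse PCA is the problem of computing (or approximating) $\mathrm{OPT}=\max_{\|y\|_2=1,\|y\|_0\le k} y^{\intercal}Ay$ for a PSD input matrix $A$. *)

theory Defs
  imports Complex_Main
begin

text \<open>An n x n real matrix is represented as a function nat => nat => real, of which only
  the entries with indices below n matter; a vector in R^n as nat => real, only indices below n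
  matter.\<close>

definition quad :: "nat \<Rightarrow> (nat \<Rightarrow> nat \<Rightarrow> real) \<Rightarrow> (nat \<Rightarrow> real) \<Rightarrow> real" where
  "quad n A x = (\<Sum>i<n. \<Sum>j<n. x i * A i j * x j)"

definition sym_psd :: "nat \<Rightarrow> (nat \<Rightarrow> nat \<Rightarrow> real) \<Rightarrow> bool" where
  "sym_psd n A \<longleftrightarrow> (\<forall>i<n. \<forall>j<n. A i j = A j i) \<and> (\<forall>x. quad n A x \<ge> 0)"

definition norm2 :: "nat \<Rightarrow> (nat \<Rightarrow> real) \<Rightarrow> real" where
  "norm2 n x = sqrt (\<Sum>i<n. (x i)\<^sup>2)"

definition norm0 :: "nat \<Rightarrow> (nat \<Rightarrow> real) \<Rightarrow> nat" where
  "norm0 n x = card {i. i < n \<and> x i \<noteq> 0}"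

text \<open>OPT = max over unit vectors y with at most k nonzero entries of y^T A y
  (the maximum is attained by compactness; we write it as a supremum).\<close>
definition sparse_opt :: "nat \<Rightarrow> (nat \<Rightarrow> nat \<Rightarrow> real) \<Rightarrow> nat \<Rightarrow> real" where
  "sparse_opt n A k = Sup {quad n A y | y. norm2 n y = 1 \<and> norm0 n y \<le> k}"

text \<open>Integer registers (directly addressed, used as counters/indices) and an array of
  real registers addressed indirectly by integer expressions.
  Every assignment and every test costs one step.\<close>

datatype iexp = IC int | IR nat | IAdd iexp iexp | ISub iexp iexp

datatype rexp = RC int | RR iexp | RAdd rexp rexp | RSub rexp rexp | RMul rexp rexp
  | RDiv rexp rexp | RSqrt rexp

datatype bexp = ILess iexp iexp | IEq iexp iexp | RLess rexp rexp | REq rexp rexp | BNot bexp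

datatype com = CSkip | ISet nat iexp | RSet iexp rexp | CSeq com com
  | CIf bexp com com | CWhile bexp com

type_synonym state = "(nat \<Rightarrow> int) \<times> (int \<Rightarrow> real)"

fun ieval :: "iexp \<Rightarrow> state \<Rightarrow> int" where
  "ieval (IC c) s = c"
| "ieval (IR r) s = fst s r"
| "ieval (IAdd a b) s = ieval a s + ieval b s"
| "ieval (ISub a b) s = ieval a s - ieval b s"

fun reval :: "rexp \<Rightarrow> state \<Rightarrow> real" where
  "reval (RC c) s = of_int c"
| "reval (RR a) s = snd s (ieval a s)"
| "reval (RAdd a b) s = reval a s + reval b s"
| "reval (RSub a b) s = reval a s - reval b s"
| "reval (RMul a b) s = reval a s * reval b s"
| "reval (RDiv a b) s = reval a s / reval b s"
| "reval (RSqrt a) s = sqrt (reval a s)"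

fun beval :: "bexp \<Rightarrow> state \<Rightarrow> bool" where
  "beval (ILess a b) s = (ieval a s < ieval b s)"
| "beval (IEq a b) s = (ieval a s = ieval b s)"
| "beval (RLess a b) s = (reval a s < reval b s)"
| "beval (REq a b) s = (reval a s = reval b s)"
| "beval (BNot b) s = (\<not> beval b s)"

inductive big_step :: "com \<Rightarrow> state \<Rightarrow> nat \<Rightarrow> state \<Rightarrow> bool" where
  Skip: "big_step CSkip s 0 s"
| ISet: "big_step (ISet r e) s 1 ((fst s)(r := ieval e s), snd s)"
| RSet: "big_step (RSet a e) s 1 (fst s, (snd s)(ieval a s := reval e s))"
| Seq: "big_step c1 s t1 s1 \<Longrightarrow> big_step c2 s1 t2 s2 \<Longrightarrow> big_step (CSeq c1 c2) s (t1 + t2) s2"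
| IfT: "beval b s \<Longrightarrow> big_step c1 s t s' \<Longrightarrow> big_step (CIf b c1 c2) s (Suc t) s'"
| IfF: "\<not> beval b s \<Longrightarrow> big_step c2 s t s' \<Longrightarrow> big_step (CIf b c1 c2) s (Suc t) s'"
| WhileF: "\<not> beval b s \<Longrightarrow> big_step (CWhile b c) s 1 s"
| WhileT: "beval b s \<Longrightarrow> big_step c s t1 s1 \<Longrightarrow> big_step (CWhile b c) s1 t2 s2 \<Longrightarrow>
    big_step (CWhile b c) s (Suc (t1 + t2)) s2"

text \<open>Input encoding: integer register 0 holds n, register 1 holds k, real register i*n+j
  holds A i j (i, j < n); everything else is 0. Output: x_i is read from real register n*n+i.\<close>
definition init_state :: "nat \<Rightarrow> nat \<Rightarrow> (nat \<Rightarrow> nat \<Rightarrow> real) \<Rightarrow> state" where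
  "init_state n k A =
     ((\<lambda>r. if r = 0 then int n else if r = 1 then int k else 0),
      (\<lambda>a. if 0 \<le> a \<and> a < int (n * n) then A (nat a div n) (nat a mod n) else 0))"

definition output_vec :: "nat \<Rightarrow> state \<Rightarrow> (nat \<Rightarrow> real)" where
  "output_vec n s = (\<lambda>i. if i < n then snd s (int (n * n + i)) else 0)"

end

theory Submission
  imports Defs "HOL-Analysis.Convex"
begin

text \<open>The algorithm computes the Rayleigh quotient of n(n + 2) candidate vectors, each with at
  most k nonzero entries, and outputs the best one normalized; let L be its quotient. The
  candidates are the unit vectors e_i, for each row of A its k entries of largest modulus, and
  the n cyclic windows of length k of each power iterate A^(5n) e_i. Let y be a unit vector with
  at most k nonzero entries and lambda = y'Ay.

  Rows: each top-k row candidate has quotient at most L, so every row has mass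
  sum_(j in S) A_ij^2 \<le> L A_ii on any k-set S. With S the support of y, two applications of
  Cauchy--Schwarz turn this into lambda^2 - L lambda \<le> k L^2 / 4, i.e. lambda is at most about
  sqrt k L.

  Windows: the windows cover every index exactly k times, so Cauchy--Schwarz for A gives
  k x'Ax \<le> n L |x|^2 for x = A^m e_i. Summing over i, k tr A^(2m+1) \<le> n L tr A^(2m); since the
  moments tr A^j are log-convex and lambda^(2m) \<le> tr A^(2m), this yields
  (k lambda)^(2m) \<le> n (n L)^(2m), i.e. lambda is at most about (n / k) L.

  The product of the two bounds gives lambda^3 \<le> n L^3.\<close>

section \<open>Quadratic forms\<close>

definition sum_sq :: "nat \<Rightarrow> (nat \<Rightarrow> real) \<Rightarrow> real" where
  "sum_sq n x = (\<Sum>j<n. (x j)\<^sup>2)"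

definition bilin :: "nat \<Rightarrow> (nat \<Rightarrow> nat \<Rightarrow> real) \<Rightarrow> (nat \<Rightarrow> real) \<Rightarrow> (nat \<Rightarrow> real) \<Rightarrow> real" where
  "bilin n A x z = (\<Sum>i<n. \<Sum>j<n. x i * A i j * z j)"

definition mat_vec :: "nat \<Rightarrow> (nat \<Rightarrow> nat \<Rightarrow> real) \<Rightarrow> (nat \<Rightarrow> real) \<Rightarrow> (nat \<Rightarrow> real)" where
  "mat_vec n A x = (\<lambda>i. if i < n then (\<Sum>j<n. A i j * x j) else 0)"

definition unit_vec :: "nat \<Rightarrow> nat \<Rightarrow> real" where
  "unit_vec i = (\<lambda>j. if j = i then 1 else 0)"

lemma quad_eq_bilin: "quad n A x = bilin n A x x"
  by (simp add: quad_def bilin_def)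

lemma bilin_eq_mat_vec: "bilin n A x z = (\<Sum>i<n. x i * mat_vec n A z i)"
  by (simp add: bilin_def mat_vec_def sum_distrib_left mult.assoc)

lemma sum_sq_nonneg: "0 \<le> sum_sq n x"
  by (simp add: sum_sq_def sum_nonneg)

lemma bilin_sym: assumes "sym_psd n A" shows "bilin n A x z = bilin n A z x"
proof -
  have s: "\<And>i j. i < n \<Longrightarrow> j < n \<Longrightarrow> A i j = A j i" using assms by (simp add: sym_psd_def)
  have "bilin n A x z = (\<Sum>i<n. \<Sum>j<n. z j * A j i * x i)"
    unfolding bilin_def by (intro sum.cong refl) (simp add: s)
  also have "\<dots> = bilin n A z x" unfolding bilin_def by (rule sum.swap)
  finally show ?thesis .
qed

lemma quad_nonneg: assumes "sym_psd n A" shows "0 \<le> quad n A x"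
  using assms by (simp add: sym_psd_def)

lemma quad_add_scaled: assumes "sym_psd n A"
  shows "quad n A (\<lambda>j. x j + t * z j) = quad n A x + 2*t*bilin n A x z + t\<^sup>2 * quad n A z"
proof -
  have "quad n A (\<lambda>j. x j + t * z j) = bilin n A x x + t * bilin n A x z + t * bilin n A z x + t\<^sup>2 * bilin n A z z"
    unfolding quad_eq_bilin bilin_def
    by (simp add: algebra_simps power2_eq_square sum.distrib sum_distrib_left)
  then show ?thesis using bilin_sym[OF assms, of z x] by (simp add: quad_eq_bilin)
qed

lemma quadratic_nonneg_discriminant: fixes a b c :: real
  assumes "\<And>t. 0 \<le> a + 2*t*b + t\<^sup>2 * c" and "0 \<le> c"
  shows "b\<^sup>2 \<le> a * c"
proof (cases "c = 0")
  case True
  have "b = 0"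
  proof (rule ccontr)
    assume "b \<noteq> 0"
    have "0 \<le> a + 2*(-(a+1)/(2*b))*b" using assms(1)[of "-(a+1)/(2*b)"] True by simp
    then show False using \<open>b \<noteq> 0\<close> by (simp add: field_simps)
  qed
  then show ?thesis using True by simp
next
  case False
  then have c: "c > 0" using assms(2) by simp
  have "0 \<le> a + 2*(-b/c)*b + (-b/c)\<^sup>2 * c" by (rule assms(1))
  also have "\<dots> = a - b\<^sup>2/c" using c by (simp add: field_simps power2_eq_square)
  finally have "b\<^sup>2 / c \<le> a" by simp
  then show ?thesis using c by (simp add: divide_le_eq mult.commute)
qed

lemma bilin_Cauchy_Schwarz: assumes "sym_psd n A"
  shows "(bilin n A x z)\<^sup>2 \<le> quad n A x * quad n A z"
  by (rule quadratic_nonneg_discriminant) (use quad_add_scaled[OF assms, of x _ z] quad_nonneg[OF assms] in \<open>metis\<close>)+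

lemma sum_unit_vec_left: assumes "i < n" shows "(\<Sum>j<n. unit_vec i j * f j) = f i"
proof -
  have "(\<Sum>j<n. unit_vec i j * f j) = (\<Sum>j<n. if j = i then f j else 0)"
    by (rule sum.cong) (auto simp: unit_vec_def)
  then show ?thesis using assms by simp
qed

lemma sum_unit_vec_right: assumes "i < n" shows "(\<Sum>j<n. f j * unit_vec i j) = f i"
  using sum_unit_vec_left[OF assms, of f] by (simp add: mult.commute)

lemma bilin_unit_vec: "i < n \<Longrightarrow> bilin n A (unit_vec i) z = (\<Sum>j<n. A i j * z j)"
  unfolding bilin_eq_mat_vec by (simp add: sum_unit_vec_left mat_vec_def)

lemma quad_unit_vec: "i < n \<Longrightarrow> quad n A (unit_vec i) = A i i"
  unfolding quad_eq_bilin by (simp add: bilin_unit_vec sum_unit_vec_right)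

lemma sym_psd_diag_nonneg: "sym_psd n A \<Longrightarrow> i < n \<Longrightarrow> 0 \<le> A i i"
  using quad_nonneg[of n A "unit_vec i"] quad_unit_vec by simp

lemma sum_sq_unit_vec: "i < n \<Longrightarrow> sum_sq n (unit_vec i) = 1"
proof -
  assume i: "i < n"
  have "sum_sq n (unit_vec i) = (\<Sum>j<n. if j = i then 1 else 0)"
    unfolding sum_sq_def by (rule sum.cong) (auto simp: unit_vec_def)
  then show ?thesis using i by simp
qed

lemma norm0_unit_vec: "i < n \<Longrightarrow> norm0 n (unit_vec i) = 1"
proof -
  assume i: "i < n"
  have "{j. j < n \<and> unit_vec i j \<noteq> 0} = {i}" using i by (auto simp: unit_vec_def)
  then show ?thesis by (simp add: norm0_def)
qed

lemma bilin_sum_left: "finite T \<Longrightarrow> bilin n A (\<lambda>j. \<Sum>t\<in>T. u t j) z = (\<Sum>t\<in>T. bilin n A (u t) z)"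
  unfolding bilin_def
  by (simp add: sum_distrib_right sum.swap[of _ T "{..<n}"])

lemma bilin_sum_right: "finite T \<Longrightarrow> bilin n A x (\<lambda>j. \<Sum>t\<in>T. u t j) = (\<Sum>t\<in>T. bilin n A x (u t))"
  unfolding bilin_def
  by (simp add: sum_distrib_left sum.swap[of _ T "{..<n}"] mult.assoc)

lemma quad_cong: "(\<And>j. j < n \<Longrightarrow> x j = x' j) \<Longrightarrow> quad n A x = quad n A x'"
  unfolding quad_def by (intro sum.cong refl) auto

lemma quad_scale: "quad n A (\<lambda>j. c * x j) = c\<^sup>2 * quad n A x"
  unfolding quad_def by (simp add: sum_distrib_left power2_eq_square algebra_simps)

lemma quad_eq_0_if_sum_sq_eq_0: assumes "sum_sq n c = 0" shows "quad n A c = 0"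
proof -
  have "\<forall>j\<in>{..<n}. (c j)\<^sup>2 = 0" using assms unfolding sum_sq_def
    by (subst sum_nonneg_eq_0_iff[symmetric]) auto
  then have "\<forall>j<n. c j = 0" by simp
  then show ?thesis by (simp add: quad_def)
qed

section \<open>The k largest entries of a vector\<close>

definition precedes :: "(nat \<Rightarrow> real) \<Rightarrow> nat \<Rightarrow> nat \<Rightarrow> bool" where
  "precedes v a b \<longleftrightarrow> (v b < v a \<or> (v a = v b \<and> a < b))"

definition rank_of :: "nat \<Rightarrow> (nat \<Rightarrow> real) \<Rightarrow> nat \<Rightarrow> nat" where
  "rank_of n v j = card {a. a < n \<and> precedes v a j}"

definition top_indices :: "nat \<Rightarrow> nat \<Rightarrow> (nat \<Rightarrow> real) \<Rightarrow> nat set" where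
  "top_indices n k v = {j. j < n \<and> rank_of n v j < k}"

lemma precedes_irrefl: "\<not> precedes v a a" by (auto simp: precedes_def)

lemma precedes_trans: "precedes v a b \<Longrightarrow> precedes v b c \<Longrightarrow> precedes v a c" by (auto simp: precedes_def)

lemma precedes_total: "a \<noteq> b \<Longrightarrow> precedes v a b \<or> precedes v b a" by (auto simp: precedes_def)

lemma rank_of_less: assumes "a < n" "precedes v a b" shows "rank_of n v a < rank_of n v b"
proof -
  have "{x. x < n \<and> precedes v x a} \<subset> {x. x < n \<and> precedes v x b}"
    using assms precedes_trans precedes_irrefl by blast
  then show ?thesis unfolding rank_of_def by (intro psubset_card_mono) auto
qed

lemma top_indices_upward_closed: "b \<in> top_indices n k v \<Longrightarrow> a < n \<Longrightarrow> precedes v a b \<Longrightarrow> a \<in> top_indices n k v"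
  using rank_of_less by (fastforce simp: top_indices_def)

lemma top_indices_subset: "top_indices n k v \<subseteq> {..<n}" by (auto simp: top_indices_def)

lemma card_top_indices_le: "card (top_indices n k v) \<le> k"
proof (cases "top_indices n k v = {}")
  case True then show ?thesis by simp
next
  case False
  let ?U = "top_indices n k v"
  have fin: "finite ?U" by (rule finite_subset[OF top_indices_subset finite_lessThan])
  obtain j0 where j0a: "j0 \<in> ?U" and j0m: "Max (rank_of n v ` ?U) = rank_of n v j0"
    using obtains_MAX[OF fin False, of "rank_of n v"] by blast
  have j0: "j0 \<in> ?U" "\<forall>u\<in>?U. rank_of n v u \<le> rank_of n v j0"
    using j0a j0m fin by (auto simp flip: j0m)
  have sub: "?U - {j0} \<subseteq> {a. a < n \<and> precedes v a j0}"
  proof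
    fix u assume u: "u \<in> ?U - {j0}"
    then have "u < n" "u \<noteq> j0" by (auto simp: top_indices_def)
    have "\<not> precedes v j0 u"
    proof
      assume "precedes v j0 u"
      then have "rank_of n v j0 < rank_of n v u" using rank_of_less[of j0 n v u] j0(1) by (simp add: top_indices_def)
      then show False using j0(2) u by auto
    qed
    then show "u \<in> {a. a < n \<and> precedes v a j0}" using precedes_total[OF \<open>u \<noteq> j0\<close>] \<open>u < n\<close> by auto
  qed
  have "card (?U - {j0}) \<le> rank_of n v j0" unfolding rank_of_def by (rule card_mono[OF _ sub]) simp
  moreover have "rank_of n v j0 < k" using j0 by (simp add: top_indices_def)
  moreover have "card ?U = card (?U - {j0}) + 1" using j0(1) fin
    using card_Suc_Diff1[OF fin j0(1)] by simp
  ultimately show ?thesis by simp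
qed

lemma card_top_indices_ge: assumes "k \<le> n" shows "k \<le> card (top_indices n k v)"
proof (cases "top_indices n k v = {..<n}")
  case True then show ?thesis using assms by simp
next
  case False
  let ?U = "top_indices n k v"
  let ?C = "{..<n} - ?U"
  have ne: "?C \<noteq> {}" using False top_indices_subset by blast
  have fC: "finite ?C" by simp
  obtain j1 where j1a: "j1 \<in> ?C" and j1m: "Min (rank_of n v ` ?C) = rank_of n v j1"
    using obtains_MIN[OF fC ne, of "rank_of n v"] by blast
  have j1: "j1 \<in> ?C" "\<forall>u\<in>?C. rank_of n v j1 \<le> rank_of n v u"
    using j1a j1m fC by (auto simp flip: j1m)
  have sub: "{a. a < n \<and> precedes v a j1} \<subseteq> ?U"
  proof
    fix a assume a: "a \<in> {a. a < n \<and> precedes v a j1}"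
    show "a \<in> ?U"
    proof (rule ccontr)
      assume "a \<notin> ?U"
      then have "a \<in> ?C" using a by auto
      then have "rank_of n v j1 \<le> rank_of n v a" using j1 by auto
      moreover have "rank_of n v a < rank_of n v j1" using rank_of_less a by auto
      ultimately show False by simp
    qed
  qed
  have "rank_of n v j1 \<le> card ?U" unfolding rank_of_def
    by (rule card_mono[OF finite_subset[OF top_indices_subset finite_lessThan] sub])
  moreover have "k \<le> rank_of n v j1" using j1 by (auto simp: top_indices_def)
  ultimately show ?thesis by simp
qed

lemma top_indices_dominate: assumes "u \<in> top_indices n k v" "j < n" "j \<notin> top_indices n k v" shows "v j \<le> v u"
proof -
  have "u \<noteq> j" using assms by auto
  have "\<not> precedes v j u" using top_indices_upward_closed[OF assms(1) assms(2)] assms(3) by blast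
  then have "precedes v u j" using precedes_total[OF \<open>u \<noteq> j\<close>] by auto
  then show ?thesis by (auto simp: precedes_def)
qed

lemma sum_le_sum_top_indices:
  assumes S: "S \<subseteq> {..<n}" "card S \<le> k" and kn: "k \<le> n" and nn: "\<And>j. 0 \<le> v j"
  shows "sum v S \<le> sum v (top_indices n k v)"
proof -
  let ?U = "top_indices n k v"
  have fS: "finite S" using S(1) finite_subset by auto
  have fU: "finite ?U" by (rule finite_subset[OF top_indices_subset finite_lessThan])
  have cSU: "card S \<le> card ?U" using S(2) card_top_indices_ge[OF kn, of v] by simp
  have c1: "card S = card (S \<inter> ?U) + card (S - ?U)"
    using fS by (rule card_Int_Diff)
  have c2: "card ?U = card (S \<inter> ?U) + card (?U - S)"
    using card_Int_Diff[OF fU, of S] by (simp add: Int_commute)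
  have cc: "card (S - ?U) \<le> card (?U - S)" using c1 c2 cSU by simp
  have s1: "sum v S = sum v (S \<inter> ?U) + sum v (S - ?U)"
    using fS by (rule sum.Int_Diff)
  have s2: "sum v ?U = sum v (S \<inter> ?U) + sum v (?U - S)"
    using sum.Int_Diff[OF fU, of v S] by (simp add: Int_commute)
  have "sum v (S - ?U) \<le> sum v (?U - S)"
  proof (cases "?U - S = {}")
    case True
    then have "card (S - ?U) = 0" using cc by (metis card.empty le_zero_eq)
    then have "S - ?U = {}" using fS by simp
    then show ?thesis using True by simp
  next
    case False
    define m where "m = Min (v ` (?U - S))"
    have fin: "finite (v ` (?U - S))" using fU by simp
    have up: "\<forall>j\<in>S - ?U. v j \<le> m"
    proof
      fix j assume j: "j \<in> S - ?U"
      then have "j < n" using S by auto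
      show "v j \<le> m" unfolding m_def
        using Min_ge_iff[OF fin] False top_indices_dominate[of _ n k v j] j \<open>j < n\<close> by auto
    qed
    have lo: "\<forall>u\<in>?U - S. m \<le> v u" unfolding m_def using fin by auto
    have "m \<ge> 0" unfolding m_def using fin False nn by (auto simp: Min_ge_iff)
    have "sum v (S - ?U) \<le> of_nat (card (S - ?U)) * m" by (rule sum_bounded_above) (use up in auto)
    also have "\<dots> \<le> of_nat (card (?U - S)) * m" using cc \<open>m \<ge> 0\<close> by (simp add: mult_right_mono)
    also have "\<dots> \<le> sum v (?U - S)" by (rule sum_bounded_below) (use lo in auto)
    finally show ?thesis .
  qed
  then show ?thesis using s1 s2 by simp
qed

section \<open>Row candidates\<close>

definition row_sq :: "(nat \<Rightarrow> nat \<Rightarrow> real) \<Rightarrow> nat \<Rightarrow> nat \<Rightarrow> real" where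
  "row_sq A i = (\<lambda>l. A i l * A i l)"

definition row_top :: "nat \<Rightarrow> nat \<Rightarrow> (nat \<Rightarrow> nat \<Rightarrow> real) \<Rightarrow> nat \<Rightarrow> nat \<Rightarrow> real" where
  "row_top n k A i = (\<lambda>j. if j < n \<and> rank_of n (row_sq A i) j < k then A i j else 0)"

lemma norm0_row_top: "norm0 n (row_top n k A i) \<le> k"
proof -
  have "norm0 n (row_top n k A i) \<le> card (top_indices n k (row_sq A i))"
    unfolding norm0_def by (rule card_mono) (auto simp: row_top_def top_indices_def)
  also have "\<dots> \<le> k" by (rule card_top_indices_le)
  finally show ?thesis .
qed

text \<open>For the top-k part z of row i we have e_i'Az = |z|^2, so Cauchy--Schwarz for A gives
  |z|^4 \<le> A_ii z'Az \<le> A_ii L |z|^2.\<close>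
lemma row_top_mass_bound:
  assumes psd: "sym_psd n A" and i: "i < n" and kn: "k \<le> n"
    and hyp: "quad n A (row_top n k A i) \<le> L * sum_sq n (row_top n k A i)"
    and S: "S \<subseteq> {..<n}" "card S \<le> k" and L: "0 \<le> L"
  shows "(\<Sum>j\<in>S. (A i j)\<^sup>2) \<le> L * A i i"
proof -
  let ?z = "row_top n k A i"
  let ?U = "top_indices n k (row_sq A i)"
  have ssz: "sum_sq n ?z = (\<Sum>j\<in>?U. (A i j)\<^sup>2)"
    unfolding sum_sq_def row_top_def top_indices_def
    by (rule sum.mono_neutral_cong_right) auto
  have bz: "bilin n A (unit_vec i) ?z = sum_sq n ?z"
    unfolding bilin_unit_vec[OF i] sum_sq_def row_top_def
    by (rule sum.cong) (auto simp: power2_eq_square)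
  have cs: "(sum_sq n ?z)\<^sup>2 \<le> A i i * quad n A ?z"
    using bilin_Cauchy_Schwarz[OF psd, of "unit_vec i" ?z] bz quad_unit_vec[OF i] by simp
  have aii: "0 \<le> A i i" by (rule sym_psd_diag_nonneg[OF psd i])
  have "sum_sq n ?z \<le> L * A i i"
  proof (cases "sum_sq n ?z = 0")
    case True
    have "0 \<le> L * A i i" using L aii by simp
    then show ?thesis using True by simp
  next
    case False
    then have pos: "0 < sum_sq n ?z" using sum_sq_nonneg[of n ?z] by simp
    have "(sum_sq n ?z)\<^sup>2 \<le> A i i * (L * sum_sq n ?z)"
      using cs hyp aii mult_left_mono order_trans by blast
    then have "sum_sq n ?z * sum_sq n ?z \<le> (L * A i i) * sum_sq n ?z" by (simp add: power2_eq_square algebra_simps)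
    then show ?thesis using pos by simp
  qed
  moreover have "(\<Sum>j\<in>S. (A i j)\<^sup>2) \<le> (\<Sum>j\<in>?U. (A i j)\<^sup>2)"
    using sum_le_sum_top_indices[OF S kn, of "row_sq A i"] by (simp add: row_sq_def power2_eq_square)
  ultimately show ?thesis using ssz by simp
qed

lemma row_residual_bound:
  fixes a y :: "nat \<Rightarrow> real"
  assumes S: "finite S" "i \<in> S" and y: "(\<Sum>j\<in>S. (y j)\<^sup>2) = 1"
  shows "(\<Sum>j\<in>S. a j * y j)\<^sup>2 + (a i - (\<Sum>j\<in>S. a j * y j) * y i)\<^sup>2 \<le> (\<Sum>j\<in>S. (a j)\<^sup>2)"
proof -
  define g where "g = (\<Sum>j\<in>S. a j * y j)"
  have "(\<Sum>j\<in>S. (a j - g * y j)\<^sup>2)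
      = (\<Sum>j\<in>S. (a j)\<^sup>2) - 2 * g * (\<Sum>j\<in>S. a j * y j) + g\<^sup>2 * (\<Sum>j\<in>S. (y j)\<^sup>2)"
    by (simp add: power2_eq_square algebra_simps sum.distrib sum_subtractf sum_distrib_left)
  also have "\<dots> = (\<Sum>j\<in>S. (a j)\<^sup>2) - g\<^sup>2"
    by (simp add: y flip: g_def) (simp add: power2_eq_square)
  finally have "(\<Sum>j\<in>S. (a j - g * y j)\<^sup>2) = (\<Sum>j\<in>S. (a j)\<^sup>2) - g\<^sup>2" .
  moreover have "(a i - g * y i)\<^sup>2 \<le> (\<Sum>j\<in>S. (a j - g * y j)\<^sup>2)"
    by (rule member_le_sum[OF S(2) _ S(1), where f = "\<lambda>j. (a j - g * y j)\<^sup>2"]) simp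
  ultimately show ?thesis by (simp add: g_def)
qed

lemma quadratic_bound_from_trace:
  fixes k lam t L :: real
  assumes k: "0 < k" and h: "k * lam\<^sup>2 + (t - lam)\<^sup>2 \<le> k * L * t"
  shows "lam\<^sup>2 - L * lam \<le> k * L\<^sup>2 / 4"
proof -
  have "0 \<le> (t - lam - k * L / 2)\<^sup>2" by simp
  then have "k * (lam\<^sup>2 - L * lam) \<le> k * (k * L\<^sup>2 / 4)"
    using h by (simp add: power2_eq_square algebra_simps)
  then show ?thesis using k by simp
qed

text \<open>With y supported on S, g = A y and t the trace of A restricted to S, Cauchy--Schwarz
  gives (y'Ay)^2 \<le> sum of g_i^2 and (t - y'Ay)^2 \<le> k * sum of (A_ii - g_i y_i)^2; the row
  bound controls both sums together.\<close>
lemma rows_quad_bound: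
  assumes psd: "sym_psd n A" and ssy: "sum_sq n y = 1"
    and cS: "card {j. j < n \<and> y j \<noteq> 0} \<le> k"
    and R: "\<And>i S. i < n \<Longrightarrow> S \<subseteq> {..<n} \<Longrightarrow> card S \<le> k \<Longrightarrow> (\<Sum>j\<in>S. (A i j)\<^sup>2) \<le> L * A i i"
  shows "(quad n A y)\<^sup>2 - L * quad n A y \<le> real k * L\<^sup>2 / 4"
proof -
  define S where "S = {j. j < n \<and> y j \<noteq> 0}"
  define g where "g i = (\<Sum>j\<in>S. A i j * y j)" for i
  define lam where "lam = quad n A y"
  define t where "t = (\<Sum>i\<in>S. A i i)"
  define X where "X = (\<Sum>i\<in>S. (A i i - g i * y i)\<^sup>2)"
  have fS: "finite S" and Ssub: "S \<subseteq> {..<n}" by (auto simp: S_def)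
  have on_S: "(\<Sum>j<n. f j) = (\<Sum>j\<in>S. f j)" if "\<And>j. y j = 0 \<Longrightarrow> f j = 0" for f
    by (rule sum.mono_neutral_cong_right) (use that in \<open>auto simp: S_def\<close>)
  have lam: "lam = (\<Sum>i\<in>S. y i * g i)"
    unfolding lam_def quad_def g_def
    by (subst on_S) (simp_all add: on_S sum_distrib_left mult.assoc)
  have y1: "(\<Sum>i\<in>S. (y i)\<^sup>2) = 1"
    using ssy on_S[of "\<lambda>j. (y j)\<^sup>2"] by (simp add: sum_sq_def)
  have "(\<Sum>i\<in>S. (g i)\<^sup>2) + X \<le> (\<Sum>i\<in>S. \<Sum>j\<in>S. (A i j)\<^sup>2)"
    unfolding X_def sum.distrib[symmetric] g_def
    by (rule sum_mono) (rule row_residual_bound[OF fS _ y1])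
  also have "\<dots> \<le> (\<Sum>i\<in>S. L * A i i)"
    by (rule sum_mono) (use R Ssub cS in \<open>auto simp: S_def\<close>)
  finally have rows: "(\<Sum>i\<in>S. (g i)\<^sup>2) + X \<le> L * t"
    by (simp add: t_def sum_distrib_left)
  have "lam\<^sup>2 \<le> (\<Sum>i\<in>S. (g i)\<^sup>2)"
    using Cauchy_Schwarz_ineq_sum[of y g S] lam y1 by simp
  with rows have main: "lam\<^sup>2 + X \<le> L * t" by simp
  have "(t - lam)\<^sup>2 = (\<Sum>i\<in>S. 1 * (A i i - g i * y i))\<^sup>2"
    by (simp add: t_def lam sum_subtractf mult.commute)
  also have "\<dots> \<le> real (card S) * X"
    using Cauchy_Schwarz_ineq_sum[of "\<lambda>_. 1" _ S] by (simp add: X_def)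
  also have "\<dots> \<le> real k * X"
    using cS by (intro mult_right_mono) (auto simp: S_def X_def sum_nonneg)
  finally have "real k * lam\<^sup>2 + (t - lam)\<^sup>2 \<le> real k * L * t"
    using main mult_left_mono[OF main, of "real k"] by (simp add: algebra_simps)
  moreover have "0 < real k"
  proof -
    have "S \<noteq> {}" using y1 by auto
    then have "0 < card S" using fS by (simp add: card_gt_0_iff)
    then show ?thesis using cS by (simp add: S_def)
  qed
  ultimately show ?thesis using quadratic_bound_from_trace by (simp add: lam_def)
qed

section \<open>Power iteration and log-convex moments\<close>

definition pow_vec :: "nat \<Rightarrow> (nat \<Rightarrow> nat \<Rightarrow> real) \<Rightarrow> (nat \<Rightarrow> real) \<Rightarrow> nat \<Rightarrow> (nat \<Rightarrow> real)" where
  "pow_vec n A x l = (mat_vec n A ^^ l) x"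

text \<open>moment n A v j is v'A^j v, written as |A^l v|^2 or as (A^l v)'A(A^l v) according to the parity
  of j, so that Cauchy--Schwarz applies directly.\<close>
definition moment :: "nat \<Rightarrow> (nat \<Rightarrow> nat \<Rightarrow> real) \<Rightarrow> (nat \<Rightarrow> real) \<Rightarrow> nat \<Rightarrow> real" where
  "moment n A v j = (if even j then sum_sq n (pow_vec n A v (j div 2)) else quad n A (pow_vec n A v (j div 2)))"

lemma pow_vec_0[simp]: "pow_vec n A x 0 = x" by (simp add: pow_vec_def)

lemma pow_vec_Suc[simp]: "pow_vec n A x (Suc l) = mat_vec n A (pow_vec n A x l)" by (simp add: pow_vec_def)

lemma quad_eq_mat_vec: "quad n A x = (\<Sum>i<n. x i * mat_vec n A x i)"
  by (simp add: quad_eq_bilin bilin_eq_mat_vec)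

lemma sum_sq_mat_vec: "sum_sq n (mat_vec n A x) = bilin n A (mat_vec n A x) x"
  by (simp add: bilin_eq_mat_vec sum_sq_def power2_eq_square)

lemma moment_nonneg: "sym_psd n A \<Longrightarrow> 0 \<le> moment n A v j"
  by (simp add: moment_def sum_sq_nonneg quad_nonneg)

lemma moment_log_convex: assumes psd: "sym_psd n A"
  shows "(moment n A v (Suc j))\<^sup>2 \<le> moment n A v j * moment n A v (Suc (Suc j))"
proof (cases "even j")
  case True
  then obtain l where j: "j = 2 * l" by blast
  let ?p = "pow_vec n A v l"
  have "(quad n A ?p)\<^sup>2 \<le> sum_sq n ?p * sum_sq n (mat_vec n A ?p)"
    unfolding quad_eq_mat_vec sum_sq_def by (rule Cauchy_Schwarz_ineq_sum)
  moreover have "Suc (Suc (2 * l)) div 2 = Suc l" by simp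
  ultimately show ?thesis using j by (simp add: moment_def)
next
  case False
  then obtain l where j: "j = 2 * l + 1" by (metis oddE)
  let ?p = "pow_vec n A v l"
  have "(bilin n A (mat_vec n A ?p) ?p)\<^sup>2 \<le> quad n A ?p * quad n A (mat_vec n A ?p)"
    using bilin_Cauchy_Schwarz[OF psd, of "mat_vec n A ?p" ?p] by (simp add: mult.commute)
  moreover have "Suc (2 * l + 1) div 2 = Suc l" "Suc (Suc (2 * l + 1)) div 2 = Suc l" by simp_all
  moreover have "(2 * l + 1) div 2 = l" by simp
  ultimately show ?thesis using j by (simp add: moment_def sum_sq_mat_vec)
qed

lemma sum_log_convex:
  fixes a b c :: "'i \<Rightarrow> real"
  assumes "\<And>i. i \<in> I \<Longrightarrow> (b i)\<^sup>2 \<le> a i * c i" "\<And>i. i \<in> I \<Longrightarrow> 0 \<le> a i" "\<And>i. i \<in> I \<Longrightarrow> 0 \<le> c i"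
  shows "(sum b I)\<^sup>2 \<le> sum a I * sum c I"
proof -
  have "\<bar>sum b I\<bar> \<le> (\<Sum>i\<in>I. sqrt (a i) * sqrt (c i))"
  proof -
    have "\<bar>sum b I\<bar> \<le> (\<Sum>i\<in>I. \<bar>b i\<bar>)" by (rule sum_abs)
    also have "\<dots> \<le> (\<Sum>i\<in>I. sqrt (a i) * sqrt (c i))"
    proof (rule sum_mono)
      fix i assume i: "i \<in> I"
      have "\<bar>b i\<bar> = sqrt ((b i)\<^sup>2)" by simp
      also have "\<dots> \<le> sqrt (a i * c i)" using assms(1)[OF i] by (rule real_sqrt_le_mono)
      also have "\<dots> = sqrt (a i) * sqrt (c i)" by (simp add: real_sqrt_mult)
      finally show "\<bar>b i\<bar> \<le> sqrt (a i) * sqrt (c i)" .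
    qed
    finally show ?thesis .
  qed
  then have "(sum b I)\<^sup>2 \<le> (\<Sum>i\<in>I. sqrt (a i) * sqrt (c i))\<^sup>2"
    by (metis abs_le_square_iff abs_of_nonneg abs_ge_zero order_trans abs_idempotent power2_abs)
  also have "\<dots> \<le> (\<Sum>i\<in>I. (sqrt (a i))\<^sup>2) * (\<Sum>i\<in>I. (sqrt (c i))\<^sup>2)"
    by (rule Cauchy_Schwarz_ineq_sum)
  also have "\<dots> = sum a I * sum c I" using assms(2,3) by simp
  finally show ?thesis .
qed

lemma log_convex_zero_propagates:
  fixes f :: "nat \<Rightarrow> real"
  assumes lc: "\<And>j. (f (Suc j))\<^sup>2 \<le> f j * f (Suc (Suc j))" and nn: "\<And>j. 0 \<le> f j"
    and z: "f j = 0"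
  shows "f (j + d) = 0"
proof (induction d)
  case 0 then show ?case using z by simp
next
  case (Suc d)
  have "(f (Suc (j + d)))\<^sup>2 \<le> 0" using lc[of "j + d"] Suc by simp
  then show ?case by simp
qed

lemma log_convex_upper:
  fixes f :: "nat \<Rightarrow> real"
  assumes lc: "\<And>j. (f (Suc j))\<^sup>2 \<le> f j * f (Suc (Suc j))" and nn: "\<And>j. 0 \<le> f j"
    and pos: "0 < f N"
  shows "f N \<le> f 0 * (f (Suc N) / f N) ^ N"
proof -
  define r where "r = f (Suc N) / f N"
  have fpos: "0 < f j" if "j \<le> N" for j
  proof (rule ccontr)
    assume "\<not> 0 < f j"
    then have "f j = 0" using nn[of j] by simp
    then have "f (j + (N - j)) = 0" by (rule log_convex_zero_propagates[of f, OF lc nn])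
    then show False using pos that by simp
  qed
  have r0: "0 \<le> r" unfolding r_def using nn pos by simp
  have ratio: "f (Suc (N - d)) \<le> r * f (N - d)" if "d \<le> N" for d
    using that
  proof (induction d)
    case 0 then show ?case using pos by (simp add: r_def)
  next
    case (Suc d)
    let ?j = "N - Suc d"
    have j1: "Suc ?j = N - d" using Suc.prems by simp
    have p0: "0 < f ?j" by (rule fpos) simp
    have p1: "0 < f (Suc ?j)" by (rule fpos) (use Suc.prems in simp)
    have ih: "f (Suc (Suc ?j)) \<le> r * f (Suc ?j)" using Suc j1 by simp
    have "(f (Suc ?j))\<^sup>2 \<le> f ?j * f (Suc (Suc ?j))" by (rule lc)
    also have "\<dots> \<le> f ?j * (r * f (Suc ?j))" using ih p0 by (simp add: mult_left_mono)
    finally have "f (Suc ?j) * f (Suc ?j) \<le> (r * f ?j) * f (Suc ?j)"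
      by (simp add: power2_eq_square algebra_simps)
    then show ?case using p1 by simp
  qed
  have "f j \<le> f 0 * r ^ j" if "j \<le> N" for j
    using that
  proof (induction j)
    case 0 then show ?case by simp
  next
    case (Suc j)
    have "f (Suc j) \<le> r * f j" using ratio[of "N - j"] Suc.prems by simp
    also have "\<dots> \<le> r * (f 0 * r ^ j)" using Suc r0 by (simp add: mult_left_mono)
    finally show ?case by (simp add: algebra_simps)
  qed
  then show ?thesis by (simp add: r_def)
qed

lemma log_convex_lower:
  fixes f :: "nat \<Rightarrow> real"
  assumes lc: "\<And>j. (f (Suc j))\<^sup>2 \<le> f j * f (Suc (Suc j))" and nn: "\<And>j. 0 \<le> f j"
    and f0: "f 0 = 1"
  shows "(f 1) ^ j \<le> f j"
proof (cases "f 1 = 0")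
  case True
  then show ?thesis using nn[of j] f0 by (cases j) auto
next
  case False
  define a where "a = f 1"
  have a: "0 < a" using False nn[of 1] by (simp add: a_def)
  have P: "0 < f j \<and> 0 < f (Suc j) \<and> a * f j \<le> f (Suc j)" for j
  proof (induction j)
    case 0 then show ?case using a f0 by (simp add: a_def)
  next
    case (Suc j)
    then have p0: "0 < f j" and p1: "0 < f (Suc j)" and h: "a * f j \<le> f (Suc j)" by auto
    have "f (Suc j) * (a * f j) \<le> f (Suc j) * f (Suc j)" using h p1 by (simp add: mult_left_mono)
    also have "\<dots> \<le> f j * f (Suc (Suc j))" using lc[of j] by (simp add: power2_eq_square)
    finally have "f j * (a * f (Suc j)) \<le> f j * f (Suc (Suc j))" by (simp add: algebra_simps)
    then have "a * f (Suc j) \<le> f (Suc (Suc j))" using p0 by simp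
    moreover have "0 < a * f (Suc j)" using a p1 by simp
    ultimately show ?case using p1 by simp
  qed
  have "a ^ j \<le> f j" for j
  proof (induction j)
    case 0 then show ?case using f0 by simp
  next
    case (Suc j)
    have "a ^ Suc j = a * a ^ j" by simp
    also have "\<dots> \<le> a * f j" using Suc a by simp
    also have "\<dots> \<le> f (Suc j)" using P[of j] by simp
    finally show ?case .
  qed
  then show ?thesis by (simp add: a_def)
qed

definition trace_moment :: "nat \<Rightarrow> (nat \<Rightarrow> nat \<Rightarrow> real) \<Rightarrow> nat \<Rightarrow> real" where
  "trace_moment n A j = (\<Sum>i<n. moment n A (unit_vec i) j)"

lemma pow_vec_linear: "j < n \<Longrightarrow> pow_vec n A y l j = (\<Sum>i<n. y i * pow_vec n A (unit_vec i) l j)"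
proof (induction l arbitrary: j)
  case 0
  have "(\<Sum>i<n. y i * unit_vec i j) = (\<Sum>i<n. if i = j then y i else 0)"
    by (rule sum.cong) (auto simp: unit_vec_def)
  then show ?case using 0 by simp
next
  case (Suc l)
  have "pow_vec n A y (Suc l) j = (\<Sum>q<n. A j q * pow_vec n A y l q)" using Suc.prems by (simp add: mat_vec_def)
  also have "\<dots> = (\<Sum>q<n. A j q * (\<Sum>i<n. y i * pow_vec n A (unit_vec i) l q))" by (simp add: Suc.IH)
  also have "\<dots> = (\<Sum>q<n. \<Sum>i<n. y i * (A j q * pow_vec n A (unit_vec i) l q))"
    by (simp add: sum_distrib_left algebra_simps)
  also have "\<dots> = (\<Sum>i<n. \<Sum>q<n. y i * (A j q * pow_vec n A (unit_vec i) l q))" by (rule sum.swap)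
  also have "\<dots> = (\<Sum>i<n. y i * pow_vec n A (unit_vec i) (Suc l) j)"
    using Suc.prems by (simp add: mat_vec_def sum_distrib_left)
  finally show ?case .
qed

lemma sum_sq_pow_vec_le_trace: assumes "sum_sq n y = 1"
  shows "sum_sq n (pow_vec n A y l) \<le> (\<Sum>i<n. sum_sq n (pow_vec n A (unit_vec i) l))"
proof -
  have "sum_sq n (pow_vec n A y l) = (\<Sum>j<n. (\<Sum>i<n. y i * pow_vec n A (unit_vec i) l j)\<^sup>2)"
    unfolding sum_sq_def by (rule sum.cong) (auto simp: pow_vec_linear)
  also have "\<dots> \<le> (\<Sum>j<n. (\<Sum>i<n. (y i)\<^sup>2) * (\<Sum>i<n. (pow_vec n A (unit_vec i) l j)\<^sup>2))"
    by (rule sum_mono) (rule Cauchy_Schwarz_ineq_sum)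
  also have "\<dots> = (\<Sum>j<n. \<Sum>i<n. (pow_vec n A (unit_vec i) l j)\<^sup>2)" using assms by (simp add: sum_sq_def)
  also have "\<dots> = (\<Sum>i<n. sum_sq n (pow_vec n A (unit_vec i) l))" unfolding sum_sq_def by (rule sum.swap)
  finally show ?thesis .
qed

lemma trace_moment_log_convex: "sym_psd n A \<Longrightarrow> (trace_moment n A (Suc j))\<^sup>2 \<le> trace_moment n A j * trace_moment n A (Suc (Suc j))"
  unfolding trace_moment_def by (rule sum_log_convex) (auto simp: moment_log_convex moment_nonneg)

lemma trace_moment_nonneg: "sym_psd n A \<Longrightarrow> 0 \<le> trace_moment n A j"
  unfolding trace_moment_def by (simp add: sum_nonneg moment_nonneg)

lemma trace_moment_0: "trace_moment n A 0 = real n"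
  by (simp add: trace_moment_def moment_def sum_sq_unit_vec)

lemma trace_moment_le_ratio_pow:
  assumes psd: "sym_psd n A" and pos: "0 < trace_moment n A j"
  shows "trace_moment n A j \<le> real n * (trace_moment n A (Suc j) / trace_moment n A j) ^ j"
  using log_convex_upper[of "trace_moment n A", OF trace_moment_log_convex[OF psd]
      trace_moment_nonneg[OF psd] pos]
  by (simp add: trace_moment_0)

lemma quad_pow_le_trace_moment:
  assumes psd: "sym_psd n A" and y: "sum_sq n y = 1"
  shows "(quad n A y) ^ (2 * m) \<le> trace_moment n A (2 * m)"
proof -
  have "moment n A y 0 = 1" and "moment n A y 1 = quad n A y"
    using y by (simp_all add: moment_def)
  then have "(quad n A y) ^ (2 * m) \<le> moment n A y (2 * m)"
    using log_convex_lower[of "moment n A y", OF moment_log_convex[OF psd] moment_nonneg[OF psd]]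
    by simp
  also have "\<dots> = sum_sq n (pow_vec n A y m)" by (simp add: moment_def)
  also have "\<dots> \<le> (\<Sum>i<n. sum_sq n (pow_vec n A (unit_vec i) m))"
    by (rule sum_sq_pow_vec_le_trace[OF y])
  also have "\<dots> = trace_moment n A (2 * m)" by (simp add: trace_moment_def moment_def)
  finally show ?thesis .
qed

section \<open>Window candidates\<close>

definition in_window :: "nat \<Rightarrow> nat \<Rightarrow> nat \<Rightarrow> nat \<Rightarrow> bool" where
  "in_window n k t j \<longleftrightarrow> (t \<le> j \<and> j < t + k) \<or> (j < t \<and> j + n < t + k)"

definition window :: "nat \<Rightarrow> nat \<Rightarrow> nat \<Rightarrow> (nat \<Rightarrow> real) \<Rightarrow> nat \<Rightarrow> real" where
  "window n k t x = (\<lambda>j. if j < n \<and> in_window n k t j then x j else 0)"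

lemma card_windows_containing: assumes "j < n" "k \<le> n" shows "card {t. t < n \<and> in_window n k t j} = k"
proof -
  have eq: "{t. t < n \<and> in_window n k t j} = {Suc j - k..<Suc j} \<union> {Suc (j + n - k)..<n}"
    using assms by (auto simp: in_window_def)
  have "card ({Suc j - k..<Suc j} \<union> {Suc (j + n - k)..<n}) = card {Suc j - k..<Suc j} + card {Suc (j + n - k)..<n}"
    by (rule card_Un_disjoint) (use assms in auto)
  then show ?thesis using eq assms by simp
qed

lemma card_window_support: assumes "t < n" shows "card {j. j < n \<and> in_window n k t j} \<le> k"
proof -
  have sub: "{j. j < n \<and> in_window n k t j} \<subseteq> {t..<min n (t + k)} \<union> {..<t + k - n}"
    by (auto simp: in_window_def)
  have "card {j. j < n \<and> in_window n k t j} \<le> card ({t..<min n (t + k)} \<union> {..<t + k - n})"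
    by (rule card_mono[OF _ sub]) simp
  also have "\<dots> \<le> card {t..<min n (t + k)} + card {..<t + k - n}" by (rule card_Un_le)
  also have "\<dots> \<le> k" using assms by (cases "t + k \<le> n") (auto simp: min_def)
  finally show ?thesis .
qed

lemma norm0_window: "t < n \<Longrightarrow> norm0 n (window n k t x) \<le> k"
proof -
  assume t: "t < n"
  have "norm0 n (window n k t x) \<le> card {j. j < n \<and> in_window n k t j}"
    unfolding norm0_def by (rule card_mono) (auto simp: window_def)
  also have "\<dots> \<le> k" by (rule card_window_support[OF t])
  finally show ?thesis .
qed

lemma sum_windows: assumes "j < n" "k \<le> n" shows "(\<Sum>t<n. window n k t x j) = real k * x j"
proof -
  have "(\<Sum>t<n. window n k t x j) = (\<Sum>t<n. if in_window n k t j then x j else 0)"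
    by (rule sum.cong) (use assms in \<open>auto simp: window_def\<close>)
  also have "\<dots> = (\<Sum>t\<in>{t. t < n \<and> in_window n k t j}. if in_window n k t j then x j else 0)"
    by (rule sum.mono_neutral_cong_right) auto
  also have "\<dots> = (\<Sum>t\<in>{t. t < n \<and> in_window n k t j}. x j)" by (rule sum.cong) auto
  also have "\<dots> = real (card {t. t < n \<and> in_window n k t j}) * x j" by simp
  finally show ?thesis using card_windows_containing[OF assms] by simp
qed

lemma sum_sum_sq_windows: assumes "k \<le> n" shows "(\<Sum>t<n. sum_sq n (window n k t x)) = real k * sum_sq n x"
proof -
  have "(\<Sum>t<n. sum_sq n (window n k t x)) = (\<Sum>j<n. \<Sum>t<n. (window n k t x j)\<^sup>2)"
    unfolding sum_sq_def by (rule sum.swap)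
  also have "\<dots> = (\<Sum>j<n. real k * (x j)\<^sup>2)"
  proof (rule sum.cong)
    fix j assume j: "j \<in> {..<n}"
    have "(\<Sum>t<n. (window n k t x j)\<^sup>2) = (\<Sum>t<n. window n k t (\<lambda>l. (x l)\<^sup>2) j)"
      by (rule sum.cong) (auto simp: window_def)
    then show "(\<Sum>t<n. (window n k t x j)\<^sup>2) = real k * (x j)\<^sup>2"
      using sum_windows[of j n k "\<lambda>l. (x l)\<^sup>2"] j assms by simp
  qed simp
  finally show ?thesis by (simp add: sum_sq_def sum_distrib_left)
qed

lemma quad_le_sum_quad_windows: assumes psd: "sym_psd n A" and kn: "k \<le> n"
  shows "(real k)\<^sup>2 * quad n A x \<le> real n * (\<Sum>t<n. quad n A (window n k t x))"
proof -
  let ?w = "\<lambda>t. window n k t x"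
  let ?q = "\<lambda>t. quad n A (?w t)"
  have "(real k)\<^sup>2 * quad n A x = quad n A (\<lambda>j. real k * x j)" by (simp add: quad_scale)
  also have "\<dots> = quad n A (\<lambda>j. \<Sum>t<n. ?w t j)"
    by (rule quad_cong) (simp add: sum_windows kn)
  also have "\<dots> = (\<Sum>t<n. \<Sum>s<n. bilin n A (?w t) (?w s))"
    by (simp add: quad_eq_bilin bilin_sum_left bilin_sum_right)
  also have "\<dots> \<le> (\<Sum>t<n. \<Sum>s<n. sqrt (?q t) * sqrt (?q s))"
  proof (intro sum_mono)
    fix t s
    have "(bilin n A (?w t) (?w s))\<^sup>2 \<le> ?q t * ?q s" by (rule bilin_Cauchy_Schwarz[OF psd])
    then have "\<bar>bilin n A (?w t) (?w s)\<bar> \<le> sqrt (?q t * ?q s)"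
      using real_sqrt_le_mono by fastforce
    then show "bilin n A (?w t) (?w s) \<le> sqrt (?q t) * sqrt (?q s)"
      by (simp add: real_sqrt_mult)
  qed
  also have "\<dots> = (\<Sum>t<n. sqrt (?q t))\<^sup>2"
    by (simp add: power2_eq_square sum_product)
  also have "\<dots> = (\<Sum>t<n. 1 * sqrt (?q t))\<^sup>2" by simp
  also have "\<dots> \<le> (\<Sum>t<n. 1\<^sup>2) * (\<Sum>t<n. (sqrt (?q t))\<^sup>2)" by (rule Cauchy_Schwarz_ineq_sum)
  also have "\<dots> = real n * (\<Sum>t<n. ?q t)" using quad_nonneg[OF psd] by simp
  finally show ?thesis .
qed

lemma quad_bound_from_windows: assumes psd: "sym_psd n A" and k: "1 \<le> k" "k \<le> n"
  and hyp: "\<And>t. t < n \<Longrightarrow> quad n A (window n k t x) \<le> L * sum_sq n (window n k t x)"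
  shows "real k * quad n A x \<le> real n * L * sum_sq n x"
proof -
  have "(real k)\<^sup>2 * quad n A x \<le> real n * (\<Sum>t<n. quad n A (window n k t x))"
    by (rule quad_le_sum_quad_windows[OF psd k(2)])
  also have "\<dots> \<le> real n * (\<Sum>t<n. L * sum_sq n (window n k t x))"
    by (intro mult_left_mono sum_mono hyp) auto
  also have "\<dots> = real n * L * (real k * sum_sq n x)"
    by (simp add: sum_distrib_left[symmetric] sum_sum_sq_windows k(2))
  finally have "real k * (real k * quad n A x) \<le> real k * (real n * L * sum_sq n x)"
    by (simp add: power2_eq_square algebra_simps)
  then show ?thesis using k by simp
qed

lemma trace_moment_odd_le:
  assumes psd: "sym_psd n A" and k: "1 \<le> k" "k \<le> n"
    and hyp: "\<And>i t. i < n \<Longrightarrow> t < n \<Longrightarrow>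
       quad n A (window n k t (pow_vec n A (unit_vec i) m))
         \<le> L * sum_sq n (window n k t (pow_vec n A (unit_vec i) m))"
  shows "real k * trace_moment n A (Suc (2 * m)) \<le> real n * L * trace_moment n A (2 * m)"
proof -
  have "real k * trace_moment n A (Suc (2 * m)) = (\<Sum>i<n. real k * quad n A (pow_vec n A (unit_vec i) m))"
    by (simp add: trace_moment_def moment_def sum_distrib_left)
  also have "\<dots> \<le> (\<Sum>i<n. real n * L * sum_sq n (pow_vec n A (unit_vec i) m))"
    by (rule sum_mono) (rule quad_bound_from_windows[OF psd k], auto intro: hyp)
  also have "\<dots> = real n * L * trace_moment n A (2 * m)"
    by (simp add: trace_moment_def moment_def sum_distrib_left)
  finally show ?thesis .
qed

text \<open>Power method: (y'Ay)^(2m) is at most the trace of A^(2m), which by log-convexity of the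
  trace moments is at most n r^(2m) for the ratio r of the next two moments, and the window
  candidates bound k r by n L.\<close>
lemma windows_quad_bound:
  assumes psd: "sym_psd n A" and ssy: "sum_sq n y = 1" and k: "1 \<le> k" "k \<le> n" and L0: "0 \<le> L"
    and hyp: "\<And>i t. i < n \<Longrightarrow> t < n \<Longrightarrow>
       quad n A (window n k t (pow_vec n A (unit_vec i) m))
         \<le> L * sum_sq n (window n k t (pow_vec n A (unit_vec i) m))"
  shows "(real k * quad n A y) ^ (2 * m) \<le> real n * (real n * L) ^ (2 * m)"
proof -
  define T where "T = trace_moment n A (2 * m)"
  define r where "r = trace_moment n A (Suc (2 * m)) / T"
  have lt: "(quad n A y) ^ (2 * m) \<le> T"
    unfolding T_def by (rule quad_pow_le_trace_moment[OF psd ssy])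
  show ?thesis
  proof (cases "T = 0")
    case True
    have "0 \<le> (quad n A y) ^ (2 * m)" using quad_nonneg[OF psd, of y] by simp
    then have "(quad n A y) ^ (2 * m) = 0" using lt True by linarith
    then have "(real k * quad n A y) ^ (2 * m) = 0" by (simp add: power_mult_distrib)
    moreover have "0 \<le> real n * (real n * L) ^ (2 * m)" using L0 by simp
    ultimately show ?thesis by linarith
  next
    case False
    then have Tp: "0 < T" using trace_moment_nonneg[OF psd, of "2 * m"] by (simp add: T_def)
    have r0: "0 \<le> r" using trace_moment_nonneg[OF psd] Tp by (simp add: r_def)
    have kr: "real k * r \<le> real n * L"
      using trace_moment_odd_le[OF psd k hyp] Tp by (simp add: r_def T_def field_simps)
    have "(real k * quad n A y) ^ (2 * m) \<le> real k ^ (2 * m) * (real n * r ^ (2 * m))"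
      unfolding power_mult_distrib
      using lt trace_moment_le_ratio_pow[OF psd Tp[unfolded T_def]]
      by (intro mult_left_mono) (auto simp: r_def T_def)
    also have "\<dots> = real n * (real k * r) ^ (2 * m)" by (simp add: power_mult_distrib)
    also have "\<dots> \<le> real n * (real n * L) ^ (2 * m)"
      using kr r0 by (intro mult_left_mono power_mono) auto
    finally show ?thesis .
  qed
qed

section \<open>The best candidate approximates the optimum\<close>

lemma le_eleven_tenths_if_pow_le:
  fixes u :: real
  assumes u: "0 \<le> u" and n: "1 \<le> n" and h: "u ^ (10 * n) \<le> real n"
  shows "u \<le> 11/10"
proof -
  have "real n \<le> 1 + real (10 * n) * (1/10)" by simp
  also have "\<dots> \<le> (1 + 1/10) ^ (10 * n)" by (rule Bernoulli_inequality) simp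
  finally have "u ^ (10 * n) \<le> (11/10) ^ (10 * n)" using h by simp
  moreover have "10 * n = Suc (10 * n - 1)" using n by simp
  ultimately show ?thesis using power_le_imp_le_base[of u "10 * n - 1" "11/10"] by simp
qed

text \<open>Here rho is y'Ay / L: the rows bound says rho is about sqrt k, the windows bound says it is
  about n / k, and together they limit rho^3 to n. For n \<ge> 3 the numbers work out directly;
  n = 2 is checked by hand.\<close>
lemma cube_le_if_rows_and_windows:
  fixes \<rho> :: real
  assumes r0: "0 \<le> \<rho>" and k: "1 \<le> k" "k \<le> n" and n2: "2 \<le> n"
    and rows: "\<rho>\<^sup>2 - \<rho> \<le> real k / 4" and wins: "real k * \<rho> \<le> 11/10 * real n"
  shows "\<rho> ^ 3 \<le> real n"
proof (rule ccontr)
  assume "\<not> ?thesis"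
  then have big: "real n < \<rho> ^ 3" by simp
  have rp: "0 < \<rho>" using big r0 by (cases "\<rho> = 0") auto
  have "\<rho> * (\<rho>\<^sup>2 - \<rho>) \<le> \<rho> * (real k / 4)" using rows r0 by (rule mult_left_mono)
  then have "\<rho> ^ 3 - \<rho>\<^sup>2 \<le> real k * \<rho> / 4"
    by (simp add: power2_eq_square power3_eq_cube algebra_simps)
  then have "\<rho> ^ 3 - \<rho>\<^sup>2 < 11/40 * \<rho> ^ 3" using wins big by linarith
  then have "29/40 * \<rho> < 1" using rp by (simp add: power3_eq_cube power2_eq_square)
  then have "\<rho> ^ 3 < (40/29) ^ 3" using r0 by (intro power_strict_mono) auto
  moreover have "(40/29::real) ^ 3 < 3" by (simp add: power3_eq_cube)
  ultimately have n: "n = 2" using big n2 by linarith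
  have "\<rho> \<le> 5/4"
  proof (cases "k = 1")
    case True
    show ?thesis
    proof (rule ccontr)
      assume "\<not> \<rho> \<le> 5/4"
      then have "5/4 * (1/4) < \<rho> * (\<rho> - 1)" by (intro mult_strict_mono) auto
      then show False using rows True by (simp add: power2_eq_square algebra_simps)
    qed
  next
    case False
    then have "k = 2" using k n by simp
    then show ?thesis using n wins by simp
  qed
  then have "\<rho> ^ 3 \<le> (5/4) ^ 3" using r0 by (intro power_mono) auto
  then show False using big n by (simp add: power3_eq_cube)
qed

lemma cube_bound_numeric:
  fixes lam L :: real
  assumes l0: "0 \<le> lam" and L0: "0 \<le> L" and k: "1 \<le> k" "k \<le> n"
    and R: "lam\<^sup>2 - L * lam \<le> real k * L\<^sup>2 / 4"
    and D: "(real k * lam) ^ (10 * n) \<le> real n * (real n * L) ^ (10 * n)"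
  shows "lam ^ 3 \<le> real n * L ^ 3"
proof (cases "L = 0")
  case True
  then show ?thesis using R by simp
next
  case False
  then have Lp: "0 < L" using L0 by simp
  define \<rho> where "\<rho> = lam / L"
  have lam: "lam = \<rho> * L" and r0: "0 \<le> \<rho>" using Lp l0 by (simp_all add: \<rho>_def)
  have n: "0 < real n" "1 \<le> n" using k by simp_all
  define u where "u = real k * \<rho> / real n"
  have u0: "0 \<le> u" using r0 by (simp add: u_def)
  have "real k * lam = u * (real n * L)" using n by (simp add: u_def lam)
  then have "u ^ (10 * n) * (real n * L) ^ (10 * n) \<le> real n * (real n * L) ^ (10 * n)"
    using D by (simp add: power_mult_distrib)
  moreover have "0 < (real n * L) ^ (10 * n)" using n Lp by simp
  ultimately have un: "u ^ (10 * n) \<le> real n" by simp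
  have rows: "\<rho>\<^sup>2 - \<rho> \<le> real k / 4"
  proof -
    have "L\<^sup>2 * (\<rho>\<^sup>2 - \<rho>) \<le> L\<^sup>2 * (real k / 4)"
      using R by (simp add: lam power2_eq_square algebra_simps)
    then show ?thesis using Lp by simp
  qed
  have "\<rho> ^ 3 \<le> real n"
  proof (cases "n = 1")
    case True
    then have "u ^ Suc 9 \<le> 1 ^ Suc 9" using un by simp
    then have "u \<le> 1" by (rule power_le_imp_le_base) simp
    then have "\<rho> \<le> 1" using True k by (simp add: u_def)
    then show ?thesis using r0 True by (simp add: power_le_one)
  next
    case False
    have "u \<le> 11/10" by (rule le_eleven_tenths_if_pow_le[OF u0 n(2) un])
    then have "real k * \<rho> \<le> 11/10 * real n" using n by (simp add: u_def divide_le_eq)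
    then show ?thesis using cube_le_if_rows_and_windows[OF r0 k _ rows] False n by simp
  qed
  then have "\<rho> ^ 3 * L ^ 3 \<le> real n * L ^ 3" using Lp by (intro mult_right_mono) auto
  then show ?thesis by (simp add: lam power_mult_distrib)
qed

theorem quad_cube_bound:
  assumes psd: "sym_psd n A" and k: "1 \<le> k" "k \<le> n"
    and hD: "\<And>i. i < n \<Longrightarrow> quad n A (unit_vec i) \<le> L * sum_sq n (unit_vec i)"
    and hR: "\<And>i. i < n \<Longrightarrow> quad n A (row_top n k A i) \<le> L * sum_sq n (row_top n k A i)"
    and hW: "\<And>i t. i < n \<Longrightarrow> t < n \<Longrightarrow>
       quad n A (window n k t (pow_vec n A (unit_vec i) (5 * n)))
         \<le> L * sum_sq n (window n k t (pow_vec n A (unit_vec i) (5 * n)))"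
    and ssy: "sum_sq n y = 1" and cy: "card {j. j < n \<and> y j \<noteq> 0} \<le> k"
  shows "(quad n A y) ^ 3 \<le> real n * L ^ 3"
proof -
  have n0: "0 < n" using k by simp
  have L0: "0 \<le> L"
    using hD[OF n0] quad_unit_vec[OF n0] sum_sq_unit_vec[OF n0] sym_psd_diag_nonneg[OF psd n0] by simp
  have R: "(quad n A y)\<^sup>2 - L * quad n A y \<le> real k * L\<^sup>2 / 4"
    by (rule rows_quad_bound[OF psd ssy cy]) (rule row_top_mass_bound[OF psd _ k(2) hR _ _ L0])
  have "(real k * quad n A y) ^ (2 * (5 * n)) \<le> real n * (real n * L) ^ (2 * (5 * n))"
    by (rule windows_quad_bound[OF psd ssy k L0 hW])
  then have D: "(real k * quad n A y) ^ (10 * n) \<le> real n * (real n * L) ^ (10 * n)" by simp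
  show ?thesis by (rule cube_bound_numeric[OF quad_nonneg[OF psd] L0 k R D])
qed

definition candidates :: "nat \<Rightarrow> nat \<Rightarrow> (nat \<Rightarrow> nat \<Rightarrow> real) \<Rightarrow> nat \<Rightarrow> (nat \<Rightarrow> real) set" where
  "candidates n k A i = {unit_vec l | l. l < i} \<union> {row_top n k A l | l. l < i} \<union> {window n k t (pow_vec n A (unit_vec l) (5 * n)) | l t. l < i \<and> t < n}"

lemma candidates_Suc: "candidates n k A (Suc i) = candidates n k A i \<union> {unit_vec i, row_top n k A i} \<union> {window n k t (pow_vec n A (unit_vec i) (5 * n)) | t. t < n}"
  unfolding candidates_def by (auto simp: less_Suc_eq)

lemma sparse_opt_le:
  assumes n: "0 < n" and k: "1 \<le> k"
    and B: "\<And>y. norm2 n y = 1 \<Longrightarrow> norm0 n y \<le> k \<Longrightarrow> quad n A y \<le> B"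
  shows "sparse_opt n A k \<le> B"
  unfolding sparse_opt_def
proof (rule cSup_least)
  have "norm2 n (unit_vec 0) = 1" using sum_sq_unit_vec[OF n] by (simp add: norm2_def sum_sq_def)
  moreover have "norm0 n (unit_vec 0) \<le> k" using norm0_unit_vec[OF n] k by simp
  ultimately show "{quad n A y | y. norm2 n y = 1 \<and> norm0 n y \<le> k} \<noteq> {}" by blast
qed (use B in blast)

lemma powr_one_third_cube:
  fixes x :: real
  assumes "0 \<le> x"
  shows "(x powr (1/3)) ^ 3 = x"
proof -
  have "(x powr (1/3)) ^ 3 = x powr (1/3) * x powr (1/3) * x powr (1/3)"
    by (simp add: power3_eq_cube)
  also have "\<dots> = x powr (1/3 + 1/3 + 1/3)" by (simp only: powr_add)
  also have "\<dots> = x" using assms by simp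
  finally show ?thesis .
qed

lemma opt_le_best_quotient:
  assumes psd: "sym_psd n A" and k: "1 \<le> k" "k \<le> n"
    and H: "\<And>c. c \<in> candidates n k A n \<Longrightarrow> quad n A c \<le> L * sum_sq n c"
  shows "real n powr (-1/3) * sparse_opt n A k \<le> L"
proof -
  have n0: "0 < n" using k by simp
  have hD: "quad n A (unit_vec i) \<le> L * sum_sq n (unit_vec i)" if "i < n" for i
    using that by (intro H) (auto simp: candidates_def)
  have hR: "quad n A (row_top n k A i) \<le> L * sum_sq n (row_top n k A i)" if "i < n" for i
    using that by (intro H) (auto simp: candidates_def)
  have hW: "quad n A (window n k t (pow_vec n A (unit_vec i) (5 * n)))
      \<le> L * sum_sq n (window n k t (pow_vec n A (unit_vec i) (5 * n)))" if "i < n" "t < n" for i t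
    using that by (intro H) (auto simp: candidates_def)
  have L0: "0 \<le> L"
    using hD[OF n0] quad_unit_vec[OF n0] sum_sq_unit_vec[OF n0] sym_psd_diag_nonneg[OF psd n0] by simp
  define B where "B = real n powr (1/3) * L"
  have "quad n A y \<le> B" if y: "norm2 n y = 1" "norm0 n y \<le> k" for y
  proof -
    have ssy: "sum_sq n y = 1" using y(1) by (simp add: norm2_def sum_sq_def)
    have cy: "card {j. j < n \<and> y j \<noteq> 0} \<le> k" using y(2) by (simp add: norm0_def)
    have "(quad n A y) ^ 3 \<le> real n * L ^ 3" by (rule quad_cube_bound[OF psd k hD hR hW ssy cy])
    also have "\<dots> = B ^ 3" by (simp add: B_def power_mult_distrib powr_one_third_cube)
    finally have "(quad n A y) ^ Suc 2 \<le> B ^ Suc 2" by (simp add: numeral_3_eq_3)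
    then show ?thesis by (rule power_le_imp_le_base) (simp add: B_def L0)
  qed
  then have "sparse_opt n A k \<le> B" by (rule sparse_opt_le[OF n0 k(1)])
  then have "real n powr (-1/3) * sparse_opt n A k \<le> real n powr (-1/3) * B"
    by (intro mult_left_mono) auto
  also have "\<dots> = L" using n0 by (simp add: B_def powr_add[symmetric])
  finally show ?thesis .
qed

text \<open>Quotients are compared by cross-multiplication; denominator 0 means that no candidate of
  nonzero norm has been seen yet.\<close>
definition best_among :: "nat \<Rightarrow> nat \<Rightarrow> (nat \<Rightarrow> nat \<Rightarrow> real) \<Rightarrow> (nat \<Rightarrow> real) set \<Rightarrow> real \<Rightarrow> real \<Rightarrow> (nat \<Rightarrow> real) \<Rightarrow> bool" where
  "best_among n k A X bn bd ov \<longleftrightarrow> (bd = 0 \<and> (\<forall>c\<in>X. sum_sq n c = 0)) \<or>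
     (0 < bd \<and> sum_sq n ov = bd \<and> quad n A ov = bn \<and> norm0 n ov \<le> k \<and> (\<forall>c\<in>X. quad n A c * bd \<le> bn * sum_sq n c))"

lemma best_among_insert_zero: "best_among n k A X bn bd ov \<Longrightarrow> \<not> 0 < sum_sq n c \<Longrightarrow> best_among n k A (insert c X) bn bd ov"
proof -
  assume G: "best_among n k A X bn bd ov" and c: "\<not> 0 < sum_sq n c"
  then have s0: "sum_sq n c = 0" using sum_sq_nonneg[of n c] by simp
  then have "quad n A c = 0" by (rule quad_eq_0_if_sum_sq_eq_0)
  then show ?thesis using G s0 by (auto simp: best_among_def)
qed

lemma best_among_insert_first: "best_among n k A X bn bd ov \<Longrightarrow> 0 < sum_sq n c \<Longrightarrow> bd = 0 \<Longrightarrow> norm0 n c \<le> k \<Longrightarrow>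
   best_among n k A (insert c X) (quad n A c) (sum_sq n c) c"
  unfolding best_among_def using quad_eq_0_if_sum_sq_eq_0 by fastforce

lemma best_among_insert_better: assumes G: "best_among n k A X bn bd ov" and p: "0 < sum_sq n c" and bd: "bd \<noteq> 0" and nc: "norm0 n c \<le> k"
  and lt: "bn * sum_sq n c < quad n A c * bd"
  shows "best_among n k A (insert c X) (quad n A c) (sum_sq n c) c"
proof -
  have bdp: "0 < bd" and old: "\<forall>c'\<in>X. quad n A c' * bd \<le> bn * sum_sq n c'"
    using G bd by (auto simp: best_among_def)
  have "quad n A c' * sum_sq n c \<le> quad n A c * sum_sq n c'" if c': "c' \<in> X" for c'
  proof -
    have "quad n A c' * sum_sq n c * bd = (quad n A c' * bd) * sum_sq n c" by (simp add: algebra_simps)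
    also have "\<dots> \<le> (bn * sum_sq n c') * sum_sq n c" using old c' p by (intro mult_right_mono) auto
    also have "\<dots> = (bn * sum_sq n c) * sum_sq n c'" by (simp add: algebra_simps)
    also have "\<dots> \<le> (quad n A c * bd) * sum_sq n c'" using lt sum_sq_nonneg[of n c'] by (intro mult_right_mono) auto
    finally have "(quad n A c' * sum_sq n c) * bd \<le> (quad n A c * sum_sq n c') * bd" by (simp add: algebra_simps)
    then show ?thesis using bdp by simp
  qed
  then show ?thesis using p nc by (auto simp: best_among_def)
qed

lemma best_among_insert_worse: assumes G: "best_among n k A X bn bd ov" and p: "0 < sum_sq n c" and bd: "bd \<noteq> 0"
  and ge: "\<not> bn * sum_sq n c < quad n A c * bd"
  shows "best_among n k A (insert c X) bn bd ov"
  using G bd ge by (auto simp: best_among_def not_less algebra_simps)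

lemma normalized_best_candidate:
  assumes psd: "sym_psd n A" and k: "1 \<le> k" "k \<le> n"
    and G: "best_among n k A (candidates n k A n) bn bd v"
  defines "x \<equiv> \<lambda>j. v j / sqrt bd"
  shows "norm2 n x = 1" and "norm0 n x \<le> k"
    and "real n powr (-1/3) * sparse_opt n A k \<le> quad n A x"
proof -
  have n0: "0 < n" using k by simp
  have "unit_vec 0 \<in> candidates n k A n" using n0 by (auto simp: candidates_def)
  then have bd: "0 < bd" and ssv: "sum_sq n v = bd" and qv: "quad n A v = bn" and nv: "norm0 n v \<le> k"
    and all: "\<forall>c\<in>candidates n k A n. quad n A c * bd \<le> bn * sum_sq n c"
    using G sum_sq_unit_vec[OF n0] unfolding best_among_def by auto
  have x: "x = (\<lambda>j. (1 / sqrt bd) * v j)" by (simp add: x_def)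
  have "sum_sq n x = sum_sq n v / bd"
    using bd by (simp add: x_def sum_sq_def power_divide sum_divide_distrib)
  then show "norm2 n x = 1" using bd ssv by (simp add: norm2_def flip: sum_sq_def)
  have "{j. j < n \<and> x j \<noteq> 0} = {j. j < n \<and> v j \<noteq> 0}" using bd by (auto simp: x_def)
  then show "norm0 n x \<le> k" using nv by (simp add: norm0_def)
  have "quad n A x = (1 / sqrt bd)\<^sup>2 * quad n A v" unfolding x by (rule quad_scale)
  then have qx: "quad n A x = bn / bd" using bd qv by (simp add: power_divide)
  have "quad n A c \<le> bn / bd * sum_sq n c" if "c \<in> candidates n k A n" for c
    using all that bd by (simp add: le_divide_eq mult.commute)
  then show "real n powr (-1/3) * sparse_opt n A k \<le> quad n A x"
    unfolding qx by (rule opt_le_best_quotient[OF psd k])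
qed

section \<open>Counting loops on the real RAM\<close>

notation CSeq (infixr ";;" 60)

definition for_loop :: "nat \<Rightarrow> iexp \<Rightarrow> com \<Rightarrow> com" where
  "for_loop r e body = (ISet r (IC 0) ;; CWhile (ILess (IR r) e) (body ;; ISet r (IAdd (IR r) (IC 1))))"

fun written_regs :: "com \<Rightarrow> nat set" where
  "written_regs (ISet r e) = {r}"
| "written_regs (CSeq a b) = written_regs a \<union> written_regs b"
| "written_regs (CIf _ a b) = written_regs a \<union> written_regs b"
| "written_regs (CWhile _ a) = written_regs a"
| "written_regs _ = {}"

lemma written_regs_for_loop[simp]: "written_regs (for_loop r e b) = insert r (written_regs b)"
  by (auto simp: for_loop_def)

lemma big_step_unwritten: "big_step c s t s' \<Longrightarrow> r \<notin> written_regs c \<Longrightarrow> fst s' r = fst s r"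
  by (induction rule: big_step.induct) auto

lemma big_step_RSetI: "s' = (fst s, (snd s)(ieval a s := reval e s)) \<Longrightarrow> big_step (RSet a e) s 1 s'"
  using big_step.RSet by simp

lemma big_step_ISetI: "s' = ((fst s)(r := ieval e s), snd s) \<Longrightarrow> big_step (ISet r e) s 1 s'"
  using big_step.ISet by simp

lemma int_neq_neg_numeral: "int x \<noteq> - numeral w"
  by (metis le_minus_iff neg_0_le_iff_le neg_numeral_le_zero not_numeral_le_zero of_nat_0_le_iff order_antisym)

lemma int_neq_minus_one: "int x \<noteq> - 1"
  by (smt (verit) of_nat_0_le_iff)

lemma neg_less_int: "(-1::int) < int x" "- numeral w < int x"
  by (smt (verit) of_nat_0_le_iff) (metis less_le_trans neg_numeral_less_zero of_nat_0_le_iff)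

lemma while_bound:
  assumes step: "\<And>j s. j < N \<Longrightarrow> I j s \<Longrightarrow> beval b s \<Longrightarrow> \<exists>t s'. big_step c s t s' \<and> t \<le> T \<and> I (Suc j) s'"
    and cond: "\<And>j s. j \<le> N \<Longrightarrow> I j s \<Longrightarrow> beval b s \<longleftrightarrow> j < N"
    and I0: "I 0 s"
  shows "\<exists>t s'. big_step (CWhile b c) s t s' \<and> t \<le> N * (T + 1) + 1 \<and> I N s'"
proof -
  have "\<And>j s. d = N - j \<Longrightarrow> j \<le> N \<Longrightarrow> I j s \<Longrightarrow>
          \<exists>t s'. big_step (CWhile b c) s t s' \<and> t \<le> d * (T + 1) + 1 \<and> I N s'" for d
  proof (induction d)
    case 0
    then have "j = N" by simp
    then have "\<not> beval b s" using cond[of j s] 0 by simp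
    then show ?case using 0 \<open>j = N\<close> big_step.WhileF[of b s c] by (intro exI[of _ 1] exI[of _ s]) auto
  next
    case (Suc d)
    then have jN: "j < N" by simp
    then have bb: "beval b s" using cond[of j s] Suc.prems by simp
    obtain t1 s1 where 1: "big_step c s t1 s1" "t1 \<le> T" "I (Suc j) s1" using step[OF jN Suc(4) bb] by blast
    have dd: "d = N - Suc j" "Suc j \<le> N" using Suc.prems by auto
    obtain t2 s2 where 2: "big_step (CWhile b c) s1 t2 s2" "t2 \<le> d * (T + 1) + 1" "I N s2"
      using Suc.IH[OF dd 1(3)] by blast
    show ?case using 1 2 bb
      by (intro exI[of _ "Suc (t1 + t2)"] exI[of _ s2]) (auto intro: big_step.WhileT)
  qed
  from this[of N 0 s] show ?thesis using I0 by simp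
qed

lemma for_loop_bound:
  assumes init: "I 0 ((fst s)(r := 0), snd s)"
    and step: "\<And>j s. j < N \<Longrightarrow> I j s \<Longrightarrow> fst s r = int j \<Longrightarrow>
        \<exists>t s'. big_step body s t s' \<and> t \<le> T \<and> fst s' r = int j \<and> I (Suc j) ((fst s')(r := int j + 1), snd s')"
    and bound: "\<And>j s. j \<le> N \<Longrightarrow> I j s \<Longrightarrow> fst s r = int j \<Longrightarrow> ieval e s = int N"
  shows "\<exists>t s'. big_step (for_loop r e body) s t s' \<and> t \<le> N * (T + 2) + 2 \<and> I N s' \<and> fst s' r = int N"
proof -
  let ?s0 = "((fst s)(r := 0), snd s)"
  have b0: "big_step (ISet r (IC 0)) s 1 ?s0" using big_step.ISet[of r "IC 0" s] by simp
  have "\<exists>t s'. big_step (CWhile (ILess (IR r) e) (body ;; ISet r (IAdd (IR r) (IC 1)))) ?s0 t s'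
          \<and> t \<le> N * ((T + 1) + 1) + 1 \<and> (I N s' \<and> fst s' r = int N)"
  proof (rule while_bound[where I="\<lambda>j s. I j s \<and> fst s r = int j"])
    fix j s assume j: "j < N" and Is: "I j s \<and> fst s r = int j"
    obtain t s' where 1: "big_step body s t s'" "t \<le> T" "fst s' r = int j"
      "I (Suc j) ((fst s')(r := int j + 1), snd s')" using step[OF j] Is by blast
    have "big_step (ISet r (IAdd (IR r) (IC 1))) s' 1 ((fst s')(r := int j + 1), snd s')"
      using big_step.ISet[of r "IAdd (IR r) (IC 1)" s'] 1(3) by simp
    then have "big_step (body ;; ISet r (IAdd (IR r) (IC 1))) s (t + 1) ((fst s')(r := int j + 1), snd s')"
      using 1(1) by (rule big_step.Seq[rotated])
    then show "\<exists>t s'. big_step (body ;; ISet r (IAdd (IR r) (IC 1))) s t s' \<and> t \<le> T + 1 \<and>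
        I (Suc j) s' \<and> fst s' r = int (Suc j)" using 1 by (intro exI conjI) auto
  next
    fix j s assume "j \<le> N" "I j s \<and> fst s r = int j"
    then show "beval (ILess (IR r) e) s = (j < N)" using bound by auto
  next
    show "I 0 ?s0 \<and> fst ?s0 r = int 0" using init by simp
  qed
  then obtain t s' where 2: "big_step (CWhile (ILess (IR r) e) (body ;; ISet r (IAdd (IR r) (IC 1)))) ?s0 t s'"
    "t \<le> N * ((T + 1) + 1) + 1" "I N s'" "fst s' r = int N" by blast
  show ?thesis using big_step.Seq[OF b0 2(1)] 2 unfolding for_loop_def
    by (intro exI[of _ "1 + t"] exI[of _ s']) (auto simp: algebra_simps)
qed

lemma for_loop_accumulate:
  assumes r0: "fst s 0 = int n" and rne: "r \<noteq> 0"
    and D: "\<And>s1. (\<forall>r'. r' \<noteq> r \<longrightarrow> fst s1 r' = fst s r') \<Longrightarrow> ieval D s1 = \<alpha>"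
    and E: "\<And>j s1. j < n \<Longrightarrow> fst s1 = (fst s)(r := int j) \<Longrightarrow> (\<forall>a. a \<noteq> \<alpha> \<longrightarrow> snd s1 a = snd s a) \<Longrightarrow> reval E s1 = f j"
  shows "\<exists>t s'. big_step (for_loop r (IR 0) (RSet D (RAdd (RR D) E))) s t s' \<and> t \<le> n * 3 + 2 \<and>
     fst s' = (fst s)(r := int n) \<and> snd s' = (snd s)(\<alpha> := snd s \<alpha> + (\<Sum>j<n. f j))"
proof -
  define I where "I j s1 \<longleftrightarrow> (\<forall>r'. r' \<noteq> r \<longrightarrow> fst s1 r' = fst s r') \<and>
     snd s1 = (snd s)(\<alpha> := snd s \<alpha> + (\<Sum>l<j. f l))" for j s1
  have "\<exists>t s'. big_step (for_loop r (IR 0) (RSet D (RAdd (RR D) E))) s t s' \<and> t \<le> n * (1 + 2) + 2 \<and> I n s' \<and> fst s' r = int n"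
  proof (rule for_loop_bound)
    show "I 0 ((fst s)(r := 0), snd s)" by (simp add: I_def)
  next
    fix j s1 assume j: "j < n" and I: "I j s1" and c: "fst s1 r = int j"
    have fs: "fst s1 = (fst s)(r := int j)" using I c by (auto simp: I_def)
    have d: "ieval D s1 = \<alpha>" using D I by (simp add: I_def)
    have e: "reval E s1 = f j" using E[OF j fs] I by (simp add: I_def)
    let ?s2 = "(fst s1, (snd s1)(\<alpha> := snd s1 \<alpha> + f j))"
    have b: "big_step (RSet D (RAdd (RR D) E)) s1 1 ?s2" by (rule big_step_RSetI) (simp add: d e)
    show "\<exists>t s'. big_step (RSet D (RAdd (RR D) E)) s1 t s' \<and> t \<le> 1 \<and> fst s' r = int j \<and>
        I (Suc j) ((fst s')(r := int j + 1), snd s')"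
      using b I c by (intro exI[of _ 1] exI[of _ ?s2]) (auto simp: I_def)
  next
    fix j s1 assume "j \<le> n" "I j s1" "fst s1 r = int j"
    then show "ieval (IR 0) s1 = int n" using r0 rne by (simp add: I_def)
  qed
  then obtain t s' where 1: "big_step (for_loop r (IR 0) (RSet D (RAdd (RR D) E))) s t s'" "t \<le> n * (1 + 2) + 2" "I n s'" "fst s' r = int n" by blast
  have "fst s' = (fst s)(r := int n)" using 1(3,4) by (auto simp: I_def)
  then show ?thesis using 1 unfolding I_def by (intro exI[of _ t] exI[of _ s']) auto
qed

lemma for_loop_fill_inv:
  assumes r0: "fst s 0 = int n" and rne: "r \<noteq> 0" and W: "0 \<notin> W" "r \<notin> W" "written_regs C \<subseteq> W"
    and P0: "P 0 ((fst s)(r := 0))"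
    and body: "\<And>j s1. j < n \<Longrightarrow> fst s1 r = int j \<Longrightarrow> P j (fst s1) \<Longrightarrow>
        (\<forall>r'. r' \<notin> insert r W \<longrightarrow> fst s1 r' = fst s r') \<Longrightarrow>
        (\<forall>a. (a < b \<or> b + int j \<le> a) \<longrightarrow> snd s1 a = snd s a) \<Longrightarrow>
        \<exists>t s2. big_step C s1 t s2 \<and> t \<le> T \<and> snd s2 = (snd s1)(b + int j := f j) \<and> P (Suc j) ((fst s2)(r := int j + 1))"
  shows "\<exists>t s'. big_step (for_loop r (IR 0) C) s t s' \<and> t \<le> n * (T + 2) + 2 \<and> P n (fst s') \<and> fst s' r = int n \<and>
     (\<forall>r'. r' \<notin> insert r W \<longrightarrow> fst s' r' = fst s r') \<and>
     (\<forall>j<n. snd s' (b + int j) = f j) \<and> (\<forall>a. (a < b \<or> b + int n \<le> a) \<longrightarrow> snd s' a = snd s a)"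
proof -
  define I where "I j s1 \<longleftrightarrow> P j (fst s1) \<and> (\<forall>r'. r' \<notin> insert r W \<longrightarrow> fst s1 r' = fst s r') \<and>
     (\<forall>l<j. snd s1 (b + int l) = f l) \<and> (\<forall>a. (a < b \<or> b + int j \<le> a) \<longrightarrow> snd s1 a = snd s a)" for j s1
  have "\<exists>t s'. big_step (for_loop r (IR 0) C) s t s' \<and> t \<le> n * (T + 2) + 2 \<and> I n s' \<and> fst s' r = int n"
  proof (rule for_loop_bound)
    show "I 0 ((fst s)(r := 0), snd s)" using P0 by (simp add: I_def)
  next
    fix j s1 assume j: "j < n" and I: "I j s1" and c: "fst s1 r = int j"
    obtain t s2 where 1: "big_step C s1 t s2" "t \<le> T" "snd s2 = (snd s1)(b + int j := f j)"
      "P (Suc j) ((fst s2)(r := int j + 1))"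
      using body[OF j c] I by (auto simp: I_def)
    have f2: "\<forall>r'. r' \<notin> W \<longrightarrow> fst s2 r' = fst s1 r'" using big_step_unwritten[OF 1(1)] W by auto
    have "I (Suc j) ((fst s2)(r := int j + 1), snd s2)"
      unfolding I_def
    proof (intro conjI allI impI)
      show "P (Suc j) (fst ((fst s2)(r := int j + 1), snd s2))" using 1(4) by simp
    next
      fix r' assume "r' \<notin> insert r W" then show "fst ((fst s2)(r := int j + 1), snd s2) r' = fst s r'"
        using f2 I by (simp add: I_def)
    next
      fix l assume l: "l < Suc j"
      show "snd ((fst s2)(r := int j + 1), snd s2) (b + int l) = f l"
      proof (cases "l = j")
        case True then show ?thesis using 1(3) by simp
      next
        case False then have "l < j" using l by simp
        then show ?thesis using 1(3) I by (simp add: I_def)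
      qed
    next
      fix a assume a: "a < b \<or> b + int (Suc j) \<le> a"
      then have "a \<noteq> b + int j" by auto
      moreover have "a < b \<or> b + int j \<le> a" using a by auto
      moreover have "snd s1 a = snd s a" using I \<open>a < b \<or> b + int j \<le> a\<close> unfolding I_def by blast
      ultimately show "snd ((fst s2)(r := int j + 1), snd s2) a = snd s a"
        using 1(3) by simp
    qed
    moreover have "fst s2 r = int j" using f2 W c by simp
    ultimately show "\<exists>t s'. big_step C s1 t s' \<and> t \<le> T \<and> fst s' r = int j \<and> I (Suc j) ((fst s')(r := int j + 1), snd s')"
      using 1 by (intro exI[of _ t] exI[of _ s2]) simp
  next
    fix j s1 assume "j \<le> n" "I j s1" "fst s1 r = int j"
    then show "ieval (IR 0) s1 = int n" using r0 rne W by (simp add: I_def)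
  qed
  then obtain t s' where 1: "big_step (for_loop r (IR 0) C) s t s'" "t \<le> n * (T + 2) + 2" "I n s'" "fst s' r = int n" by blast
  then show ?thesis unfolding I_def by (intro exI[of _ t] exI[of _ s']) auto
qed

lemma for_loop_fill:
  assumes r0: "fst s 0 = int n" and rne: "r \<noteq> 0" and wrC: "written_regs C = {}"
    and body: "\<And>j s1. j < n \<Longrightarrow> fst s1 = (fst s)(r := int j) \<Longrightarrow> (\<forall>a. (a < b \<or> b + int j \<le> a) \<longrightarrow> snd s1 a = snd s a) \<Longrightarrow>
        \<exists>t s2. big_step C s1 t s2 \<and> t \<le> T \<and> snd s2 = (snd s1)(b + int j := f j)"
  shows "\<exists>t s'. big_step (for_loop r (IR 0) C) s t s' \<and> t \<le> n * (T + 2) + 2 \<and> fst s' = (fst s)(r := int n) \<and>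
     (\<forall>j<n. snd s' (b + int j) = f j) \<and> (\<forall>a. (a < b \<or> b + int n \<le> a) \<longrightarrow> snd s' a = snd s a)"
proof -
  have step: "\<exists>t s2. big_step C s1 t s2 \<and> t \<le> T \<and> snd s2 = (snd s1)(b + int j := f j) \<and> True"
    if "j < n" "fst s1 r = int j" "\<forall>r'. r' \<notin> insert r {} \<longrightarrow> fst s1 r' = fst s r'"
      "\<forall>a. (a < b \<or> b + int j \<le> a) \<longrightarrow> snd s1 a = snd s a" for j s1
  proof -
    have "fst s1 = (fst s)(r := int j)" using that by auto
    then show ?thesis using body that by blast
  qed
  have "\<exists>t s'. big_step (for_loop r (IR 0) C) s t s' \<and> t \<le> n * (T + 2) + 2 \<and> True \<and> fst s' r = int n \<and>
     (\<forall>r'. r' \<notin> insert r {} \<longrightarrow> fst s' r' = fst s r') \<and>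
     (\<forall>j<n. snd s' (b + int j) = f j) \<and> (\<forall>a. (a < b \<or> b + int n \<le> a) \<longrightarrow> snd s' a = snd s a)"
    by (rule for_loop_fill_inv[OF r0 rne _ _ _ _ step]) (use wrC in simp_all)
  then obtain t s' where s': "big_step (for_loop r (IR 0) C) s t s'" "t \<le> n * (T + 2) + 2"
    "fst s' r = int n" "\<forall>r'. r' \<noteq> r \<longrightarrow> fst s' r' = fst s r'"
    "\<forall>j<n. snd s' (b + int j) = f j" "\<forall>a. (a < b \<or> b + int n \<le> a) \<longrightarrow> snd s' a = snd s a"
    by auto
  moreover have "fst s' = (fst s)(r := int n)" using s'(3,4) by (intro ext) auto
  ultimately show ?thesis by blast
qed

section \<open>Memory layout\<close>

text \<open>Real registers: the matrix occupies 0, ..., n^2 - 1 row by row, followed by four vectors of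
  length n: the best candidate so far (at n^2; it becomes the output), the current candidate (at
  n^2 + n), the power iterate (at n^2 + 2n) and scratch space (at n^2 + 3n). Addresses -1 and -2
  hold numerator and denominator of the best Rayleigh quotient, -3 and -4 those of the current
  candidate, and -5 is an accumulator. Integer registers: 0, 1, 2 hold n, k, n^2; 3 is the row
  index i of the outer loop, 8 holds i n and 10 holds 5 n; the others are counters.\<close>

definition addr_best :: "nat \<Rightarrow> iexp" where "addr_best q = IAdd (IR 2) (IR q)"

definition addr_cand :: "nat \<Rightarrow> iexp" where "addr_cand q = IAdd (IAdd (IR 2) (IR 0)) (IR q)"

definition addr_iter :: "nat \<Rightarrow> iexp" where "addr_iter q = IAdd (IAdd (IAdd (IR 2) (IR 0)) (IR 0)) (IR q)"

definition addr_scratch :: "nat \<Rightarrow> iexp" where "addr_scratch q = IAdd (IAdd (IAdd (IAdd (IR 2) (IR 0)) (IR 0)) (IR 0)) (IR q)"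

definition mem_vec :: "nat \<Rightarrow> state \<Rightarrow> int \<Rightarrow> nat \<Rightarrow> real" where
  "mem_vec n s b = (\<lambda>j. if j < n then snd s (b + int j) else 0)"

lemma mem_vec_update_int_regs[simp]: "mem_vec n (f, snd s) b = mem_vec n s b"
  by (auto simp: mem_vec_def)

abbreviation cand_vec :: "nat \<Rightarrow> state \<Rightarrow> nat \<Rightarrow> real" where "cand_vec n s \<equiv> mem_vec n s (int (n * n) + int n)"

abbreviation best_vec :: "nat \<Rightarrow> state \<Rightarrow> nat \<Rightarrow> real" where "best_vec n s \<equiv> mem_vec n s (int (n * n))"

abbreviation iter_vec :: "nat \<Rightarrow> state \<Rightarrow> nat \<Rightarrow> real" where "iter_vec n s \<equiv> mem_vec n s (int (n * n) + int n + int n)"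

lemma row_major_index_less: "i < n \<Longrightarrow> j < n \<Longrightarrow> i * n + j < n * (n::nat)"
proof -
  assume "i < n" "j < n"
  then have "i * n + j < Suc i * n" by simp
  also have "\<dots> \<le> n * n" using \<open>i < n\<close> by (intro mult_le_mono1) simp
  finally show ?thesis .
qed

definition mem_matrix :: "nat \<Rightarrow> (nat \<Rightarrow> nat \<Rightarrow> real) \<Rightarrow> state \<Rightarrow> bool" where
  "mem_matrix n A s \<longleftrightarrow> (\<forall>i<n. \<forall>j<n. snd s (int (i * n + j)) = A i j)"

lemma mem_matrix_frame:
  assumes m: "mem_matrix n A s" and f: "\<And>a. 0 \<le> a \<Longrightarrow> a < int (n * n) \<Longrightarrow> snd s' a = snd s a"
  shows "mem_matrix n A s'"
  unfolding mem_matrix_def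
proof (intro allI impI)
  fix i j assume ij: "i < n" "j < n"
  have "int (i * n + j) < int (n * n)" using row_major_index_less[OF ij] by (simp only: of_nat_less_iff)
  then show "snd s' (int (i * n + j)) = A i j" using f m ij by (simp add: mem_matrix_def)
qed

abbreviation best_stored :: "nat \<Rightarrow> nat \<Rightarrow> (nat \<Rightarrow> nat \<Rightarrow> real) \<Rightarrow> (nat \<Rightarrow> real) set \<Rightarrow> state \<Rightarrow> bool" where
  "best_stored n k A X s \<equiv> best_among n k A X (snd s (-1)) (snd s (-2)) (best_vec n s)"

lemma best_stored_frame: "best_stored n k A X s \<Longrightarrow> snd s' (-1) = snd s (-1) \<Longrightarrow> snd s' (-2) = snd s (-2) \<Longrightarrow>
   (\<And>j. j < n \<Longrightarrow> snd s' (int (n * n) + int j) = snd s (int (n * n) + int j)) \<Longrightarrow> best_stored n k A X s'"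
proof -
  assume G: "best_stored n k A X s" and a: "snd s' (-1) = snd s (-1)" "snd s' (-2) = snd s (-2)"
    and o: "\<And>j. j < n \<Longrightarrow> snd s' (int (n * n) + int j) = snd s (int (n * n) + int j)"
  have "best_vec n s' = best_vec n s"
  proof
    fix j show "best_vec n s' j = best_vec n s j" using o by (simp add: mem_vec_def)
  qed
  then show ?thesis using G a by simp
qed

lemma nonneg_not_scratch: "0 \<le> (x::int) \<Longrightarrow> x \<notin> {-1, -2, -3, -4, -5}"
  by auto

section \<open>Evaluating a candidate\<close>

definition row_dot :: com where
  "row_dot = for_loop 12 (IR 0) (RSet (IC (-5)) (RAdd (RR (IC (-5))) (RMul (RR (IAdd (IR 13) (IR 12))) (RR (addr_cand 12)))))"

definition quad_row :: com where
  "quad_row = RSet (IC (-5)) (RC 0) ;; row_dot ;;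
     RSet (IC (-3)) (RAdd (RR (IC (-3))) (RMul (RR (addr_cand 7)) (RR (IC (-5))))) ;; ISet 13 (IAdd (IR 13) (IR 0))"

definition eval_quad :: com where
  "eval_quad = RSet (IC (-3)) (RC 0) ;; ISet 13 (IC 0) ;; for_loop 7 (IR 0) quad_row"

lemma row_dot_spec:
  assumes r0: "fst s 0 = int n" and r2: "fst s 2 = int (n * n)" and r13: "fst s 13 = int (p * n)"
    and p: "p < n" and mA: "mem_matrix n A s"
  shows "\<exists>t s'. big_step row_dot s t s' \<and> t \<le> n * 3 + 2 \<and> fst s' = (fst s)(12 := int n) \<and>
     snd s' = (snd s)(-5 := snd s (-5) + (\<Sum>q<n. A p q * mem_vec n s (int (n * n) + int n) q))"
  unfolding row_dot_def
proof (rule for_loop_accumulate[OF r0])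
  fix s1 :: state assume "\<forall>r'. r' \<noteq> 12 \<longrightarrow> fst s1 r' = fst s r'"
  then show "ieval (IC (-5)) s1 = -5" by simp
next
  fix j s1 assume j: "j < n" and fs: "fst s1 = (fst s)(12 := int j)" and fr: "\<forall>a. a \<noteq> -5 \<longrightarrow> snd s1 a = snd s a"
  have e1: "ieval (IAdd (IR 13) (IR 12)) s1 = int (p * n + j)" using fs r13 by simp
  have e2: "ieval (addr_cand 12) s1 = int (n * n + n + j)" using fs r0 r2 by (simp add: addr_cand_def)
  have v1: "snd s1 (int (p * n + j)) = A p j" using fr int_neq_neg_numeral mA p j by (metis mem_matrix_def)
  have v2: "snd s1 (int (n * n + n + j)) = mem_vec n s (int (n * n) + int n) j"
    using fr int_neq_neg_numeral[of "n * n + n + j"] j by (simp add: mem_vec_def)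
  show "reval (RMul (RR (IAdd (IR 13) (IR 12))) (RR (addr_cand 12))) s1 = A p j * mem_vec n s (int (n * n) + int n) j"
    using e1 e2 v1 v2 by simp
qed simp

lemma quad_row_spec:
  assumes r0: "fst s 0 = int n" and r2: "fst s 2 = int (n * n)" and r7: "fst s 7 = int p"
    and r13: "fst s 13 = int (p * n)" and p: "p < n" and mA: "mem_matrix n A s"
  shows "\<exists>t s'. big_step quad_row s t s' \<and> t \<le> n * 3 + 5 \<and>
     fst s' = (fst s)(12 := int n, 13 := int (Suc p * n)) \<and>
     snd s' = (snd s)(-5 := (\<Sum>q<n. A p q * cand_vec n s q),
       -3 := snd s (-3) + cand_vec n s p * (\<Sum>q<n. A p q * cand_vec n s q))"
proof -
  let ?c = "cand_vec n s" and ?d = "\<Sum>q<n. A p q * cand_vec n s q"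
  define s1 where "s1 = (fst s, (snd s)(-5 := 0))"
  have b1: "big_step (RSet (IC (-5)) (RC 0)) s 1 s1" by (rule big_step_RSetI) (simp add: s1_def)
  have mA1: "mem_matrix n A s1" by (rule mem_matrix_frame[OF mA]) (simp add: s1_def)
  have c1: "cand_vec n s1 = ?c"
    using int_neq_neg_numeral[of "n * n + n + _"] by (auto simp: mem_vec_def s1_def)
  have rr: "fst s1 0 = int n" "fst s1 2 = int (n * n)" "fst s1 13 = int (p * n)"
    using r0 r2 r13 by (simp_all add: s1_def)
  obtain t2 s2 where 2: "big_step row_dot s1 t2 s2" "t2 \<le> n * 3 + 2" "fst s2 = (fst s1)(12 := int n)"
    "snd s2 = (snd s1)(-5 := snd s1 (-5) + (\<Sum>q<n. A p q * cand_vec n s1 q))"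
    using row_dot_spec[OF rr p mA1] by blast
  have cp: "snd s2 (fst s2 2 + fst s2 0 + fst s2 7) = ?c p"
  proof -
    have "fst s2 2 + fst s2 0 + fst s2 7 = int (n * n + n + p)" using 2(3) rr r7 by (simp add: s1_def)
    moreover have "snd s2 (int (n * n + n + p)) = snd s (int (n * n + n + p))"
      using 2(4) int_neq_neg_numeral[of "n * n + n + p"] by (simp add: s1_def)
    ultimately show ?thesis using p by (simp add: mem_vec_def)
  qed
  define s3 where "s3 = (fst s2, (snd s2)(-3 := snd s2 (-3) + snd s2 (fst s2 2 + fst s2 0 + fst s2 7) * snd s2 (-5)))"
  have b3: "big_step (RSet (IC (-3)) (RAdd (RR (IC (-3))) (RMul (RR (addr_cand 7)) (RR (IC (-5)))))) s2 1 s3"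
    by (rule big_step_RSetI) (simp add: s3_def addr_cand_def)
  define s4 where "s4 = ((fst s3)(13 := fst s3 13 + fst s3 0), snd s3)"
  have b4: "big_step (ISet 13 (IAdd (IR 13) (IR 0))) s3 1 s4" by (rule big_step_ISetI) (simp add: s4_def)
  have "big_step quad_row s (1 + (t2 + (1 + 1))) s4"
    unfolding quad_row_def by (rule big_step.Seq[OF b1 big_step.Seq[OF 2(1) big_step.Seq[OF b3 b4]]])
  moreover have "1 + (t2 + (1 + 1)) \<le> n * 3 + 5" using 2(2) by simp
  moreover have "fst s4 = (fst s)(12 := int n, 13 := int (Suc p * n))"
    using 2(3) rr r0 by (auto simp: s4_def s3_def s1_def algebra_simps)
  moreover have "snd s4 = (snd s)(-5 := ?d, -3 := snd s (-3) + ?c p * ?d)"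
    using 2(4) cp c1 by (auto simp: s4_def s3_def s1_def)
  ultimately show ?thesis by blast
qed

lemma eval_quad_spec:
  assumes r0: "fst s 0 = int n" and r2: "fst s 2 = int (n * n)" and mA: "mem_matrix n A s"
  shows "\<exists>t s'. big_step eval_quad s t s' \<and> t \<le> n * (n * 3 + 7) + 4 \<and>
     (\<forall>r. r \<notin> {7, 12, 13} \<longrightarrow> fst s' r = fst s r) \<and>
     (\<forall>a. a \<notin> {-3, -5} \<longrightarrow> snd s' a = snd s a) \<and>
     snd s' (-3) = quad n A (cand_vec n s)"
proof -
  let ?c = "cand_vec n s"
  define s0 where "s0 = ((fst s)(13 := 0), (snd s)(-3 := 0))"
  define I where "I p s1 \<longleftrightarrow> (\<forall>r. r \<notin> {7, 12, 13} \<longrightarrow> fst s1 r = fst s r) \<and> fst s1 13 = int (p * n) \<and>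
     (\<forall>a. a \<notin> {-3, -5} \<longrightarrow> snd s1 a = snd s a) \<and>
     snd s1 (-3) = (\<Sum>i<p. ?c i * (\<Sum>q<n. A i q * ?c q))" for p s1
  have "\<exists>t s'. big_step (for_loop 7 (IR 0) quad_row) s0 t s' \<and> t \<le> n * ((n * 3 + 5) + 2) + 2 \<and>
      I n s' \<and> fst s' 7 = int n"
  proof (rule for_loop_bound)
    show "I 0 ((fst s0)(7 := 0), snd s0)" by (simp add: I_def s0_def)
  next
    fix p s1 assume p: "p < n" and I: "I p s1" and c7: "fst s1 7 = int p"
    have rr: "fst s1 0 = int n" "fst s1 2 = int (n * n)" "fst s1 13 = int (p * n)"
      using I r0 r2 by (simp_all add: I_def)
    have mA1: "mem_matrix n A s1" by (rule mem_matrix_frame[OF mA]) (use I in \<open>auto simp: I_def\<close>)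
    have c1: "cand_vec n s1 = ?c"
      using I int_neq_neg_numeral[of "n * n + n + _"] by (auto simp: mem_vec_def I_def)
    obtain t s2 where 2: "big_step quad_row s1 t s2" "t \<le> n * 3 + 5"
      "fst s2 = (fst s1)(12 := int n, 13 := int (Suc p * n))"
      "snd s2 = (snd s1)(-5 := (\<Sum>q<n. A p q * ?c q), -3 := snd s1 (-3) + ?c p * (\<Sum>q<n. A p q * ?c q))"
      using quad_row_spec[OF rr(1,2) c7 rr(3) p mA1] c1 by auto
    have "I (Suc p) ((fst s2)(7 := int p + 1), snd s2)"
      using I 2(3,4) by (auto simp: I_def)
    moreover have "fst s2 7 = int p" using 2(3) c7 by simp
    ultimately show "\<exists>t s'. big_step quad_row s1 t s' \<and> t \<le> n * 3 + 5 \<and> fst s' 7 = int p \<and>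
         I (Suc p) ((fst s')(7 := int p + 1), snd s')" using 2(1,2) by blast
  next
    fix p s1 assume "p \<le> n" "I p s1" "fst s1 7 = int p"
    then show "ieval (IR 0) s1 = int n" using r0 by (simp add: I_def)
  qed
  then obtain t s' where 1: "big_step (for_loop 7 (IR 0) quad_row) s0 t s'"
    "t \<le> n * ((n * 3 + 5) + 2) + 2" "I n s'" by blast
  have "big_step eval_quad s (1 + (1 + t)) s'" unfolding eval_quad_def
    by (rule big_step.Seq[OF big_step_RSetI[OF refl] big_step.Seq[OF big_step_ISetI 1(1)]])
      (simp add: s0_def)
  moreover have "1 + (1 + t) \<le> n * (n * 3 + 7) + 4" using 1(2) by (simp add: algebra_simps)
  moreover have "quad n A ?c = (\<Sum>i<n. ?c i * (\<Sum>q<n. A i q * ?c q))"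
    by (simp add: quad_def sum_distrib_left mult.assoc)
  ultimately show ?thesis using 1(3) unfolding I_def by (intro exI[of _ "1 + (1 + t)"] exI[of _ s']) (auto simp: s0_def)
qed

definition eval_sum_sq :: com where
  "eval_sum_sq = RSet (IC (-4)) (RC 0) ;; for_loop 12 (IR 0) (RSet (IC (-4)) (RAdd (RR (IC (-4))) (RMul (RR (addr_cand 12)) (RR (addr_cand 12)))))"

definition store_best :: com where
  "store_best = RSet (IC (-1)) (RR (IC (-3))) ;; RSet (IC (-2)) (RR (IC (-4))) ;; for_loop 12 (IR 0) (RSet (addr_best 12) (RR (addr_cand 12)))"

definition compare_best :: com where
  "compare_best = CIf (RLess (RC 0) (RR (IC (-4))))
     (CIf (REq (RR (IC (-2))) (RC 0)) store_best
        (CIf (RLess (RMul (RR (IC (-1))) (RR (IC (-4)))) (RMul (RR (IC (-3))) (RR (IC (-2))))) store_best CSkip))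
     CSkip"

definition eval_candidate :: com where "eval_candidate = eval_quad ;; eval_sum_sq ;; compare_best"

lemma eval_sum_sq_spec:
  assumes r0: "fst s 0 = int n" and r2: "fst s 2 = int (n * n)"
  shows "\<exists>t s'. big_step eval_sum_sq s t s' \<and> t \<le> n * 3 + 3 \<and> fst s' = (fst s)(12 := int n) \<and>
     snd s' = (snd s)(-4 := sum_sq n (cand_vec n s))"
proof -
  define s1 where "s1 = (fst s, (snd s)(-4 := 0))"
  have b1: "big_step (RSet (IC (-4)) (RC 0)) s 1 s1" by (rule big_step_RSetI) (simp add: s1_def)
  have "\<exists>t s'. big_step (for_loop 12 (IR 0) (RSet (IC (-4)) (RAdd (RR (IC (-4))) (RMul (RR (addr_cand 12)) (RR (addr_cand 12)))))) s1 t s' \<and>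
     t \<le> n * 3 + 2 \<and> fst s' = (fst s1)(12 := int n) \<and> snd s' = (snd s1)(-4 := snd s1 (-4) + (\<Sum>j<n. cand_vec n s j * cand_vec n s j))"
  proof (rule for_loop_accumulate)
    show "fst s1 0 = int n" using r0 by (simp add: s1_def)
  next
    fix s2 :: state assume "\<forall>r'. r' \<noteq> 12 \<longrightarrow> fst s2 r' = fst s1 r'"
    then show "ieval (IC (-4)) s2 = -4" by simp
  next
    fix j s2 assume j: "j < n" and fs: "fst s2 = (fst s1)(12 := int j)" and fr: "\<forall>a. a \<noteq> -4 \<longrightarrow> snd s2 a = snd s1 a"
    have e: "ieval (addr_cand 12) s2 = int (n * n + n + j)" using fs r0 r2 by (simp add: addr_cand_def s1_def)
    have v: "snd s2 (int (n * n + n + j)) = cand_vec n s j"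
      using fr int_neq_neg_numeral[of "n * n + n + j"] j by (simp add: mem_vec_def s1_def)
    show "reval (RMul (RR (addr_cand 12)) (RR (addr_cand 12))) s2 = cand_vec n s j * cand_vec n s j" using e v by simp
  qed simp
  then obtain t s' where 2: "big_step (for_loop 12 (IR 0) (RSet (IC (-4)) (RAdd (RR (IC (-4))) (RMul (RR (addr_cand 12)) (RR (addr_cand 12)))))) s1 t s'"
    "t \<le> n * 3 + 2" "fst s' = (fst s1)(12 := int n)" "snd s' = (snd s1)(-4 := snd s1 (-4) + (\<Sum>j<n. cand_vec n s j * cand_vec n s j))"
    by blast
  have "big_step eval_sum_sq s (1 + t) s'" unfolding eval_sum_sq_def by (rule big_step.Seq[OF b1 2(1)])
  moreover have "(\<Sum>j<n. cand_vec n s j * cand_vec n s j) = sum_sq n (cand_vec n s)" by (simp add: sum_sq_def power2_eq_square)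
  ultimately show ?thesis using 2 by (intro exI[of _ "1 + t"] exI[of _ s']) (auto simp: s1_def)
qed

lemma store_best_spec:
  assumes r0: "fst s 0 = int n" and r2: "fst s 2 = int (n * n)"
  shows "\<exists>t s'. big_step store_best s t s' \<and> t \<le> n * 3 + 4 \<and> fst s' = (fst s)(12 := int n) \<and>
     snd s' (-1) = snd s (-3) \<and> snd s' (-2) = snd s (-4) \<and> best_vec n s' = cand_vec n s \<and>
     (\<forall>a. a \<notin> {-1, -2} \<and> (a < int (n * n) \<or> int (n * n) + int n \<le> a) \<longrightarrow> snd s' a = snd s a)"
proof -
  define s1 where "s1 = (fst s, (snd s)(-1 := snd s (-3)))"
  have b1: "big_step (RSet (IC (-1)) (RR (IC (-3)))) s 1 s1" by (rule big_step_RSetI) (simp add: s1_def)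
  define s2 where "s2 = (fst s1, (snd s1)(-2 := snd s1 (-4)))"
  have b2: "big_step (RSet (IC (-2)) (RR (IC (-4)))) s1 1 s2" by (rule big_step_RSetI) (simp add: s2_def)
  have "\<exists>t s'. big_step (for_loop 12 (IR 0) (RSet (addr_best 12) (RR (addr_cand 12)))) s2 t s' \<and> t \<le> n * (1 + 2) + 2 \<and>
     fst s' = (fst s2)(12 := int n) \<and> (\<forall>j<n. snd s' (int (n * n) + int j) = cand_vec n s j) \<and>
     (\<forall>a. (a < int (n * n) \<or> int (n * n) + int n \<le> a) \<longrightarrow> snd s' a = snd s2 a)"
  proof (rule for_loop_fill)
    show "fst s2 0 = int n" using r0 by (simp add: s1_def s2_def)
  next
    fix j s3 assume j: "j < n" and fs: "fst s3 = (fst s2)(12 := int j)"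
      and fr: "\<forall>a. (a < int (n * n) \<or> int (n * n) + int j \<le> a) \<longrightarrow> snd s3 a = snd s2 a"
    have e1: "ieval (addr_best 12) s3 = int (n * n) + int j" using fs r2 by (simp add: addr_best_def s1_def s2_def)
    have e2: "ieval (addr_cand 12) s3 = int (n * n) + int n + int j" using fs r0 r2 by (simp add: addr_cand_def s1_def s2_def)
    have v: "snd s3 (int (n * n) + int n + int j) = cand_vec n s j"
    proof -
      have "snd s3 (int (n * n) + int n + int j) = snd s2 (int (n * n) + int n + int j)" using fr by simp
      also have "\<dots> = snd s (int (n * n + n + j))" using int_neq_neg_numeral[of "n * n + n + j"] int_neq_minus_one[of "n * n + n + j"] by (simp add: s1_def s2_def)
      finally show ?thesis using j by (simp add: mem_vec_def)
    qed
    show "\<exists>t s4. big_step (RSet (addr_best 12) (RR (addr_cand 12))) s3 t s4 \<and> t \<le> 1 \<and> snd s4 = (snd s3)(int (n * n) + int j := cand_vec n s j)"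
    proof (intro exI[of _ 1] exI conjI)
      show "big_step (RSet (addr_best 12) (RR (addr_cand 12))) s3 1 (fst s3, (snd s3)(ieval (addr_best 12) s3 := reval (RR (addr_cand 12)) s3))"
        by (rule big_step_RSetI[OF refl])
    qed (simp_all add: e1 e2 v del: of_nat_mult)
  qed simp_all
  then obtain t s' where 3: "big_step (for_loop 12 (IR 0) (RSet (addr_best 12) (RR (addr_cand 12)))) s2 t s'" "t \<le> n * (1 + 2) + 2"
     "fst s' = (fst s2)(12 := int n)" "\<forall>j<n. snd s' (int (n * n) + int j) = cand_vec n s j"
     "\<forall>a. (a < int (n * n) \<or> int (n * n) + int n \<le> a) \<longrightarrow> snd s' a = snd s2 a" by blast
  have bb: "big_step store_best s (1 + (1 + t)) s'" unfolding store_best_def by (rule big_step.Seq[OF b1 big_step.Seq[OF b2 3(1)]])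
  have o: "best_vec n s' = cand_vec n s"
  proof
    fix j show "best_vec n s' j = cand_vec n s j" using 3(4) by (simp add: mem_vec_def)
  qed
  have neg: "(-1::int) < int (n * n)" "(-2::int) < int (n * n)" by (rule neg_less_int)+
  have m1: "snd s' (-1) = snd s (-3)" "snd s' (-2) = snd s (-4)"
    using 3(5)[rule_format, OF disjI1[OF neg(1)]] 3(5)[rule_format, OF disjI1[OF neg(2)]]
    by (simp_all add: s1_def s2_def)
  show ?thesis using bb 3(2,3,5) o m1 by (intro exI[of _ "1 + (1 + t)"] exI[of _ s']) (auto simp: s1_def s2_def)
qed

lemma compare_best_spec:
  assumes r0: "fst s 0 = int n" and r2: "fst s 2 = int (n * n)" and G: "best_stored n k A X s"
    and num: "snd s (-3) = quad n A (cand_vec n s)" and den: "snd s (-4) = sum_sq n (cand_vec n s)"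
    and sp: "norm0 n (cand_vec n s) \<le> k"
  shows "\<exists>t s'. big_step compare_best s t s' \<and> t \<le> n * 3 + 7 \<and>
     best_stored n k A (insert (cand_vec n s) X) s' \<and> (\<forall>r. r \<noteq> 12 \<longrightarrow> fst s' r = fst s r) \<and>
     (\<forall>a. a \<notin> {-1, -2} \<and> (a < int (n * n) \<or> int (n * n) + int n \<le> a) \<longrightarrow> snd s' a = snd s a)"
proof (cases "0 < sum_sq n (cand_vec n s)")
  case False
  have "big_step compare_best s (Suc 0) s" unfolding compare_best_def
    by (rule big_step.IfF) (use False den in \<open>simp_all add: big_step.Skip\<close>)
  then show ?thesis using best_among_insert_zero[OF G False] by (intro exI[of _ "Suc 0"] exI[of _ s]) auto
next
  case True
  let ?c = "cand_vec n s"
  obtain t s' where 1: "big_step store_best s t s'" "t \<le> n * 3 + 4" "fst s' = (fst s)(12 := int n)"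
    "snd s' (-1) = snd s (-3)" "snd s' (-2) = snd s (-4)" "best_vec n s' = ?c"
    "\<forall>a. a \<notin> {-1, -2} \<and> (a < int (n * n) \<or> int (n * n) + int n \<le> a) \<longrightarrow> snd s' a = snd s a"
    using store_best_spec[OF r0 r2] by blast
  have stored: "best_stored n k A (insert ?c X) s'"
    if "best_among n k A (insert ?c X) (quad n A ?c) (sum_sq n ?c) ?c"
    using that 1(4,5,6) num den by simp
  show ?thesis
  proof (cases "snd s (-2) = 0")
    case bd0: True
    have "big_step compare_best s (Suc (Suc t)) s'" unfolding compare_best_def
      by (rule big_step.IfT, use True den in simp, rule big_step.IfT, use bd0 in simp, rule 1(1))
    then show ?thesis using stored[OF best_among_insert_first[OF G True bd0 sp]] 1 by (intro exI exI conjI) auto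
  next
    case bd: False
    show ?thesis
    proof (cases "snd s (-1) * sum_sq n ?c < quad n A ?c * snd s (-2)")
      case lt: True
      have "big_step compare_best s (Suc (Suc (Suc t))) s'" unfolding compare_best_def
        by (rule big_step.IfT, use True den in simp, rule big_step.IfF, use bd in simp,
            rule big_step.IfT, use lt num den in simp, rule 1(1))
      then show ?thesis using stored[OF best_among_insert_better[OF G True bd sp lt]] 1 by (intro exI exI conjI) auto
    next
      case ge: False
      have "big_step compare_best s (Suc (Suc (Suc 0))) s" unfolding compare_best_def
        by (rule big_step.IfT, use True den in simp, rule big_step.IfF, use bd in simp,
            rule big_step.IfF, use ge num den in simp, rule big_step.Skip)
      then show ?thesis using best_among_insert_worse[OF G True bd ge]
        by (intro exI[of _ "Suc (Suc (Suc 0))"] exI[of _ s]) auto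
    qed
  qed
qed

lemma eval_candidate_spec:
  assumes r0: "fst s 0 = int n" and r2: "fst s 2 = int (n * n)" and mA: "mem_matrix n A s"
    and G: "best_stored n k A X s" and sp: "norm0 n (cand_vec n s) \<le> k"
  shows "\<exists>t s'. big_step eval_candidate s t s' \<and> t \<le> 3 * n * n + 13 * n + 14 \<and> best_stored n k A (insert (cand_vec n s) X) s' \<and>
     (\<forall>r. r \<notin> {7, 12, 13} \<longrightarrow> fst s' r = fst s r) \<and>
     (\<forall>a. a \<notin> {-1, -2, -3, -4, -5} \<and> (a < int (n * n) \<or> int (n * n) + int n \<le> a) \<longrightarrow> snd s' a = snd s a)"
proof -
  let ?c = "cand_vec n s"
  obtain t1 s1 where 1: "big_step eval_quad s t1 s1" "t1 \<le> n * (n * 3 + 7) + 4"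
    "\<forall>r. r \<notin> {7, 12, 13} \<longrightarrow> fst s1 r = fst s r" "\<forall>a. a \<notin> {-3, -5} \<longrightarrow> snd s1 a = snd s a"
    "snd s1 (-3) = quad n A ?c" using eval_quad_spec[OF r0 r2 mA] by blast
  have r0': "fst s1 0 = int n" and r2': "fst s1 2 = int (n * n)" using 1(3) r0 r2 by auto
  obtain t2 s2 where 2: "big_step eval_sum_sq s1 t2 s2" "t2 \<le> n * 3 + 3" "fst s2 = (fst s1)(12 := int n)"
    "snd s2 = (snd s1)(-4 := sum_sq n (cand_vec n s1))" using eval_sum_sq_spec[OF r0' r2'] by blast
  have fr2: "\<forall>a. a \<notin> {-3, -4, -5} \<longrightarrow> snd s2 a = snd s a" using 2(4) 1(4) by simp
  have c2: "cand_vec n s2 = ?c" "cand_vec n s1 = ?c"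
    using fr2 1(4) int_neq_neg_numeral[of "n * n + n + _"] by (auto simp: mem_vec_def)
  have "best_vec n s2 = best_vec n s"
    using fr2 int_neq_neg_numeral[of "n * n + _"] by (auto simp: mem_vec_def)
  then have G2: "best_stored n k A X s2" using G fr2 by simp
  have num: "snd s2 (-3) = quad n A (cand_vec n s2)" and den: "snd s2 (-4) = sum_sq n (cand_vec n s2)"
    using 1(5) 2(4) c2 by simp_all
  have r0'': "fst s2 0 = int n" and r2'': "fst s2 2 = int (n * n)" using 2(3) r0' r2' by auto
  obtain t3 s3 where 3: "big_step compare_best s2 t3 s3" "t3 \<le> n * 3 + 7" "best_stored n k A (insert ?c X) s3"
     "\<forall>r. r \<noteq> 12 \<longrightarrow> fst s3 r = fst s2 r"
     "\<forall>a. a \<notin> {-1, -2} \<and> (a < int (n * n) \<or> int (n * n) + int n \<le> a) \<longrightarrow> snd s3 a = snd s2 a"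
    using compare_best_spec[OF r0'' r2'' G2 num den] sp c2 by auto
  have bb: "big_step eval_candidate s (t1 + (t2 + t3)) s3" unfolding eval_candidate_def
    by (rule big_step.Seq[OF 1(1) big_step.Seq[OF 2(1) 3(1)]])
  have tt: "t1 + (t2 + t3) \<le> 3 * n * n + 13 * n + 14" using 1(2) 2(2) 3(2) by (simp add: algebra_simps)
  show ?thesis using bb tt 3(3-5) 2(3) 1(3) fr2
    by (intro exI[of _ "t1 + (t2 + t3)"] exI[of _ s3]) auto
qed

section \<open>Generating the candidates\<close>

definition set_unit_cand :: com where
  "set_unit_cand = for_loop 4 (IR 0) (CIf (IEq (IR 4) (IR 3)) (RSet (addr_cand 4) (RC 1)) (RSet (addr_cand 4) (RC 0)))"

lemma set_unit_cand_spec: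
  assumes r0: "fst s 0 = int n" and r2: "fst s 2 = int (n * n)" and r3: "fst s 3 = int i" and i: "i < n"
  shows "\<exists>t s'. big_step set_unit_cand s t s' \<and> t \<le> n * 4 + 2 \<and> fst s' = (fst s)(4 := int n) \<and> cand_vec n s' = unit_vec i \<and>
     (\<forall>a. (a < int (n * n) + int n \<or> int (n * n) + int n + int n \<le> a) \<longrightarrow> snd s' a = snd s a)"
proof -
  have "\<exists>t s'. big_step set_unit_cand s t s' \<and> t \<le> n * (2 + 2) + 2 \<and> fst s' = (fst s)(4 := int n) \<and>
     (\<forall>j<n. snd s' (int (n * n) + int n + int j) = (if j = i then 1 else 0)) \<and>
     (\<forall>a. (a < int (n * n) + int n \<or> int (n * n) + int n + int n \<le> a) \<longrightarrow> snd s' a = snd s a)"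
    unfolding set_unit_cand_def
  proof (rule for_loop_fill[OF r0])
    fix j and s1 :: state assume j: "j < n" and fs: "fst s1 = (fst s)(4 := int j)"
    have e: "ieval (addr_cand 4) s1 = int (n * n) + int n + int j" using fs r0 r2 by (simp add: addr_cand_def)
    show "\<exists>t s2. big_step (CIf (IEq (IR 4) (IR 3)) (RSet (addr_cand 4) (RC 1)) (RSet (addr_cand 4) (RC 0))) s1 t s2 \<and> t \<le> 2 \<and>
        snd s2 = (snd s1)(int (n * n) + int n + int j := (if j = i then 1 else 0))"
    proof (cases "j = i")
      case True
      have "big_step (CIf (IEq (IR 4) (IR 3)) (RSet (addr_cand 4) (RC 1)) (RSet (addr_cand 4) (RC 0))) s1 (Suc 1)
          (fst s1, (snd s1)(int (n * n) + int n + int j := 1))"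
        by (rule big_step.IfT[OF _ big_step_RSetI]) (use fs r3 True e in simp)+
      then show ?thesis using True by (intro exI conjI) auto
    next
      case False
      have "big_step (CIf (IEq (IR 4) (IR 3)) (RSet (addr_cand 4) (RC 1)) (RSet (addr_cand 4) (RC 0))) s1 (Suc 1)
          (fst s1, (snd s1)(int (n * n) + int n + int j := 0))"
        by (rule big_step.IfF[OF _ big_step_RSetI]) (use fs r3 False e in simp)+
      then show ?thesis using False by (intro exI conjI) auto
    qed
  qed simp_all
  then obtain t s' where 1: "big_step set_unit_cand s t s'" "t \<le> n * (2 + 2) + 2" "fst s' = (fst s)(4 := int n)"
    "\<forall>j<n. snd s' (int (n * n) + int n + int j) = (if j = i then 1 else 0)"
    "\<forall>a. (a < int (n * n) + int n \<or> int (n * n) + int n + int n \<le> a) \<longrightarrow> snd s' a = snd s a" by blast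
  have "cand_vec n s' = unit_vec i"
  proof
    fix j show "cand_vec n s' j = unit_vec i j" using 1(4) i by (auto simp: mem_vec_def unit_vec_def)
  qed
  then show ?thesis using 1 by (intro exI[of _ t] exI[of _ s']) auto
qed

definition rsquare :: "iexp \<Rightarrow> rexp" where "rsquare a = RMul (RR a) (RR a)"

definition rank_inc :: com where "rank_inc = ISet 6 (IAdd (IR 6) (IC 1))"

definition rank_step :: com where
  "rank_step = CIf (RLess (rsquare (addr_iter 4)) (rsquare (addr_iter 5))) rank_inc
     (CIf (REq (rsquare (addr_iter 5)) (rsquare (addr_iter 4))) (CIf (ILess (IR 5) (IR 4)) rank_inc CSkip) CSkip)"

definition rank_loop :: com where "rank_loop = for_loop 5 (IR 0) rank_step"

definition copy_row :: com where "copy_row = for_loop 4 (IR 0) (RSet (addr_iter 4) (RR (IAdd (IR 8) (IR 4))))"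

definition row_top_step :: com where
  "row_top_step = ISet 6 (IC 0) ;; rank_loop ;; CIf (ILess (IR 6) (IR 1)) (RSet (addr_cand 4) (RR (addr_iter 4))) (RSet (addr_cand 4) (RC 0))"

definition set_row_cand :: com where "set_row_cand = copy_row ;; for_loop 4 (IR 0) row_top_step"

lemma rank_step_spec:
  assumes r0: "fst s1 0 = int n" and r2: "fst s1 2 = int (n * n)" and r4: "fst s1 4 = int j" and r5: "fst s1 5 = int jj"
    and j: "j < n" and jj: "jj < n" and Y: "\<forall>l<n. snd s1 (int (n * n) + int n + int n + int l) = A i l"
  shows "\<exists>t s2. big_step rank_step s1 t s2 \<and> t \<le> 4 \<and> snd s2 = snd s1 \<and>
     fst s2 = (fst s1)(6 := fst s1 6 + (if precedes (row_sq A i) jj j then 1 else 0))"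
proof -
  have ya: "reval (rsquare (addr_iter 4)) s1 = row_sq A i j" "reval (rsquare (addr_iter 5)) s1 = row_sq A i jj"
    using Y r0 r2 r4 r5 j jj by (simp_all add: rsquare_def addr_iter_def row_sq_def)
  have inc: "big_step rank_inc s1 1 ((fst s1)(6 := fst s1 6 + 1), snd s1)" unfolding rank_inc_def
    by (rule big_step_ISetI) simp
  show ?thesis
  proof (cases "row_sq A i j < row_sq A i jj")
    case True
    then have "precedes (row_sq A i) jj j" by (simp add: precedes_def)
    moreover have "big_step rank_step s1 (Suc 1) ((fst s1)(6 := fst s1 6 + 1), snd s1)" unfolding rank_step_def
      by (rule big_step.IfT[OF _ inc]) (use True ya in simp)
    ultimately show ?thesis by (intro exI[of _ "Suc 1"] exI[of _ "((fst s1)(6 := fst s1 6 + 1), snd s1)"]) auto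
  next
    case False
    note F = False
    show ?thesis
    proof (cases "row_sq A i jj = row_sq A i j")
      case True
      show ?thesis
      proof (cases "jj < j")
        case True
        then have "precedes (row_sq A i) jj j" using \<open>row_sq A i jj = row_sq A i j\<close> by (simp add: precedes_def)
        moreover have "big_step rank_step s1 (Suc (Suc (Suc 1))) ((fst s1)(6 := fst s1 6 + 1), snd s1)" unfolding rank_step_def
          by (rule big_step.IfF[OF _ big_step.IfT[OF _ big_step.IfT[OF _ inc]]])
             (use F \<open>row_sq A i jj = row_sq A i j\<close> True ya r4 r5 in simp_all)
        ultimately show ?thesis by (intro exI[of _ "Suc (Suc (Suc 1))"] exI[of _ "((fst s1)(6 := fst s1 6 + 1), snd s1)"]) auto
      next
        case False
        then have "\<not> precedes (row_sq A i) jj j" using F by (auto simp: precedes_def)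
        moreover have "big_step rank_step s1 (Suc (Suc (Suc 0))) s1" unfolding rank_step_def
          by (rule big_step.IfF[OF _ big_step.IfT[OF _ big_step.IfF[OF _ big_step.Skip]]])
             (use F \<open>row_sq A i jj = row_sq A i j\<close> False ya r4 r5 in simp_all)
        ultimately show ?thesis by (intro exI[of _ "Suc (Suc (Suc 0))"] exI[of _ s1]) auto
      qed
    next
      case False
      then have "\<not> precedes (row_sq A i) jj j" using F by (auto simp: precedes_def)
      moreover have "big_step rank_step s1 (Suc (Suc 0)) s1" unfolding rank_step_def
        by (rule big_step.IfF[OF _ big_step.IfF[OF _ big_step.Skip]]) (use F False ya in simp_all)
      ultimately show ?thesis by (intro exI[of _ "Suc (Suc 0)"] exI[of _ s1]) auto
    qed
  qed
qed

lemma card_precedes_Suc: "card {a. a < Suc jj \<and> precedes v a j} = card {a. a < jj \<and> precedes v a j} + (if precedes v jj j then 1 else 0)"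
proof -
  have "{a. a < Suc jj \<and> precedes v a j} = {a. a < jj \<and> precedes v a j} \<union> (if precedes v jj j then {jj} else {})"
    by (auto simp: less_Suc_eq)
  then show ?thesis by (auto simp: card_insert_if)
qed

lemma rank_loop_spec:
  assumes r0: "fst s 0 = int n" and r2: "fst s 2 = int (n * n)" and r4: "fst s 4 = int j"
    and j: "j < n" and r6: "fst s 6 = 0" and Y: "\<forall>l<n. snd s (int (n * n) + int n + int n + int l) = A i l"
  shows "\<exists>t s'. big_step rank_loop s t s' \<and> t \<le> n * 6 + 2 \<and> snd s' = snd s \<and>
     (\<forall>r. r \<notin> {5, 6} \<longrightarrow> fst s' r = fst s r) \<and> fst s' 6 = int (rank_of n (row_sq A i) j)"
proof -
  define I where "I jj s1 \<longleftrightarrow> snd s1 = snd s \<and> (\<forall>r. r \<notin> {5, 6} \<longrightarrow> fst s1 r = fst s r) \<and>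
     fst s1 6 = int (card {a. a < jj \<and> precedes (row_sq A i) a j})" for jj s1
  have "\<exists>t s'. big_step (for_loop 5 (IR 0) rank_step) s t s' \<and> t \<le> n * (4 + 2) + 2 \<and> I n s' \<and> fst s' 5 = int n"
  proof (rule for_loop_bound)
    show "I 0 ((fst s)(5 := 0), snd s)" using r6 by (simp add: I_def)
  next
    fix jj s1 assume jj: "jj < n" and I: "I jj s1" and c: "fst s1 5 = int jj"
    obtain t s2 where 1: "big_step rank_step s1 t s2" "t \<le> 4" "snd s2 = snd s1"
      "fst s2 = (fst s1)(6 := fst s1 6 + (if precedes (row_sq A i) jj j then 1 else 0))"
      using rank_step_spec[of s1 n j jj A i] I c r0 r2 r4 j jj Y by (auto simp: I_def)
    have "I (Suc jj) ((fst s2)(5 := int jj + 1), snd s2)"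
      using 1(3,4) I by (auto simp: I_def card_precedes_Suc)
    moreover have "fst s2 5 = int jj" using 1(4) c by simp
    ultimately show "\<exists>t s'. big_step rank_step s1 t s' \<and> t \<le> 4 \<and> fst s' 5 = int jj \<and> I (Suc jj) ((fst s')(5 := int jj + 1), snd s')"
      using 1 by (intro exI[of _ t] exI[of _ s2]) simp
  next
    fix jj s1 assume "jj \<le> n" "I jj s1" "fst s1 5 = int jj"
    then show "ieval (IR 0) s1 = int n" using r0 by (simp add: I_def)
  qed
  then obtain t s' where "big_step rank_loop s t s'" "t \<le> n * (4 + 2) + 2" "I n s'" unfolding rank_loop_def by blast
  then show ?thesis by (intro exI[of _ t] exI[of _ s']) (auto simp: I_def rank_of_def)
qed

lemma copy_row_spec:
  assumes r0: "fst s 0 = int n" and r2: "fst s 2 = int (n * n)" and r8: "fst s 8 = int (i * n)" and i: "i < n"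
    and mA: "mem_matrix n A s"
  shows "\<exists>t s'. big_step copy_row s t s' \<and> t \<le> n * 3 + 2 \<and> fst s' = (fst s)(4 := int n) \<and>
     (\<forall>l<n. snd s' (int (n * n) + int n + int n + int l) = A i l) \<and>
     (\<forall>a. (a < int (n * n) + int n + int n \<or> int (n * n) + int n + int n + int n \<le> a) \<longrightarrow> snd s' a = snd s a)"
proof -
  have "\<exists>t s'. big_step copy_row s t s' \<and> t \<le> n * (1 + 2) + 2 \<and> fst s' = (fst s)(4 := int n) \<and>
     (\<forall>l<n. snd s' (int (n * n) + int n + int n + int l) = A i l) \<and>
     (\<forall>a. (a < int (n * n) + int n + int n \<or> int (n * n) + int n + int n + int n \<le> a) \<longrightarrow> snd s' a = snd s a)"
    unfolding copy_row_def
  proof (rule for_loop_fill[OF r0])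
    fix j and s1 :: state assume j: "j < n" and fs: "fst s1 = (fst s)(4 := int j)"
      and fr: "\<forall>a. (a < int (n * n) + int n + int n \<or> int (n * n) + int n + int n + int j \<le> a) \<longrightarrow> snd s1 a = snd s a"
    have e1: "ieval (addr_iter 4) s1 = int (n * n) + int n + int n + int j" using fs r0 r2 by (simp add: addr_iter_def)
    have lt: "i * n + j < n * n" using i j by (rule row_major_index_less)
    have e2: "fst s1 8 + fst s1 4 = int (i * n + j)" using fs r8 by simp
    have v: "snd s1 (int (i * n + j)) = A i j"
    proof -
      have "int (i * n + j) < int (n * n) + int n + int n" using lt by linarith
      then have "snd s1 (int (i * n + j)) = snd s (int (i * n + j))" using fr by blast
      then show ?thesis using mA i j by (simp add: mem_matrix_def)
    qed
    show "\<exists>t s2. big_step (RSet (addr_iter 4) (RR (IAdd (IR 8) (IR 4)))) s1 t s2 \<and> t \<le> 1 \<and>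
        snd s2 = (snd s1)(int (n * n) + int n + int n + int j := A i j)"
    proof (intro exI[of _ 1] exI conjI)
      show "big_step (RSet (addr_iter 4) (RR (IAdd (IR 8) (IR 4)))) s1 1 (fst s1, (snd s1)(ieval (addr_iter 4) s1 := reval (RR (IAdd (IR 8) (IR 4))) s1))"
        by (rule big_step_RSetI[OF refl])
    qed (simp_all add: e1 e2 v del: of_nat_mult of_nat_add)
  qed simp_all
  then obtain t s' where "big_step copy_row s t s' \<and> t \<le> n * (1 + 2) + 2 \<and> fst s' = (fst s)(4 := int n) \<and>
     (\<forall>l<n. snd s' (int (n * n) + int n + int n + int l) = A i l) \<and>
     (\<forall>a. (a < int (n * n) + int n + int n \<or> int (n * n) + int n + int n + int n \<le> a) \<longrightarrow> snd s' a = snd s a)" by blast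
  then show ?thesis by (intro exI[of _ t] exI[of _ s']) auto
qed

lemma row_top_step_spec:
  assumes r0: "fst s 0 = int n" and r1: "fst s 1 = int k" and r2: "fst s 2 = int (n * n)"
    and r4: "fst s 4 = int j" and j: "j < n"
    and Y: "\<forall>l<n. snd s (int (n * n) + int n + int n + int l) = A i l"
  shows "\<exists>t s'. big_step row_top_step s t s' \<and> t \<le> n * 6 + 5 \<and>
     (\<forall>r. r \<notin> {5, 6} \<longrightarrow> fst s' r = fst s r) \<and>
     snd s' = (snd s)(int (n * n) + int n + int j := row_top n k A i j)"
proof -
  define s1 where "s1 = ((fst s)(6 := 0), snd s)"
  have b1: "big_step (ISet 6 (IC 0)) s 1 s1" by (rule big_step_ISetI) (simp add: s1_def)
  obtain t2 s2 where 2: "big_step rank_loop s1 t2 s2" "t2 \<le> n * 6 + 2" "snd s2 = snd s1"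
      "\<forall>r. r \<notin> {5, 6} \<longrightarrow> fst s2 r = fst s1 r" "fst s2 6 = int (rank_of n (row_sq A i) j)"
    using rank_loop_spec[of s1 n j A i] r0 r2 r4 j Y by (auto simp: s1_def)
  have rr: "fst s2 0 = int n" "fst s2 1 = int k" "fst s2 2 = int (n * n)" "fst s2 4 = int j"
    using 2(4) r0 r1 r2 r4 by (auto simp: s1_def)
  have yj: "snd s2 (int (n * n) + int n + int n + int j) = A i j" using 2(3) Y j by (simp add: s1_def)
  let ?C = "CIf (ILess (IR 6) (IR 1)) (RSet (addr_cand 4) (RR (addr_iter 4))) (RSet (addr_cand 4) (RC 0))"
  let ?s3 = "(fst s2, (snd s2)(int (n * n) + int n + int j := row_top n k A i j))"
  have 3: "big_step ?C s2 (Suc 1) ?s3"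
  proof (cases "rank_of n (row_sq A i) j < k")
    case True
    then show ?thesis using j
      by (intro big_step.IfT big_step_RSetI) (auto simp: rr rr(2)[unfolded One_nat_def] yj[simplified] 2(5) addr_cand_def addr_iter_def row_top_def)
  next
    case False
    then show ?thesis
      by (intro big_step.IfF big_step_RSetI) (auto simp: rr rr(2)[unfolded One_nat_def] 2(5) addr_cand_def row_top_def)
  qed
  have "big_step row_top_step s (1 + (t2 + Suc 1)) ?s3" unfolding row_top_step_def
    by (rule big_step.Seq[OF b1 big_step.Seq[OF 2(1) 3]])
  moreover have "1 + (t2 + Suc 1) \<le> n * 6 + 5" using 2(2) by simp
  ultimately show ?thesis using 2(3,4) by (intro exI[of _ "1 + (t2 + Suc 1)"] exI[of _ ?s3]) (auto simp: s1_def)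
qed

lemma row_top_loop_spec:
  assumes r0: "fst s 0 = int n" and r1: "fst s 1 = int k" and r2: "fst s 2 = int (n * n)"
    and Y: "\<forall>l<n. snd s (int (n * n) + int n + int n + int l) = A i l"
  shows "\<exists>t s'. big_step (for_loop 4 (IR 0) row_top_step) s t s' \<and> t \<le> n * (n * 6 + 7) + 2 \<and>
     (\<forall>r. r \<notin> {4, 5, 6} \<longrightarrow> fst s' r = fst s r) \<and> cand_vec n s' = row_top n k A i \<and>
     (\<forall>a. (a < int (n * n) + int n \<or> int (n * n) + int n + int n \<le> a) \<longrightarrow> snd s' a = snd s a)"
proof -
  have "\<exists>t s'. big_step (for_loop 4 (IR 0) row_top_step) s t s' \<and> t \<le> n * ((n * 6 + 5) + 2) + 2 \<and>
     True \<and> fst s' 4 = int n \<and> (\<forall>r'. r' \<notin> insert 4 {5, 6} \<longrightarrow> fst s' r' = fst s r') \<and>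
     (\<forall>j<n. snd s' (int (n * n) + int n + int j) = row_top n k A i j) \<and>
     (\<forall>a. (a < int (n * n) + int n \<or> int (n * n) + int n + int n \<le> a) \<longrightarrow> snd s' a = snd s a)"
  proof (rule for_loop_fill_inv[OF r0, where P = "\<lambda>_ _. True"])
    show "written_regs row_top_step \<subseteq> {5, 6}" by (simp add: row_top_step_def rank_loop_def rank_step_def rank_inc_def)
  next
    fix j and s1 :: state assume j: "j < n" and c4: "fst s1 4 = int j"
      and fr: "\<forall>r'. r' \<notin> insert 4 {5, 6} \<longrightarrow> fst s1 r' = fst s r'"
      and fm: "\<forall>a. (a < int (n * n) + int n \<or> int (n * n) + int n + int j \<le> a) \<longrightarrow> snd s1 a = snd s a"
    have "\<forall>l<n. snd s1 (int (n * n) + int n + int n + int l) = A i l"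
    proof (intro allI impI)
      fix l assume "l < n"
      have "int (n * n) + int n + int j \<le> int (n * n) + int n + int n + int l" using j by simp
      then show "snd s1 (int (n * n) + int n + int n + int l) = A i l" using fm Y \<open>l < n\<close> by simp
    qed
    then show "\<exists>t s2. big_step row_top_step s1 t s2 \<and> t \<le> n * 6 + 5 \<and>
        snd s2 = (snd s1)(int (n * n) + int n + int j := row_top n k A i j) \<and> True"
      using row_top_step_spec[of s1 n k j A i] fr r0 r1 r2 c4 j by auto
  qed simp_all
  then obtain t s' where 1: "big_step (for_loop 4 (IR 0) row_top_step) s t s'" "t \<le> n * ((n * 6 + 5) + 2) + 2"
     "\<forall>r'. r' \<notin> insert 4 {5, 6} \<longrightarrow> fst s' r' = fst s r'"
     "\<forall>j<n. snd s' (int (n * n) + int n + int j) = row_top n k A i j"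
     "\<forall>a. (a < int (n * n) + int n \<or> int (n * n) + int n + int n \<le> a) \<longrightarrow> snd s' a = snd s a" by blast
  have "cand_vec n s' = row_top n k A i" using 1(4) by (auto simp: mem_vec_def row_top_def)
  moreover have "t \<le> n * (n * 6 + 7) + 2" using 1(2) by (simp add: algebra_simps)
  ultimately show ?thesis using 1(1,3,5) by (intro exI[of _ t] exI[of _ s']) auto
qed

lemma set_row_cand_spec:
  assumes r0: "fst s 0 = int n" and r1: "fst s 1 = int k" and r2: "fst s 2 = int (n * n)"
    and r8: "fst s 8 = int (i * n)" and i: "i < n" and mA: "mem_matrix n A s"
  shows "\<exists>t s'. big_step set_row_cand s t s' \<and> t \<le> n * (n * 6 + 10) + 4 \<and>
     (\<forall>r. r \<notin> {4, 5, 6} \<longrightarrow> fst s' r = fst s r) \<and> cand_vec n s' = row_top n k A i \<and>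
     (\<forall>a. (a < int (n * n) + int n \<or> int (n * n) + int n + int n + int n \<le> a) \<longrightarrow> snd s' a = snd s a)"
proof -
  obtain t1 s1 where 1: "big_step copy_row s t1 s1" "t1 \<le> n * 3 + 2" "fst s1 = (fst s)(4 := int n)"
     "\<forall>l<n. snd s1 (int (n * n) + int n + int n + int l) = A i l"
     "\<forall>a. (a < int (n * n) + int n + int n \<or> int (n * n) + int n + int n + int n \<le> a) \<longrightarrow> snd s1 a = snd s a"
    using copy_row_spec[OF r0 r2 r8 i mA] by blast
  have rr: "fst s1 0 = int n" "fst s1 1 = int k" "fst s1 2 = int (n * n)" using 1(3) r0 r1 r2 by auto
  obtain t2 s2 where 2: "big_step (for_loop 4 (IR 0) row_top_step) s1 t2 s2" "t2 \<le> n * (n * 6 + 7) + 2"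
     "\<forall>r. r \<notin> {4, 5, 6} \<longrightarrow> fst s2 r = fst s1 r" "cand_vec n s2 = row_top n k A i"
     "\<forall>a. (a < int (n * n) + int n \<or> int (n * n) + int n + int n \<le> a) \<longrightarrow> snd s2 a = snd s1 a"
    using row_top_loop_spec[of s1 n k A i, OF rr 1(4)] by blast
  have "big_step set_row_cand s (t1 + t2) s2" unfolding set_row_cand_def by (rule big_step.Seq[OF 1(1) 2(1)])
  moreover have "t1 + t2 \<le> n * (n * 6 + 10) + 4" using 1(2) 2(2) by (simp add: algebra_simps)
  moreover have "\<forall>a. (a < int (n * n) + int n \<or> int (n * n) + int n + int n + int n \<le> a) \<longrightarrow> snd s2 a = snd s a"
    using 1(5) 2(5) by force
  ultimately show ?thesis using 1(3) 2(3,4) by (intro exI[of _ "t1 + t2"] exI[of _ s2]) auto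
qed

definition init_iter :: com where
  "init_iter = for_loop 4 (IR 0) (CIf (IEq (IR 4) (IR 3)) (RSet (addr_iter 4) (RC 1)) (RSet (addr_iter 4) (RC 0)))"

definition mat_vec_dot :: com where
  "mat_vec_dot = for_loop 12 (IR 0) (RSet (addr_scratch 7) (RAdd (RR (addr_scratch 7)) (RMul (RR (IAdd (IR 13) (IR 12))) (RR (addr_iter 12)))))"

definition mat_vec_row :: com where "mat_vec_row = RSet (addr_scratch 7) (RC 0) ;; mat_vec_dot ;; ISet 13 (IAdd (IR 13) (IR 0))"

definition mat_vec_prog :: com where "mat_vec_prog = ISet 13 (IC 0) ;; for_loop 7 (IR 0) mat_vec_row"

definition copy_back :: com where "copy_back = for_loop 12 (IR 0) (RSet (addr_iter 12) (RR (addr_scratch 12)))"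

definition power_step :: com where "power_step = mat_vec_prog ;; copy_back"

definition power_iter :: com where "power_iter = init_iter ;; for_loop 9 (IR 10) power_step"

lemma init_iter_spec:
  assumes r0: "fst s 0 = int n" and r2: "fst s 2 = int (n * n)" and r3: "fst s 3 = int i" and i: "i < n"
  shows "\<exists>t s'. big_step init_iter s t s' \<and> t \<le> n * 4 + 2 \<and> fst s' = (fst s)(4 := int n) \<and> iter_vec n s' = unit_vec i \<and>
     (\<forall>a. (a < int (n * n) + int n + int n \<or> int (n * n) + int n + int n + int n \<le> a) \<longrightarrow> snd s' a = snd s a)"
proof -
  have "\<exists>t s'. big_step init_iter s t s' \<and> t \<le> n * (2 + 2) + 2 \<and> fst s' = (fst s)(4 := int n) \<and>
     (\<forall>j<n. snd s' (int (n * n) + int n + int n + int j) = (if j = i then 1 else 0)) \<and>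
     (\<forall>a. (a < int (n * n) + int n + int n \<or> int (n * n) + int n + int n + int n \<le> a) \<longrightarrow> snd s' a = snd s a)"
    unfolding init_iter_def
  proof (rule for_loop_fill[OF r0])
    fix j and s1 :: state assume j: "j < n" and fs: "fst s1 = (fst s)(4 := int j)"
    have e: "ieval (addr_iter 4) s1 = int (n * n) + int n + int n + int j" using fs r0 r2 by (simp add: addr_iter_def)
    show "\<exists>t s2. big_step (CIf (IEq (IR 4) (IR 3)) (RSet (addr_iter 4) (RC 1)) (RSet (addr_iter 4) (RC 0))) s1 t s2 \<and> t \<le> 2 \<and>
        snd s2 = (snd s1)(int (n * n) + int n + int n + int j := (if j = i then 1 else 0))"
    proof (cases "j = i")
      case True
      have "big_step (CIf (IEq (IR 4) (IR 3)) (RSet (addr_iter 4) (RC 1)) (RSet (addr_iter 4) (RC 0))) s1 (Suc 1)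
          (fst s1, (snd s1)(int (n * n) + int n + int n + int j := 1))"
        by (rule big_step.IfT[OF _ big_step_RSetI]) (use fs r3 True e in simp)+
      then show ?thesis using True by (intro exI conjI) auto
    next
      case False
      have "big_step (CIf (IEq (IR 4) (IR 3)) (RSet (addr_iter 4) (RC 1)) (RSet (addr_iter 4) (RC 0))) s1 (Suc 1)
          (fst s1, (snd s1)(int (n * n) + int n + int n + int j := 0))"
        by (rule big_step.IfF[OF _ big_step_RSetI]) (use fs r3 False e in simp)+
      then show ?thesis using False by (intro exI conjI) auto
    qed
  qed simp_all
  then obtain t s' where 1: "big_step init_iter s t s'" "t \<le> n * (2 + 2) + 2" "fst s' = (fst s)(4 := int n)"
    "\<forall>j<n. snd s' (int (n * n) + int n + int n + int j) = (if j = i then 1 else 0)"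
    "\<forall>a. (a < int (n * n) + int n + int n \<or> int (n * n) + int n + int n + int n \<le> a) \<longrightarrow> snd s' a = snd s a" by blast
  have "iter_vec n s' = unit_vec i"
  proof
    fix j show "iter_vec n s' j = unit_vec i j" using 1(4) i by (auto simp: mem_vec_def unit_vec_def)
  qed
  then show ?thesis using 1 by (intro exI[of _ t] exI[of _ s']) auto
qed

lemma mat_vec_row_spec:
  assumes r0: "fst s1 0 = int n" and r2: "fst s1 2 = int (n * n)" and r7: "fst s1 7 = int p" and r13: "fst s1 13 = int (p * n)"
    and p: "p < n" and mA: "mem_matrix n A s1"
  shows "\<exists>t s2. big_step mat_vec_row s1 t s2 \<and> t \<le> n * 3 + 4 \<and>
     snd s2 = (snd s1)(int (n * n) + int n + int n + int n + int p := (\<Sum>q<n. A p q * iter_vec n s1 q)) \<and>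
     fst s2 = (fst s1)(12 := int n, 13 := int (Suc p * n))"
proof -
  let ?\<alpha> = "int (n * n) + int n + int n + int n + int p"
  define s2 where "s2 = (fst s1, (snd s1)(?\<alpha> := 0))"
  have eZ: "ieval (addr_scratch 7) s = ?\<alpha>" if "\<forall>r'. r' \<noteq> 12 \<longrightarrow> fst s r' = fst s1 r'" for s
    using that r0 r2 r7 by (simp add: addr_scratch_def)
  have b2: "big_step (RSet (addr_scratch 7) (RC 0)) s1 1 s2" by (rule big_step_RSetI) (use eZ[of s1] in \<open>simp add: s2_def\<close>)
  have "\<exists>t s'. big_step mat_vec_dot s2 t s' \<and> t \<le> n * 3 + 2 \<and> fst s' = (fst s2)(12 := int n) \<and>
     snd s' = (snd s2)(?\<alpha> := snd s2 ?\<alpha> + (\<Sum>q<n. A p q * iter_vec n s1 q))"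
    unfolding mat_vec_dot_def
  proof (rule for_loop_accumulate)
    show "fst s2 0 = int n" using r0 by (simp add: s2_def)
  next
    fix s3 :: state assume "\<forall>r'. r' \<noteq> 12 \<longrightarrow> fst s3 r' = fst s2 r'"
    then show "ieval (addr_scratch 7) s3 = ?\<alpha>" using eZ by (simp add: s2_def)
  next
    fix q and s3 :: state assume q: "q < n" and fs: "fst s3 = (fst s2)(12 := int q)"
      and fr: "\<forall>a. a \<noteq> ?\<alpha> \<longrightarrow> snd s3 a = snd s2 a"
    have e1: "ieval (IAdd (IR 13) (IR 12)) s3 = int (p * n + q)" using fs r13 by (simp add: s2_def)
    have e2: "ieval (addr_iter 12) s3 = int (n * n) + int n + int n + int q" using fs r0 r2 by (simp add: addr_iter_def s2_def)
    have lt: "p * n + q < n * n" using p q by (rule row_major_index_less)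
    have v1: "snd s3 (int (p * n + q)) = A p q"
    proof -
      have "int (p * n + q) \<noteq> ?\<alpha>" using lt by linarith
      then have "snd s3 (int (p * n + q)) = snd s1 (int (p * n + q))" using fr lt by (simp add: s2_def)
      then show ?thesis using mA p q by (simp add: mem_matrix_def)
    qed
    have v2: "snd s3 (int (n * n) + int n + int n + int q) = iter_vec n s1 q"
    proof -
      have "int (n * n) + int n + int n + int q \<noteq> ?\<alpha>" using q by linarith
      then show ?thesis using fr q by (simp add: s2_def mem_vec_def)
    qed
    show "reval (RMul (RR (IAdd (IR 13) (IR 12))) (RR (addr_iter 12))) s3 = A p q * iter_vec n s1 q"
      using e1 e2 v1 v2 by (simp del: of_nat_mult of_nat_add)
  qed simp
  then obtain t3 s3 where 3: "big_step mat_vec_dot s2 t3 s3" "t3 \<le> n * 3 + 2" "fst s3 = (fst s2)(12 := int n)"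
     "snd s3 = (snd s2)(?\<alpha> := snd s2 ?\<alpha> + (\<Sum>q<n. A p q * iter_vec n s1 q))" by blast
  define s4 where "s4 = ((fst s3)(13 := fst s3 13 + fst s3 0), snd s3)"
  have b4: "big_step (ISet 13 (IAdd (IR 13) (IR 0))) s3 1 s4" by (rule big_step_ISetI) (simp add: s4_def)
  have "big_step mat_vec_row s1 (1 + (t3 + 1)) s4" unfolding mat_vec_row_def
    by (rule big_step.Seq[OF b2 big_step.Seq[OF 3(1) b4]])
  moreover have "snd s4 = (snd s1)(?\<alpha> := (\<Sum>q<n. A p q * iter_vec n s1 q))" using 3(4) by (simp add: s4_def s2_def)
  moreover have "fst s4 = (fst s1)(12 := int n, 13 := int (Suc p * n))" using 3(3) r0 r13
    by (auto simp: s4_def s2_def algebra_simps)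
  moreover have "1 + (t3 + 1) \<le> n * 3 + 4" using 3(2) by simp
  ultimately show ?thesis by blast
qed

lemma mat_vec_prog_spec:
  assumes r0: "fst s 0 = int n" and r2: "fst s 2 = int (n * n)" and mA: "mem_matrix n A s"
  shows "\<exists>t s'. big_step mat_vec_prog s t s' \<and> t \<le> n * (n * 3 + 6) + 3 \<and>
     (\<forall>r. r \<notin> {7, 12, 13} \<longrightarrow> fst s' r = fst s r) \<and>
     (\<forall>p<n. snd s' (int (n * n) + int n + int n + int n + int p) = (\<Sum>q<n. A p q * iter_vec n s q)) \<and>
     (\<forall>a. (a < int (n * n) + int n + int n + int n \<or> int (n * n) + int n + int n + int n + int n \<le> a) \<longrightarrow> snd s' a = snd s a)"
proof -
  define s0 where "s0 = ((fst s)(13 := 0), snd s)"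
  have b0: "big_step (ISet 13 (IC 0)) s 1 s0" by (rule big_step_ISetI) (simp add: s0_def)
  have "\<exists>t s'. big_step (for_loop 7 (IR 0) mat_vec_row) s0 t s' \<and> t \<le> n * ((n * 3 + 4) + 2) + 2 \<and> fst s' 13 = int (n * n) \<and>
     fst s' 7 = int n \<and> (\<forall>r'. r' \<notin> insert 7 {12, 13} \<longrightarrow> fst s' r' = fst s0 r') \<and>
     (\<forall>p<n. snd s' (int (n * n) + int n + int n + int n + int p) = (\<Sum>q<n. A p q * iter_vec n s q)) \<and>
     (\<forall>a. (a < int (n * n) + int n + int n + int n \<or> int (n * n) + int n + int n + int n + int n \<le> a) \<longrightarrow> snd s' a = snd s0 a)"
  proof (rule for_loop_fill_inv[where P="\<lambda>p rf. rf 13 = int (p * n)"])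
    show "fst s0 0 = int n" using r0 by (simp add: s0_def)
  next
    show "written_regs mat_vec_row \<subseteq> {12, 13}" by (simp add: mat_vec_row_def mat_vec_dot_def)
  next
    fix p and s1 :: state assume p: "p < n" and c7: "fst s1 7 = int p" and P: "fst s1 13 = int (p * n)"
      and fr: "\<forall>r'. r' \<notin> insert 7 {12, 13} \<longrightarrow> fst s1 r' = fst s0 r'"
      and fm: "\<forall>a. (a < int (n * n) + int n + int n + int n \<or> int (n * n) + int n + int n + int n + int p \<le> a) \<longrightarrow> snd s1 a = snd s0 a"
    have rr: "fst s1 0 = int n" "fst s1 2 = int (n * n)" using fr r0 r2 by (auto simp: s0_def)
    have mA1: "mem_matrix n A s1" by (rule mem_matrix_frame[OF mA]) (use fm in \<open>force simp: s0_def\<close>)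
    have y1: "iter_vec n s1 = iter_vec n s"
    proof
      fix q show "iter_vec n s1 q = iter_vec n s q" using fm by (simp add: mem_vec_def s0_def)
    qed
    obtain t s2 where 2: "big_step mat_vec_row s1 t s2" "t \<le> n * 3 + 4"
      "snd s2 = (snd s1)(int (n * n) + int n + int n + int n + int p := (\<Sum>q<n. A p q * iter_vec n s1 q))"
      "fst s2 = (fst s1)(12 := int n, 13 := int (Suc p * n))"
      using mat_vec_row_spec[OF rr c7 P p mA1] by blast
    show "\<exists>t s2. big_step mat_vec_row s1 t s2 \<and> t \<le> n * 3 + 4 \<and>
       snd s2 = (snd s1)(int (n * n) + int n + int n + int n + int p := (\<Sum>q<n. A p q * iter_vec n s q)) \<and>
       ((fst s2)(7 := int p + 1)) 13 = int (Suc p * n)"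
      using 2 y1 by (intro exI[of _ t] exI[of _ s2]) simp
  qed (simp_all add: s0_def)
  then obtain t s' where 1: "big_step (for_loop 7 (IR 0) mat_vec_row) s0 t s'" "t \<le> n * ((n * 3 + 4) + 2) + 2"
     "\<forall>r'. r' \<notin> insert 7 {12, 13} \<longrightarrow> fst s' r' = fst s0 r'"
     "\<forall>p<n. snd s' (int (n * n) + int n + int n + int n + int p) = (\<Sum>q<n. A p q * iter_vec n s q)"
     "\<forall>a. (a < int (n * n) + int n + int n + int n \<or> int (n * n) + int n + int n + int n + int n \<le> a) \<longrightarrow> snd s' a = snd s0 a"
    by blast
  have "big_step mat_vec_prog s (1 + t) s'" unfolding mat_vec_prog_def by (rule big_step.Seq[OF b0 1(1)])
  moreover have "1 + t \<le> n * (n * 3 + 6) + 3" using 1(2) by (simp add: algebra_simps)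
  ultimately show ?thesis using 1(3-5) by (intro exI[of _ "1 + t"] exI[of _ s']) (auto simp: s0_def)
qed

lemma copy_back_spec:
  assumes r0: "fst s 0 = int n" and r2: "fst s 2 = int (n * n)"
  shows "\<exists>t s'. big_step copy_back s t s' \<and> t \<le> n * 3 + 2 \<and> fst s' = (fst s)(12 := int n) \<and>
     (\<forall>q<n. snd s' (int (n * n) + int n + int n + int q) = snd s (int (n * n) + int n + int n + int n + int q)) \<and>
     (\<forall>a. (a < int (n * n) + int n + int n \<or> int (n * n) + int n + int n + int n \<le> a) \<longrightarrow> snd s' a = snd s a)"
proof -
  have "\<exists>t s'. big_step copy_back s t s' \<and> t \<le> n * (1 + 2) + 2 \<and> fst s' = (fst s)(12 := int n) \<and>
     (\<forall>q<n. snd s' (int (n * n) + int n + int n + int q) = snd s (int (n * n) + int n + int n + int n + int q)) \<and>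
     (\<forall>a. (a < int (n * n) + int n + int n \<or> int (n * n) + int n + int n + int n \<le> a) \<longrightarrow> snd s' a = snd s a)"
    unfolding copy_back_def
  proof (rule for_loop_fill[OF r0])
    fix q and s1 :: state assume q: "q < n" and fs: "fst s1 = (fst s)(12 := int q)"
      and fr: "\<forall>a. (a < int (n * n) + int n + int n \<or> int (n * n) + int n + int n + int q \<le> a) \<longrightarrow> snd s1 a = snd s a"
    have e1: "ieval (addr_iter 12) s1 = int (n * n) + int n + int n + int q" using fs r0 r2 by (simp add: addr_iter_def)
    have e2: "ieval (addr_scratch 12) s1 = int (n * n) + int n + int n + int n + int q" using fs r0 r2 by (simp add: addr_scratch_def)
    have v: "snd s1 (int (n * n) + int n + int n + int n + int q) = snd s (int (n * n) + int n + int n + int n + int q)"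
      using fr by simp
    show "\<exists>t s2. big_step (RSet (addr_iter 12) (RR (addr_scratch 12))) s1 t s2 \<and> t \<le> 1 \<and>
        snd s2 = (snd s1)(int (n * n) + int n + int n + int q := snd s (int (n * n) + int n + int n + int n + int q))"
    proof -
      have x: "reval (RR (addr_scratch 12)) s1 = snd s (int (n * n) + int n + int n + int n + int q)" using e2 v by simp
      have "big_step (RSet (addr_iter 12) (RR (addr_scratch 12))) s1 1 (fst s1, (snd s1)(int (n * n) + int n + int n + int q := snd s (int (n * n) + int n + int n + int n + int q)))"
        by (rule big_step_RSetI) (simp only: e1 x)
      then show ?thesis by fastforce
    qed
  qed simp_all
  then obtain t s' where "big_step copy_back s t s' \<and> t \<le> n * (1 + 2) + 2 \<and> fst s' = (fst s)(12 := int n) \<and>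
     (\<forall>q<n. snd s' (int (n * n) + int n + int n + int q) = snd s (int (n * n) + int n + int n + int n + int q)) \<and>
     (\<forall>a. (a < int (n * n) + int n + int n \<or> int (n * n) + int n + int n + int n \<le> a) \<longrightarrow> snd s' a = snd s a)" by blast
  then show ?thesis by (intro exI[of _ t] exI[of _ s']) auto
qed

lemma power_step_spec:
  assumes r0: "fst s 0 = int n" and r2: "fst s 2 = int (n * n)" and mA: "mem_matrix n A s"
  shows "\<exists>t s'. big_step power_step s t s' \<and> t \<le> 3 * n * n + 9 * n + 5 \<and>
     (\<forall>r. r \<notin> {7, 12, 13} \<longrightarrow> fst s' r = fst s r) \<and> iter_vec n s' = mat_vec n A (iter_vec n s) \<and>
     (\<forall>a. (a < int (n * n) + int n + int n \<or> int (n * n) + int n + int n + int n + int n \<le> a) \<longrightarrow> snd s' a = snd s a)"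
proof -
  obtain t1 s1 where 1: "big_step mat_vec_prog s t1 s1" "t1 \<le> n * (n * 3 + 6) + 3" "\<forall>r. r \<notin> {7, 12, 13} \<longrightarrow> fst s1 r = fst s r"
     "\<forall>p<n. snd s1 (int (n * n) + int n + int n + int n + int p) = (\<Sum>q<n. A p q * iter_vec n s q)"
     "\<forall>a. (a < int (n * n) + int n + int n + int n \<or> int (n * n) + int n + int n + int n + int n \<le> a) \<longrightarrow> snd s1 a = snd s a"
    using mat_vec_prog_spec[OF r0 r2 mA] by blast
  have rr: "fst s1 0 = int n" "fst s1 2 = int (n * n)" using 1(3) r0 r2 by auto
  obtain t2 s2 where 2: "big_step copy_back s1 t2 s2" "t2 \<le> n * 3 + 2" "fst s2 = (fst s1)(12 := int n)"
     "\<forall>q<n. snd s2 (int (n * n) + int n + int n + int q) = snd s1 (int (n * n) + int n + int n + int n + int q)"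
     "\<forall>a. (a < int (n * n) + int n + int n \<or> int (n * n) + int n + int n + int n \<le> a) \<longrightarrow> snd s2 a = snd s1 a"
    using copy_back_spec[OF rr] by blast
  have "big_step power_step s (t1 + t2) s2" unfolding power_step_def by (rule big_step.Seq[OF 1(1) 2(1)])
  moreover have "t1 + t2 \<le> 3 * n * n + 9 * n + 5" using 1(2) 2(2) by (simp add: algebra_simps)
  moreover have "iter_vec n s2 = mat_vec n A (iter_vec n s)"
  proof
    fix q show "iter_vec n s2 q = mat_vec n A (iter_vec n s) q" using 2(4) 1(4) by (simp add: mem_vec_def mat_vec_def)
  qed
  moreover have "\<forall>a. (a < int (n * n) + int n + int n \<or> int (n * n) + int n + int n + int n + int n \<le> a) \<longrightarrow> snd s2 a = snd s a"
    using 1(5) 2(5) by force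
  ultimately show ?thesis using 1(3) 2(3) by (intro exI[of _ "t1 + t2"] exI[of _ s2]) auto
qed

lemma power_iter_spec:
  assumes r0: "fst s 0 = int n" and r2: "fst s 2 = int (n * n)" and r3: "fst s 3 = int i" and i: "i < n"
    and r10: "fst s 10 = int m" and mA: "mem_matrix n A s"
  shows "\<exists>t s'. big_step power_iter s t s' \<and> t \<le> (n * 4 + 2) + m * ((3 * n * n + 9 * n + 5) + 2) + 2 \<and>
     (\<forall>r. r \<notin> {4, 7, 9, 12, 13} \<longrightarrow> fst s' r = fst s r) \<and> iter_vec n s' = pow_vec n A (unit_vec i) m \<and>
     (\<forall>a. (a < int (n * n) + int n + int n \<or> int (n * n) + int n + int n + int n + int n \<le> a) \<longrightarrow> snd s' a = snd s a)"
proof -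
  let ?lo = "int (n * n) + int n + int n" and ?hi = "int (n * n) + int n + int n + int n + int n"
  obtain t1 s1 where 1: "big_step init_iter s t1 s1" "t1 \<le> n * 4 + 2" "fst s1 = (fst s)(4 := int n)" "iter_vec n s1 = unit_vec i"
    "\<forall>a. (a < ?lo \<or> int (n * n) + int n + int n + int n \<le> a) \<longrightarrow> snd s1 a = snd s a"
    using init_iter_spec[OF r0 r2 r3 i] by blast
  define I where "I pc s2 \<longleftrightarrow> (\<forall>r. r \<notin> {4, 7, 9, 12, 13} \<longrightarrow> fst s2 r = fst s r) \<and> iter_vec n s2 = pow_vec n A (unit_vec i) pc \<and>
     (\<forall>a. (a < ?lo \<or> ?hi \<le> a) \<longrightarrow> snd s2 a = snd s a)" for pc s2
  have "\<exists>t s'. big_step (for_loop 9 (IR 10) power_step) s1 t s' \<and> t \<le> m * ((3 * n * n + 9 * n + 5) + 2) + 2 \<and> I m s' \<and> fst s' 9 = int m"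
  proof (rule for_loop_bound)
    have "iter_vec n ((fst s1)(9 := 0), snd s1) = iter_vec n s1" by (auto simp: mem_vec_def)
    then show "I 0 ((fst s1)(9 := 0), snd s1)" using 1(3,4,5) by (auto simp: I_def)
  next
    fix pc s2 assume pc: "pc < m" and I: "I pc s2" and c: "fst s2 9 = int pc"
    have rr: "fst s2 0 = int n" "fst s2 2 = int (n * n)" using I r0 r2 by (auto simp: I_def)
    have mA2: "mem_matrix n A s2" by (rule mem_matrix_frame[OF mA]) (use I in \<open>auto simp: I_def\<close>)
    obtain t s3 where 3: "big_step power_step s2 t s3" "t \<le> 3 * n * n + 9 * n + 5" "\<forall>r. r \<notin> {7, 12, 13} \<longrightarrow> fst s3 r = fst s2 r"
      "iter_vec n s3 = mat_vec n A (iter_vec n s2)" "\<forall>a. (a < ?lo \<or> ?hi \<le> a) \<longrightarrow> snd s3 a = snd s2 a"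
      using power_step_spec[OF rr mA2] by blast
    have "iter_vec n ((fst s3)(9 := int pc + 1), snd s3) = iter_vec n s3" by (auto simp: mem_vec_def)
    then have "I (Suc pc) ((fst s3)(9 := int pc + 1), snd s3)"
      using I 3(3,4,5) by (auto simp: I_def)
    moreover have "fst s3 9 = int pc" using 3(3) c by simp
    ultimately show "\<exists>t s'. big_step power_step s2 t s' \<and> t \<le> 3 * n * n + 9 * n + 5 \<and> fst s' 9 = int pc \<and>
       I (Suc pc) ((fst s')(9 := int pc + 1), snd s')" using 3(1,2) by blast
  next
    fix pc s2 assume "pc \<le> m" "I pc s2" "fst s2 9 = int pc"
    then show "ieval (IR 10) s2 = int m" using r10 by (simp add: I_def)
  qed
  then obtain t2 s2 where 2: "big_step (for_loop 9 (IR 10) power_step) s1 t2 s2" "t2 \<le> m * ((3 * n * n + 9 * n + 5) + 2) + 2" "I m s2"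
    by blast
  have "big_step power_iter s (t1 + t2) s2" unfolding power_iter_def by (rule big_step.Seq[OF 1(1) 2(1)])
  then show ?thesis using 1(2) 2(2,3) by (intro exI[of _ "t1 + t2"] exI[of _ s2]) (auto simp: I_def)
qed

definition window_copy :: com where "window_copy = RSet (addr_cand 4) (RR (addr_iter 4))"

definition window_zero :: com where "window_zero = RSet (addr_cand 4) (RC 0)"

definition window_step :: com where
  "window_step = CIf (ILess (IR 4) (IR 11)) (CIf (ILess (IAdd (IR 4) (IR 0)) (IAdd (IR 11) (IR 1))) window_copy window_zero)
                                   (CIf (ILess (IR 4) (IAdd (IR 11) (IR 1))) window_copy window_zero)"

definition set_window_cand :: com where "set_window_cand = for_loop 4 (IR 0) window_step"

definition window_cands :: com where "window_cands = for_loop 11 (IR 0) (set_window_cand ;; eval_candidate)"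

text \<open>A window is the cyclic interval t, ..., t + k - 1 (mod n); the two branches of the
  program test membership for indices j \<ge> t and for the wrapped-around indices j < t.\<close>
lemma window_step_spec:
  assumes r0: "fst s 0 = int n" and r1: "fst s 1 = int k" and r2: "fst s 2 = int (n * n)"
    and r11: "fst s 11 = int t" and r4: "fst s 4 = int j" and j: "j < n"
  shows "big_step window_step s 3
    (fst s, (snd s)(int (n * n) + int n + int j := window n k t (iter_vec n s) j))"
proof -
  let ?a = "int (n * n) + int n + int j"
  have eC: "ieval (addr_cand 4) s = ?a" using r0 r2 r4 by (simp add: addr_cand_def)
  have eY: "reval (RR (addr_iter 4)) s = iter_vec n s j" using r0 r2 r4 j by (simp add: addr_iter_def mem_vec_def)
  have copy: "big_step window_copy s 1 (fst s, (snd s)(?a := iter_vec n s j))"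
    unfolding window_copy_def by (rule big_step_RSetI) (simp only: eC eY)
  have zero: "big_step window_zero s 1 (fst s, (snd s)(?a := 0))"
    unfolding window_zero_def by (rule big_step_RSetI) (simp add: eC)
  consider "j < t" "j + n < t + k" | "j < t" "\<not> j + n < t + k"
    | "\<not> j < t" "j < t + k" | "\<not> j < t" "\<not> j < t + k" by blast
  then have "big_step window_step s (Suc (Suc 1)) (fst s, (snd s)(?a := window n k t (iter_vec n s) j))"
  proof cases
    case 1
    then have "window n k t (iter_vec n s) j = iter_vec n s j" using j by (simp add: window_def in_window_def)
    then show ?thesis unfolding window_step_def
      by (simp only:) (rule big_step.IfT[OF _ big_step.IfT[OF _ copy]]; simp add: r0 r1[unfolded One_nat_def] r4 r11 1 flip: of_nat_add)
  next
    case 2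
    then have "window n k t (iter_vec n s) j = 0" by (simp add: window_def in_window_def)
    then show ?thesis unfolding window_step_def
      by (simp only:) (rule big_step.IfT[OF _ big_step.IfF[OF _ zero]]; simp add: r0 r1[unfolded One_nat_def] r4 r11 2 flip: of_nat_add)
  next
    case 3
    then have "window n k t (iter_vec n s) j = iter_vec n s j" using j by (simp add: window_def in_window_def)
    then show ?thesis unfolding window_step_def
      by (simp only:) (rule big_step.IfF[OF _ big_step.IfT[OF _ copy]]; simp add: r0 r1[unfolded One_nat_def] r4 r11 3 flip: of_nat_add)
  next
    case 4
    then have "window n k t (iter_vec n s) j = 0" by (simp add: window_def in_window_def)
    then show ?thesis unfolding window_step_def
      by (simp only:) (rule big_step.IfF[OF _ big_step.IfF[OF _ zero]]; simp add: r0 r1[unfolded One_nat_def] r4 r11 4 flip: of_nat_add)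
  qed
  then show ?thesis by (simp add: numeral_3_eq_3)
qed

lemma set_window_cand_spec:
  assumes r0: "fst s 0 = int n" and r1: "fst s 1 = int k" and r2: "fst s 2 = int (n * n)" and r11: "fst s 11 = int t"
  shows "\<exists>tt s'. big_step set_window_cand s tt s' \<and> tt \<le> n * 5 + 2 \<and> fst s' = (fst s)(4 := int n) \<and>
     cand_vec n s' = window n k t (iter_vec n s) \<and>
     (\<forall>a. (a < int (n * n) + int n \<or> int (n * n) + int n + int n \<le> a) \<longrightarrow> snd s' a = snd s a)"
proof -
  have "\<exists>tt s'. big_step set_window_cand s tt s' \<and> tt \<le> n * (3 + 2) + 2 \<and> fst s' = (fst s)(4 := int n) \<and>
     (\<forall>j<n. snd s' (int (n * n) + int n + int j) = window n k t (iter_vec n s) j) \<and>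
     (\<forall>a. (a < int (n * n) + int n \<or> int (n * n) + int n + int n \<le> a) \<longrightarrow> snd s' a = snd s a)"
    unfolding set_window_cand_def
  proof (rule for_loop_fill[OF r0])
    show "written_regs window_step = {}" by (simp add: window_step_def window_copy_def window_zero_def)
  next
    fix j and s1 :: state assume j: "j < n" and fs: "fst s1 = (fst s)(4 := int j)"
      and fr: "\<forall>a. (a < int (n * n) + int n \<or> int (n * n) + int n + int j \<le> a) \<longrightarrow> snd s1 a = snd s a"
    have "iter_vec n s1 = iter_vec n s"
    proof
      fix i
      have "int (n * n) + int n + int j \<le> int (n * n) + int n + int n + int i" using j by simp
      then show "iter_vec n s1 i = iter_vec n s i" using fr by (simp add: mem_vec_def)
    qed
    then have "big_step window_step s1 3
        (fst s1, (snd s1)(int (n * n) + int n + int j := window n k t (iter_vec n s) j))"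
      using window_step_spec[of s1 n k t j] fs r0 r1 r2 r11 j by simp
    then show "\<exists>tt s2. big_step window_step s1 tt s2 \<and> tt \<le> 3 \<and>
        snd s2 = (snd s1)(int (n * n) + int n + int j := window n k t (iter_vec n s) j)"
      by fastforce
  qed simp
  then obtain tt s' where 1: "big_step set_window_cand s tt s'" "tt \<le> n * (3 + 2) + 2" "fst s' = (fst s)(4 := int n)"
     "\<forall>j<n. snd s' (int (n * n) + int n + int j) = window n k t (iter_vec n s) j"
     "\<forall>a. (a < int (n * n) + int n \<or> int (n * n) + int n + int n \<le> a) \<longrightarrow> snd s' a = snd s a" by blast
  have "cand_vec n s' = window n k t (iter_vec n s)"
    using 1(4) by (auto simp: mem_vec_def window_def)
  then show ?thesis using 1 by (intro exI[of _ tt] exI[of _ s']) auto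
qed

lemma window_eval_spec:
  assumes r0: "fst s 0 = int n" and r1: "fst s 1 = int k" and r2: "fst s 2 = int (n * n)"
    and r11: "fst s 11 = int t" and t: "t < n" and mA: "mem_matrix n A s" and G: "best_stored n k A X s"
  shows "\<exists>tt s'. big_step (set_window_cand ;; eval_candidate) s tt s' \<and> tt \<le> 3 * n * n + 18 * n + 16 \<and>
     best_stored n k A (insert (window n k t (iter_vec n s)) X) s' \<and>
     (\<forall>r. r \<notin> {4, 7, 12, 13} \<longrightarrow> fst s' r = fst s r) \<and>
     (\<forall>a. a \<notin> {-1, -2, -3, -4, -5} \<and> (a < int (n * n) \<or> int (n * n) + int n + int n \<le> a) \<longrightarrow> snd s' a = snd s a)"
proof -
  have nb: "(-1::int) < int (n * n)" "(-2::int) < int (n * n)" by (rule neg_less_int)+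
  obtain t1 s1 where 1: "big_step set_window_cand s t1 s1" "t1 \<le> n * 5 + 2" "fst s1 = (fst s)(4 := int n)"
     "cand_vec n s1 = window n k t (iter_vec n s)"
     "\<forall>a. (a < int (n * n) + int n \<or> int (n * n) + int n + int n \<le> a) \<longrightarrow> snd s1 a = snd s a"
    using set_window_cand_spec[OF r0 r1 r2 r11] by blast
  have rr1: "fst s1 0 = int n" "fst s1 2 = int (n * n)" using 1(3) r0 r2 by auto
  have mA1: "mem_matrix n A s1" by (rule mem_matrix_frame[OF mA]) (use 1(5) in auto)
  have "best_vec n s1 = best_vec n s" using 1(5) by (auto simp: mem_vec_def)
  then have G1: "best_stored n k A X s1" using G 1(5) nb by simp
  have sp: "norm0 n (cand_vec n s1) \<le> k" using 1(4) norm0_window[OF t] by simp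
  obtain t2 s2 where 2: "big_step eval_candidate s1 t2 s2" "t2 \<le> 3 * n * n + 13 * n + 14"
     "best_stored n k A (insert (cand_vec n s1) X) s2"
     "\<forall>r. r \<notin> {7, 12, 13} \<longrightarrow> fst s2 r = fst s1 r"
     "\<forall>a. a \<notin> {-1, -2, -3, -4, -5} \<and> (a < int (n * n) \<or> int (n * n) + int n \<le> a) \<longrightarrow> snd s2 a = snd s1 a"
    using eval_candidate_spec[OF rr1 mA1 G1 sp] by blast
  have "big_step (set_window_cand ;; eval_candidate) s (t1 + t2) s2" by (rule big_step.Seq[OF 1(1) 2(1)])
  moreover have "t1 + t2 \<le> 3 * n * n + 18 * n + 16" using 1(2) 2(2) by simp
  moreover have "\<forall>r. r \<notin> {4, 7, 12, 13} \<longrightarrow> fst s2 r = fst s r" using 2(4) 1(3) by simp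
  moreover have "\<forall>a. a \<notin> {-1, -2, -3, -4, -5} \<and> (a < int (n * n) \<or> int (n * n) + int n + int n \<le> a) \<longrightarrow>
      snd s2 a = snd s a" using 2(5) 1(5) by auto
  moreover have "best_stored n k A (insert (window n k t (iter_vec n s)) X) s2" using 2(3) 1(4) by simp
  ultimately show ?thesis by blast
qed

lemma window_cands_spec:
  assumes r0: "fst s 0 = int n" and r1: "fst s 1 = int k" and r2: "fst s 2 = int (n * n)"
    and mA: "mem_matrix n A s" and G: "best_stored n k A X s"
  shows "\<exists>tt s'. big_step window_cands s tt s' \<and> tt \<le> n * (3 * n * n + 18 * n + 18) + 2 \<and>
     best_stored n k A (X \<union> {window n k t (iter_vec n s) | t. t < n}) s' \<and>
     (\<forall>r. r \<notin> {4, 7, 11, 12, 13} \<longrightarrow> fst s' r = fst s r) \<and>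
     (\<forall>a. a \<notin> {-1, -2, -3, -4, -5} \<and> (a < int (n * n) \<or> int (n * n) + int n + int n \<le> a) \<longrightarrow> snd s' a = snd s a)"
proof -
  let ?y = "iter_vec n s"
  define I where "I t s1 \<longleftrightarrow> (\<forall>r. r \<notin> {4, 7, 11, 12, 13} \<longrightarrow> fst s1 r = fst s r) \<and>
     (\<forall>a. a \<notin> {-1, -2, -3, -4, -5} \<and> (a < int (n * n) \<or> int (n * n) + int n + int n \<le> a) \<longrightarrow> snd s1 a = snd s a) \<and>
     best_stored n k A (X \<union> {window n k t' ?y | t'. t' < t}) s1" for t s1
  have "\<exists>tt s'. big_step window_cands s tt s' \<and> tt \<le> n * ((3 * n * n + 18 * n + 16) + 2) + 2 \<and>
      I n s' \<and> fst s' 11 = int n"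
    unfolding window_cands_def
  proof (rule for_loop_bound)
    show "I 0 ((fst s)(11 := 0), snd s)" using G by (simp add: I_def)
  next
    fix t s1 assume t: "t < n" and I: "I t s1" and c: "fst s1 11 = int t"
    have rr: "fst s1 0 = int n" "fst s1 1 = int k" "fst s1 2 = int (n * n)" using I r0 r1 r2 by (auto simp: I_def)
    have mA1: "mem_matrix n A s1" by (rule mem_matrix_frame[OF mA]) (use I in \<open>auto simp: I_def\<close>)
    have G1: "best_stored n k A (X \<union> {window n k t' ?y | t'. t' < t}) s1" using I by (simp add: I_def)
    have y1: "iter_vec n s1 = ?y"
      using I nonneg_not_scratch[of "int (n * n) + int n + int n + int _"] by (auto simp: I_def mem_vec_def)
    obtain t2 s2 where 2: "big_step (set_window_cand ;; eval_candidate) s1 t2 s2"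
       "t2 \<le> 3 * n * n + 18 * n + 16"
       "best_stored n k A (insert (window n k t ?y) (X \<union> {window n k t' ?y | t'. t' < t})) s2"
       "\<forall>r. r \<notin> {4, 7, 12, 13} \<longrightarrow> fst s2 r = fst s1 r"
       "\<forall>a. a \<notin> {-1, -2, -3, -4, -5} \<and> (a < int (n * n) \<or> int (n * n) + int n + int n \<le> a) \<longrightarrow> snd s2 a = snd s1 a"
      using window_eval_spec[OF rr c t mA1 G1, unfolded y1] by blast
    have "insert (window n k t ?y) (X \<union> {window n k t' ?y | t'. t' < t}) = X \<union> {window n k t' ?y | t'. t' < Suc t}"
      by (auto simp: less_Suc_eq)
    then have "I (Suc t) ((fst s2)(11 := int t + 1), snd s2)"
      using I 2(3,4,5) by (auto simp: I_def)
    moreover have "fst s2 11 = int t" using 2(4) c by simp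
    ultimately show "\<exists>tt s'. big_step (set_window_cand ;; eval_candidate) s1 tt s' \<and> tt \<le> 3 * n * n + 18 * n + 16 \<and>
       fst s' 11 = int t \<and> I (Suc t) ((fst s')(11 := int t + 1), snd s')" using 2(1,2) by blast
  next
    fix t s1 assume "t \<le> n" "I t s1" "fst s1 11 = int t"
    then show "ieval (IR 0) s1 = int n" using r0 by (simp add: I_def)
  qed
  then obtain tt s' where "big_step window_cands s tt s'" "tt \<le> n * ((3 * n * n + 18 * n + 16) + 2) + 2" "I n s'"
    by blast
  then show ?thesis by (intro exI[of _ tt] exI[of _ s']) (auto simp: I_def algebra_simps)
qed

definition init_prog :: com where
  "init_prog = ISet 2 (IC 0) ;; for_loop 4 (IR 0) (ISet 2 (IAdd (IR 2) (IR 0))) ;;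
     ISet 10 (IAdd (IAdd (IAdd (IAdd (IR 0) (IR 0)) (IR 0)) (IR 0)) (IR 0)) ;; ISet 8 (IC 0)"

definition normalize_prog :: com where
  "normalize_prog = for_loop 4 (IR 0) (RSet (addr_best 4) (RDiv (RR (addr_best 4)) (RSqrt (RR (IC (-2))))))"

lemma init_prog_spec:
  assumes r0: "fst s 0 = int n"
  shows "\<exists>t s'. big_step init_prog s t s' \<and> t \<le> n * 3 + 5 \<and> snd s' = snd s \<and>
     (\<forall>r. r \<notin> {2, 4, 8, 10} \<longrightarrow> fst s' r = fst s r) \<and> fst s' 2 = int (n * n) \<and> fst s' 8 = 0 \<and> fst s' 10 = int (5 * n)"
proof -
  define s1 where "s1 = ((fst s)(2 := 0), snd s)"
  have b1: "big_step (ISet 2 (IC 0)) s 1 s1" by (rule big_step_ISetI) (simp add: s1_def)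
  define I where "I j s2 \<longleftrightarrow> snd s2 = snd s \<and> (\<forall>r. r \<notin> {2, 4} \<longrightarrow> fst s2 r = fst s r) \<and> fst s2 2 = int (j * n)" for j s2
  have "\<exists>t s'. big_step (for_loop 4 (IR 0) (ISet 2 (IAdd (IR 2) (IR 0)))) s1 t s' \<and> t \<le> n * (1 + 2) + 2 \<and> I n s' \<and> fst s' 4 = int n"
  proof (rule for_loop_bound)
    show "I 0 ((fst s1)(4 := 0), snd s1)" by (simp add: I_def s1_def)
  next
    fix j s2 assume j: "j < n" and I: "I j s2" and c: "fst s2 4 = int j"
    define s3 where "s3 = ((fst s2)(2 := fst s2 2 + fst s2 0), snd s2)"
    have "big_step (ISet 2 (IAdd (IR 2) (IR 0))) s2 1 s3" by (rule big_step_ISetI) (simp add: s3_def)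
    moreover have "I (Suc j) ((fst s3)(4 := int j + 1), snd s3)" using I r0 by (auto simp: I_def s3_def algebra_simps)
    moreover have "fst s3 4 = int j" using c by (simp add: s3_def)
    ultimately show "\<exists>t s'. big_step (ISet 2 (IAdd (IR 2) (IR 0))) s2 t s' \<and> t \<le> 1 \<and> fst s' 4 = int j \<and>
       I (Suc j) ((fst s')(4 := int j + 1), snd s')" by blast
  next
    fix j s2 assume "j \<le> n" "I j s2" "fst s2 4 = int j"
    then show "ieval (IR 0) s2 = int n" using r0 by (simp add: I_def)
  qed
  then obtain t2 s2 where 2: "big_step (for_loop 4 (IR 0) (ISet 2 (IAdd (IR 2) (IR 0)))) s1 t2 s2" "t2 \<le> n * (1 + 2) + 2" "I n s2"
    by blast
  have r0': "fst s2 0 = int n" using 2(3) r0 by (simp add: I_def)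
  define s3 where "s3 = ((fst s2)(10 := int (5 * n)), snd s2)"
  have b3: "big_step (ISet 10 (IAdd (IAdd (IAdd (IAdd (IR 0) (IR 0)) (IR 0)) (IR 0)) (IR 0))) s2 1 s3"
    by (rule big_step_ISetI) (simp add: s3_def r0')
  define s4 where "s4 = ((fst s3)(8 := 0), snd s3)"
  have b4: "big_step (ISet 8 (IC 0)) s3 1 s4" by (rule big_step_ISetI) (simp add: s4_def)
  have "big_step init_prog s (1 + (t2 + (1 + 1))) s4" unfolding init_prog_def
    by (rule big_step.Seq[OF b1 big_step.Seq[OF 2(1) big_step.Seq[OF b3 b4]]])
  moreover have "1 + (t2 + (1 + 1)) \<le> n * 3 + 5" using 2(2) by simp
  ultimately show ?thesis using 2(3) by (intro exI[of _ "1 + (t2 + (1 + 1))"] exI[of _ s4]) (auto simp: I_def s3_def s4_def)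
qed

lemma normalize_prog_spec:
  assumes r0: "fst s 0 = int n" and r2: "fst s 2 = int (n * n)"
  shows "\<exists>t s'. big_step normalize_prog s t s' \<and> t \<le> n * 3 + 2 \<and>
     output_vec n s' = (\<lambda>j. best_vec n s j / sqrt (snd s (-2)))"
proof -
  have "\<exists>t s'. big_step normalize_prog s t s' \<and> t \<le> n * (1 + 2) + 2 \<and> fst s' = (fst s)(4 := int n) \<and>
     (\<forall>j<n. snd s' (int (n * n) + int j) = best_vec n s j / sqrt (snd s (-2))) \<and>
     (\<forall>a. (a < int (n * n) \<or> int (n * n) + int n \<le> a) \<longrightarrow> snd s' a = snd s a)"
    unfolding normalize_prog_def
  proof (rule for_loop_fill[OF r0])
    fix j and s1 :: state assume j: "j < n" and fs: "fst s1 = (fst s)(4 := int j)"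
      and fr: "\<forall>a. (a < int (n * n) \<or> int (n * n) + int j \<le> a) \<longrightarrow> snd s1 a = snd s a"
    have e: "ieval (addr_best 4) s1 = int (n * n) + int j" using fs r2 by (simp add: addr_best_def)
    have v1: "snd s1 (int (n * n) + int j) = best_vec n s j" using fr j by (simp add: mem_vec_def)
    have v2: "snd s1 (-2) = snd s (-2)" using fr neg_less_int(2)[of "num.Bit0 num.One" "n * n"] by simp
    have x: "reval (RDiv (RR (addr_best 4)) (RSqrt (RR (IC (-2))))) s1 = best_vec n s j / sqrt (snd s (-2))"
      using e v1 v2 by simp
    have "big_step (RSet (addr_best 4) (RDiv (RR (addr_best 4)) (RSqrt (RR (IC (-2)))))) s1 1
       (fst s1, (snd s1)(int (n * n) + int j := best_vec n s j / sqrt (snd s (-2))))"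
      by (rule big_step_RSetI) (simp only: e x)
    then show "\<exists>t s2. big_step (RSet (addr_best 4) (RDiv (RR (addr_best 4)) (RSqrt (RR (IC (-2)))))) s1 t s2 \<and> t \<le> 1 \<and>
       snd s2 = (snd s1)(int (n * n) + int j := best_vec n s j / sqrt (snd s (-2)))" by fastforce
  qed simp_all
  then obtain t s' where 1: "big_step normalize_prog s t s'" "t \<le> n * (1 + 2) + 2"
     "\<forall>j<n. snd s' (int (n * n) + int j) = best_vec n s j / sqrt (snd s (-2))" by blast
  have "output_vec n s' = (\<lambda>j. best_vec n s j / sqrt (snd s (-2)))"
  proof
    fix j show "output_vec n s' j = best_vec n s j / sqrt (snd s (-2))"
      using 1(3) by (simp add: output_vec_def mem_vec_def)
  qed
  then show ?thesis using 1 by (intro exI[of _ t] exI[of _ s']) auto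
qed

definition basic_cands :: com where
  "basic_cands = set_unit_cand ;; eval_candidate ;; set_row_cand ;; eval_candidate"

definition power_cands :: com where
  "power_cands = power_iter ;; window_cands"

definition outer_body :: com where
  "outer_body = basic_cands ;; power_cands ;; ISet 8 (IAdd (IR 8) (IR 0))"

lemma basic_cands_spec:
  assumes k1: "1 \<le> k" and r0: "fst s 0 = int n" and r1: "fst s 1 = int k" and r2: "fst s 2 = int (n * n)"
    and r3: "fst s 3 = int i" and i: "i < n" and r8: "fst s 8 = int (i * n)"
    and mA: "mem_matrix n A s" and G: "best_stored n k A X s"
  shows "\<exists>t s'. big_step basic_cands s t s' \<and> t \<le> 12 * n * n + 40 * n + 34 \<and>
     (\<forall>r. r \<notin> {4, 5, 6, 7, 12, 13} \<longrightarrow> fst s' r = fst s r) \<and>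
     mem_matrix n A s' \<and> best_stored n k A (insert (row_top n k A i) (insert (unit_vec i) X)) s'"
proof -
  have nb: "(-1::int) < int (n * n)" "(-2::int) < int (n * n)" by (rule neg_less_int)+
  obtain t1 s1 where 1: "big_step set_unit_cand s t1 s1" "t1 \<le> n * 4 + 2" "fst s1 = (fst s)(4 := int n)"
     "cand_vec n s1 = unit_vec i"
     "\<forall>a. (a < int (n * n) + int n \<or> int (n * n) + int n + int n \<le> a) \<longrightarrow> snd s1 a = snd s a"
    using set_unit_cand_spec[OF r0 r2 r3 i] by blast
  have rr1: "fst s1 0 = int n" "fst s1 2 = int (n * n)" using 1(3) r0 r2 by auto
  have mA1: "mem_matrix n A s1" by (rule mem_matrix_frame[OF mA]) (use 1(5) in simp)
  have G1: "best_stored n k A X s1" by (rule best_stored_frame[OF G]) (use 1(5) nb in simp_all)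
  have sp1: "norm0 n (cand_vec n s1) \<le> k" using 1(4) norm0_unit_vec[OF i] k1 by simp
  obtain t2 s2 where 2: "big_step eval_candidate s1 t2 s2" "t2 \<le> 3 * n * n + 13 * n + 14"
     "best_stored n k A (insert (unit_vec i) X) s2" "\<forall>r. r \<notin> {7, 12, 13} \<longrightarrow> fst s2 r = fst s1 r"
     "\<forall>a. a \<notin> {-1, -2, -3, -4, -5} \<and> (a < int (n * n) \<or> int (n * n) + int n \<le> a) \<longrightarrow> snd s2 a = snd s1 a"
    using eval_candidate_spec[OF rr1 mA1 G1 sp1] 1(4) by auto
  have rr2: "fst s2 0 = int n" "fst s2 1 = int k" "fst s2 2 = int (n * n)" "fst s2 8 = int (i * n)"
    using 2(4) 1(3) r0 r1 r2 r8 by auto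
  have mA2: "mem_matrix n A s2" by (rule mem_matrix_frame[OF mA1]) (use 2(5) in auto)
  obtain t3 s3 where 3: "big_step set_row_cand s2 t3 s3" "t3 \<le> n * (n * 6 + 10) + 4"
     "\<forall>r. r \<notin> {4, 5, 6} \<longrightarrow> fst s3 r = fst s2 r" "cand_vec n s3 = row_top n k A i"
     "\<forall>a. (a < int (n * n) + int n \<or> int (n * n) + int n + int n + int n \<le> a) \<longrightarrow> snd s3 a = snd s2 a"
    using set_row_cand_spec[OF rr2 i mA2] by blast
  have rr3: "fst s3 0 = int n" "fst s3 2 = int (n * n)" using 3(3) rr2 by auto
  have mA3: "mem_matrix n A s3" by (rule mem_matrix_frame[OF mA2]) (use 3(5) in simp)
  have G3: "best_stored n k A (insert (unit_vec i) X) s3"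
    by (rule best_stored_frame[OF 2(3)]) (use 3(5) nb in simp_all)
  have sp3: "norm0 n (cand_vec n s3) \<le> k" using 3(4) norm0_row_top by simp
  obtain t4 s4 where 4: "big_step eval_candidate s3 t4 s4" "t4 \<le> 3 * n * n + 13 * n + 14"
     "best_stored n k A (insert (row_top n k A i) (insert (unit_vec i) X)) s4"
     "\<forall>r. r \<notin> {7, 12, 13} \<longrightarrow> fst s4 r = fst s3 r"
     "\<forall>a. a \<notin> {-1, -2, -3, -4, -5} \<and> (a < int (n * n) \<or> int (n * n) + int n \<le> a) \<longrightarrow> snd s4 a = snd s3 a"
    using eval_candidate_spec[OF rr3 mA3 G3 sp3] 3(4) by auto
  have "big_step basic_cands s (t1 + (t2 + (t3 + t4))) s4" unfolding basic_cands_def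
    by (rule big_step.Seq[OF 1(1) big_step.Seq[OF 2(1) big_step.Seq[OF 3(1) 4(1)]]])
  moreover have "t1 + (t2 + (t3 + t4)) \<le> 12 * n * n + 40 * n + 34"
    using 1(2) 2(2) 3(2) 4(2) by (simp add: algebra_simps)
  moreover have "mem_matrix n A s4" by (rule mem_matrix_frame[OF mA3]) (use 4(5) in auto)
  moreover have "\<forall>r. r \<notin> {4, 5, 6, 7, 12, 13} \<longrightarrow> fst s4 r = fst s r"
    using 4(4) 3(3) 2(4) 1(3) by auto
  ultimately show ?thesis using 4(3) by blast
qed

lemma power_cands_spec:
  assumes r0: "fst s 0 = int n" and r1: "fst s 1 = int k" and r2: "fst s 2 = int (n * n)"
    and r3: "fst s 3 = int i" and i: "i < n" and r10: "fst s 10 = int (5 * n)"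
    and mA: "mem_matrix n A s" and G: "best_stored n k A X s"
  shows "\<exists>t s'. big_step power_cands s t s' \<and> t \<le> 18 * n ^ 3 + 63 * n\<^sup>2 + 57 * n + 6 \<and>
     (\<forall>r. r \<notin> {4, 7, 9, 11, 12, 13} \<longrightarrow> fst s' r = fst s r) \<and> mem_matrix n A s' \<and>
     best_stored n k A (X \<union> {window n k t (pow_vec n A (unit_vec i) (5 * n)) | t. t < n}) s'"
proof -
  have nb: "(-1::int) < int (n * n)" "(-2::int) < int (n * n)" by (rule neg_less_int)+
  obtain t1 s1 where 1: "big_step power_iter s t1 s1"
     "t1 \<le> (n * 4 + 2) + (5 * n) * ((3 * n * n + 9 * n + 5) + 2) + 2"
     "\<forall>r. r \<notin> {4, 7, 9, 12, 13} \<longrightarrow> fst s1 r = fst s r" "iter_vec n s1 = pow_vec n A (unit_vec i) (5 * n)"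
     "\<forall>a. (a < int (n * n) + int n + int n \<or> int (n * n) + int n + int n + int n + int n \<le> a) \<longrightarrow> snd s1 a = snd s a"
    using power_iter_spec[OF r0 r2 r3 i r10 mA] by blast
  have rr1: "fst s1 0 = int n" "fst s1 1 = int k" "fst s1 2 = int (n * n)" using 1(3) r0 r1 r2 by auto
  have mA1: "mem_matrix n A s1" by (rule mem_matrix_frame[OF mA]) (use 1(5) in simp)
  have G1: "best_stored n k A X s1" by (rule best_stored_frame[OF G]) (use 1(5) nb in simp_all)
  obtain t2 s2 where 2: "big_step window_cands s1 t2 s2" "t2 \<le> n * (3 * n * n + 18 * n + 18) + 2"
     "best_stored n k A (X \<union> {window n k t (iter_vec n s1) | t. t < n}) s2"
     "\<forall>r. r \<notin> {4, 7, 11, 12, 13} \<longrightarrow> fst s2 r = fst s1 r"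
     "\<forall>a. a \<notin> {-1, -2, -3, -4, -5} \<and> (a < int (n * n) \<or> int (n * n) + int n + int n \<le> a) \<longrightarrow> snd s2 a = snd s1 a"
    using window_cands_spec[OF rr1 mA1 G1] by blast
  have "big_step power_cands s (t1 + t2) s2" unfolding power_cands_def by (rule big_step.Seq[OF 1(1) 2(1)])
  moreover have "t1 + t2 \<le> 18 * n ^ 3 + 63 * n\<^sup>2 + 57 * n + 6"
    using 1(2) 2(2) by (simp add: algebra_simps power2_eq_square power3_eq_cube)
  moreover have "mem_matrix n A s2" by (rule mem_matrix_frame[OF mA1]) (use 2(5) in auto)
  moreover have "\<forall>r. r \<notin> {4, 7, 9, 11, 12, 13} \<longrightarrow> fst s2 r = fst s r" using 2(4) 1(3) by auto
  moreover have "best_stored n k A (X \<union> {window n k t (pow_vec n A (unit_vec i) (5 * n)) | t. t < n}) s2"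
    using 2(3) 1(4) by simp
  ultimately show ?thesis by blast
qed

lemma outer_body_spec:
  assumes k1: "1 \<le> k" and r0: "fst s 0 = int n" and r1: "fst s 1 = int k" and r2: "fst s 2 = int (n * n)"
    and r3: "fst s 3 = int i" and i: "i < n" and r8: "fst s 8 = int (i * n)" and r10: "fst s 10 = int (5 * n)"
    and mA: "mem_matrix n A s" and G: "best_stored n k A X s"
  shows "\<exists>t s'. big_step outer_body s t s' \<and> t \<le> 18 * n ^ 3 + 75 * n\<^sup>2 + 97 * n + 41 \<and>
     (\<forall>r. r \<notin> {4, 5, 6, 7, 8, 9, 11, 12, 13} \<longrightarrow> fst s' r = fst s r) \<and> fst s' 8 = int (Suc i * n) \<and>
     mem_matrix n A s' \<and>
     best_stored n k A (X \<union> {unit_vec i, row_top n k A i} \<union> {window n k t (pow_vec n A (unit_vec i) (5 * n)) | t. t < n}) s'"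
proof -
  obtain t1 s1 where 1: "big_step basic_cands s t1 s1" "t1 \<le> 12 * n * n + 40 * n + 34"
     "\<forall>r. r \<notin> {4, 5, 6, 7, 12, 13} \<longrightarrow> fst s1 r = fst s r" "mem_matrix n A s1"
     "best_stored n k A (insert (row_top n k A i) (insert (unit_vec i) X)) s1"
    using basic_cands_spec[OF k1 r0 r1 r2 r3 i r8 mA G] by blast
  have rr1: "fst s1 0 = int n" "fst s1 1 = int k" "fst s1 2 = int (n * n)" "fst s1 3 = int i"
    "fst s1 8 = int (i * n)" "fst s1 10 = int (5 * n)"
    using 1(3) r0 r1 r2 r3 r8 r10 by auto
  obtain t2 s2 where 2: "big_step power_cands s1 t2 s2" "t2 \<le> 18 * n ^ 3 + 63 * n\<^sup>2 + 57 * n + 6"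
     "\<forall>r. r \<notin> {4, 7, 9, 11, 12, 13} \<longrightarrow> fst s2 r = fst s1 r" "mem_matrix n A s2"
     "best_stored n k A (insert (row_top n k A i) (insert (unit_vec i) X) \<union>
        {window n k t (pow_vec n A (unit_vec i) (5 * n)) | t. t < n}) s2"
    using power_cands_spec[OF rr1(1,2,3,4) i rr1(6) 1(4,5)] by blast
  define s3 where "s3 = ((fst s2)(8 := fst s2 8 + fst s2 0), snd s2)"
  have "big_step (ISet 8 (IAdd (IR 8) (IR 0))) s2 1 s3" by (rule big_step_ISetI) (simp add: s3_def)
  then have "big_step outer_body s (t1 + (t2 + 1)) s3" unfolding outer_body_def
    by (rule big_step.Seq[OF 1(1) big_step.Seq[OF 2(1)]])
  moreover have "t1 + (t2 + 1) \<le> 18 * n ^ 3 + 75 * n\<^sup>2 + 97 * n + 41"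
    using 1(2) 2(2) by (simp add: power2_eq_square)
  moreover have "\<forall>r. r \<notin> {4, 5, 6, 7, 8, 9, 11, 12, 13} \<longrightarrow> fst s3 r = fst s r"
    using 2(3) 1(3) by (auto simp: s3_def)
  moreover have "fst s3 8 = int (Suc i * n)" using 2(3) rr1 by (simp add: s3_def algebra_simps)
  moreover have "mem_matrix n A s3" using 2(4) by (simp add: s3_def mem_matrix_def)
  moreover have "insert (row_top n k A i) (insert (unit_vec i) X) = X \<union> {unit_vec i, row_top n k A i}"
    by auto
  then have "best_stored n k A (X \<union> {unit_vec i, row_top n k A i} \<union>
      {window n k t (pow_vec n A (unit_vec i) (5 * n)) | t. t < n}) s3"
    using 2(5) by (simp add: s3_def)
  ultimately show ?thesis by blast
qed

definition sparse_pca_prog :: com where "sparse_pca_prog = init_prog ;; for_loop 3 (IR 0) outer_body ;; normalize_prog"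

lemma outer_loop_spec:
  assumes k1: "1 \<le> k" and r0: "fst s 0 = int n" and r1: "fst s 1 = int k" and r2: "fst s 2 = int (n * n)"
    and r8: "fst s 8 = 0" and r10: "fst s 10 = int (5 * n)" and mA: "mem_matrix n A s" and G: "best_stored n k A {} s"
  shows "\<exists>t s'. big_step (for_loop 3 (IR 0) outer_body) s t s' \<and> t \<le> n * ((18 * n ^ 3 + 75 * n\<^sup>2 + 97 * n + 41) + 2) + 2 \<and>
     fst s' 0 = int n \<and> fst s' 2 = int (n * n) \<and> best_stored n k A (candidates n k A n) s'"
proof -
  define I where "I i s1 \<longleftrightarrow> fst s1 0 = int n \<and> fst s1 1 = int k \<and> fst s1 2 = int (n * n) \<and>
     fst s1 8 = int (i * n) \<and> fst s1 10 = int (5 * n) \<and> mem_matrix n A s1 \<and> best_stored n k A (candidates n k A i) s1" for i s1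
  have "\<exists>t s'. big_step (for_loop 3 (IR 0) outer_body) s t s' \<and> t \<le> n * ((18 * n ^ 3 + 75 * n\<^sup>2 + 97 * n + 41) + 2) + 2 \<and> I n s' \<and> fst s' 3 = int n"
  proof (rule for_loop_bound)
    have "candidates n k A 0 = {}" by (simp add: candidates_def)
    moreover have "mem_matrix n A ((fst s)(3 := 0), snd s)" using mA by (simp add: mem_matrix_def)
    ultimately show "I 0 ((fst s)(3 := 0), snd s)" using r0 r1 r2 r8 r10 G by (simp add: I_def)
  next
    fix i s1 assume i: "i < n" and I: "I i s1" and c: "fst s1 3 = int i"
    have h: "fst s1 0 = int n" "fst s1 1 = int k" "fst s1 2 = int (n * n)" "fst s1 8 = int (i * n)"
      "fst s1 10 = int (5 * n)" "mem_matrix n A s1" "best_stored n k A (candidates n k A i) s1" using I by (auto simp: I_def)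
    obtain t s2 where 2: "big_step outer_body s1 t s2" "t \<le> (18 * n ^ 3 + 75 * n\<^sup>2 + 97 * n + 41)"
      "\<forall>r. r \<notin> {4, 5, 6, 7, 8, 9, 11, 12, 13} \<longrightarrow> fst s2 r = fst s1 r" "fst s2 8 = int (Suc i * n)"
      "mem_matrix n A s2" "best_stored n k A (candidates n k A i \<union> {unit_vec i, row_top n k A i} \<union> {window n k t (pow_vec n A (unit_vec i) (5 * n)) | t. t < n}) s2"
      using outer_body_spec[OF k1 h(1,2,3) c i h(4,5,6,7)] by blast
    have "I (Suc i) ((fst s2)(3 := int i + 1), snd s2)"
      using 2(3,4,5,6) h by (simp add: I_def candidates_Suc mem_matrix_def)
    moreover have "fst s2 3 = int i" using 2(3) c by simp
    ultimately show "\<exists>t s'. big_step outer_body s1 t s' \<and> t \<le> (18 * n ^ 3 + 75 * n\<^sup>2 + 97 * n + 41) \<and> fst s' 3 = int i \<and>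
       I (Suc i) ((fst s')(3 := int i + 1), snd s')" using 2(1,2) by blast
  next
    fix i s1 assume "i \<le> n" "I i s1" "fst s1 3 = int i"
    then show "ieval (IR 0) s1 = int n" by (simp add: I_def)
  qed
  then show ?thesis by (auto simp: I_def)
qed

lemma init_state_facts:
  shows "fst (init_state n k A) 0 = int n" "fst (init_state n k A) 1 = int k"
    "snd (init_state n k A) (-1) = 0" "snd (init_state n k A) (-2) = 0"
    "mem_matrix n A (init_state n k A)"
proof -
  show "fst (init_state n k A) 0 = int n" "fst (init_state n k A) 1 = int k"
    "snd (init_state n k A) (-1) = 0" "snd (init_state n k A) (-2) = 0" by (simp_all add: init_state_def)
  show "mem_matrix n A (init_state n k A)" unfolding mem_matrix_def
  proof (intro allI impI)
    fix i j assume i: "i < n" and j: "j < n"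
    have lt: "i * n + j < n * n" using i j by (rule row_major_index_less)
    have d: "(i * n + j) div n = i" and m: "(i * n + j) mod n = j" using j by auto
    show "snd (init_state n k A) (int (i * n + j)) = A i j"
      using lt d m by (simp add: init_state_def del: of_nat_mult of_nat_add)
  qed
qed

lemma running_time_bound:
  fixes n :: nat
  assumes "1 \<le> n"
  shows "(n * 3 + 5) + (n * ((18 * n ^ 3 + 75 * n\<^sup>2 + 97 * n + 41) + 2) + 2) + (n * 3 + 2) \<le> 248 * n ^ 4"
proof -
  have e: "(n * 3 + 5) + (n * ((18 * n ^ 3 + 75 * n\<^sup>2 + 97 * n + 41) + 2) + 2) + (n * 3 + 2)
      = 18 * n ^ 4 + 75 * n ^ 3 + 97 * n\<^sup>2 + 49 * n + 9"
    by (simp add: algebra_simps power2_eq_square power3_eq_cube power4_eq_xxxx)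
  have "n ^ 1 \<le> n ^ 4" "n\<^sup>2 \<le> n ^ 4" "n ^ 3 \<le> n ^ 4" "1 \<le> n ^ 4"
    using assms by (intro power_increasing one_le_power; simp)+
  then show ?thesis unfolding e by simp
qed

lemma sparse_pca_prog_correct:
  assumes k1: "1 \<le> k" and kn: "k \<le> n" and psd: "sym_psd n A"
  shows "\<exists>t s'. big_step sparse_pca_prog (init_state n k A) t s' \<and> real t \<le> 248 * real n ^ 4 \<and>
         norm2 n (output_vec n s') = 1 \<and> norm0 n (output_vec n s') \<le> k \<and>
         quad n A (output_vec n s') \<ge> real n powr (-1/3) * sparse_opt n A k"
proof -
  let ?s0 = "init_state n k A"
  obtain t1 s1 where 1: "big_step init_prog ?s0 t1 s1" "t1 \<le> n * 3 + 5" "snd s1 = snd ?s0"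
     "\<forall>r. r \<notin> {2, 4, 8, 10} \<longrightarrow> fst s1 r = fst ?s0 r" "fst s1 2 = int (n * n)" "fst s1 8 = 0"
     "fst s1 10 = int (5 * n)"
    using init_prog_spec[OF init_state_facts(1)] by blast
  have r0: "fst s1 0 = int n" and r1: "fst s1 1 = int k" using 1(4) init_state_facts by auto
  have mA: "mem_matrix n A s1" using init_state_facts(5) 1(3) by (simp add: mem_matrix_def)
  have G: "best_stored n k A {} s1" using 1(3) init_state_facts(3,4) by (simp add: best_among_def)
  obtain t2 s2 where 2: "big_step (for_loop 3 (IR 0) outer_body) s1 t2 s2"
     "t2 \<le> n * ((18 * n ^ 3 + 75 * n\<^sup>2 + 97 * n + 41) + 2) + 2"
     "fst s2 0 = int n" "fst s2 2 = int (n * n)" "best_stored n k A (candidates n k A n) s2"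
    using outer_loop_spec[OF k1 r0 r1 1(5,6,7) mA G] by blast
  obtain t3 s3 where 3: "big_step normalize_prog s2 t3 s3" "t3 \<le> n * 3 + 2"
     "output_vec n s3 = (\<lambda>j. best_vec n s2 j / sqrt (snd s2 (-2)))"
    using normalize_prog_spec[OF 2(3,4)] by blast
  have "big_step sparse_pca_prog ?s0 (t1 + (t2 + t3)) s3" unfolding sparse_pca_prog_def
    by (rule big_step.Seq[OF 1(1) big_step.Seq[OF 2(1) 3(1)]])
  moreover have "t1 + (t2 + t3) \<le> 248 * n ^ 4"
    using 1(2) 2(2) 3(2) running_time_bound[of n] k1 kn by linarith
  then have "real (t1 + (t2 + t3)) \<le> 248 * real n ^ 4"
    by (metis of_nat_le_iff of_nat_mult of_nat_numeral of_nat_power)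
  ultimately show ?thesis
    using normalized_best_candidate[OF psd k1 kn 2(5), folded 3(3)] by blast
qed

theorem theorem1:
  shows "\<exists>(prog :: com) (c :: real) (d :: nat).
    \<forall>(n :: nat) (k :: nat) (A :: nat \<Rightarrow> nat \<Rightarrow> real).
      1 \<le> k \<longrightarrow> k \<le> n \<longrightarrow> sym_psd n A \<longrightarrow>
      (\<exists>t s'. big_step prog (init_state n k A) t s' \<and> real t \<le> c * real n ^ d \<and>
         norm2 n (output_vec n s') = 1 \<and> norm0 n (output_vec n s') \<le> k \<and>
         quad n A (output_vec n s') \<ge> real n powr (-1/3) * sparse_opt n A k)"
  by (rule exI[of _ sparse_pca_prog], rule exI[of _ "248::real"], rule exI[of _ "4::nat"], intro allI impI, rule sparse_pca_prog_correct)

end
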